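(* Let $F\in\mathbb{D}^{1,2}$ with $\mathbb{E}[F]=0$, $\operatorname{Var}(F)=1$, such that $Ff_z(F)+\mathbf 1\{F>z\}\in\mathbb{D}^{1,2}$ for all $z\in\mathbb{R}$ and $u:=\big(\frac{1}{\sqrt{p_kq_k}}D_kF\,|D_kL^{-1}F|\big)_{k\in\mathbb{N}}\in\operatorname{Dom}(\delta)$. Assume there exist a constant $A>0$ and increasing functions $\gamma_1,\gamma_2$ such that $\mathbb{E}[e^{tF}]<\infty$, $$\mathbb{E}\big[|1-\langle DF,-DL^{-1}F\rangle|\,e^{tF}\big]\le\gamma_1(t)\,\mathbb{E}[e^{tF}]\quad\text{and}\quad \mathbb{E}\big[|\delta(u)|\,e^{tF}\big]\le\gamma_2(t)\,\mathbb{E}[e^{tF}]$$ for all $0\le t\le A$. Then for $0\le t\le A$, $$\mathbb{E}[e^{tF}]\le\exp\Big\{\frac{t^2}{2}\big(1+\gamma_1(t)+\gamma_2(t)\big)\Big\},$$ and, for any $d_0\ge0$ and $0\le t\le A_0(d_0):=\max\{0\le s\le A:\frac{s^2}{2}(\gamma_1(s)+\gamma_2(s))\le d_0\}$, $$\mathbb{E}[e^{tF}]\le e^{d_0}e^{t^2/2}.$$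
   Context: $X=(X_k)_{k\in\mathbb{N}}$ are independent Rademacher variables with $\mathbb{P}(X_k=1)=p_k\in(0,1)$, $q_k=1-p_k$; $Y_k=(X_k-p_k+q_k)/(2\sqrt{p_kq_k})$. For $F=f(X)\in L^2(\Omega,\sigma(X),\mathbb{P})$, $F_k^\pm$ is $f$ with $X_k$ replaced by $\pm1$, $D_kF:=\sqrt{p_kq_k}(F_k^+-F_k^-)$. $\mathbb{D}^{1,2}=\{F\in L^2:\mathbb{E}\sum_k(D_kF)^2<\infty\}$. $\delta$ is the adjoint of $D$: $\mathbb{E}[\langle DG,u\rangle]=\mathbb{E}[G\delta(u)]$ for $G\in\mathbb{D}^{1,2}$, $\langle a,b\rangle=\sum_ka_kb_k$. With chaos expansion $F=\mathbb{E}F+\sum_{n\ge1}J_n(f_n)$ in the multiple integrals $J_n(f_n)=\sum f_n(i_1,\dots,i_n)Y_{i_1}\cdots Y_{i_n}\mathbf 1\{i_j\ne i_k, j\neq k\}$, $L^{-1}F:=-\sum_n\frac1nJ_n(f_n)$. $\Phi$, $p(w)$ are the standard normal distribution function and density; $f_z(w)=\Phi(w)(1-\Phi(z))/p(w)$ for $w\le z$, $f_z(w)=\Phi(z)(1-\Phi(w))/p(w)$ for $w>z$. *)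

theory Defs
  imports "HOL-Probability.Probability"
begin

text \<open>Canonical probability space of the independent Rademacher sequence:
  \<omega> :: nat \<Rightarrow> bool, with \<omega> k = True meaning X_k = 1 (probability p k).\<close>

definition Mrad :: "(nat \<Rightarrow> real) \<Rightarrow> (nat \<Rightarrow> bool) measure" where
  "Mrad p = PiM UNIV (\<lambda>k. measure_pmf (bernoulli_pmf (p k)))"

definition Xr :: "nat \<Rightarrow> (nat \<Rightarrow> bool) \<Rightarrow> real" where
  "Xr k \<omega> = (if \<omega> k then 1 else -1)"

definition Yr :: "(nat \<Rightarrow> real) \<Rightarrow> nat \<Rightarrow> (nat \<Rightarrow> bool) \<Rightarrow> real" where
  "Yr p k \<omega> = (Xr k \<omega> - p k + (1 - p k)) / (2 * sqrt (p k * (1 - p k)))"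

definition Dk :: "(nat \<Rightarrow> real) \<Rightarrow> nat \<Rightarrow> ((nat \<Rightarrow> bool) \<Rightarrow> real) \<Rightarrow> (nat \<Rightarrow> bool) \<Rightarrow> real" where
  "Dk p k F \<omega> = sqrt (p k * (1 - p k)) * (F (fun_upd \<omega> k True) - F (fun_upd \<omega> k False))"

definition L2 :: "(nat \<Rightarrow> real) \<Rightarrow> ((nat \<Rightarrow> bool) \<Rightarrow> real) \<Rightarrow> bool" where
  "L2 p F \<longleftrightarrow> F \<in> borel_measurable (Mrad p) \<and> integrable (Mrad p) (\<lambda>\<omega>. (F \<omega>)\<^sup>2)"

definition D12 :: "(nat \<Rightarrow> real) \<Rightarrow> ((nat \<Rightarrow> bool) \<Rightarrow> real) \<Rightarrow> bool" where
  "D12 p F \<longleftrightarrow> L2 p F \<and>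
     (\<integral>\<^sup>+\<omega>. (\<Sum>k. ennreal ((Dk p k F \<omega>)\<^sup>2)) \<partial>Mrad p) < \<infinity>"

definition L2proc :: "(nat \<Rightarrow> real) \<Rightarrow> (nat \<Rightarrow> (nat \<Rightarrow> bool) \<Rightarrow> real) \<Rightarrow> bool" where
  "L2proc p u \<longleftrightarrow> (\<forall>k. u k \<in> borel_measurable (Mrad p)) \<and>
     (\<integral>\<^sup>+\<omega>. (\<Sum>k. ennreal ((u k \<omega>)\<^sup>2)) \<partial>Mrad p) < \<infinity>"

definition ipair :: "(nat \<Rightarrow> real) \<Rightarrow> (nat \<Rightarrow> real) \<Rightarrow> real" where
  "ipair a b = (\<Sum>k. a k * b k)"

text \<open>div_rel p u du: u \<in> Dom(\<delta>) and du = \<delta>(u) (the adjoint of D):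
  E[\<langle>DG,u\<rangle>] = E[G \<delta>(u)] for all G \<in> D^{1,2}.\<close>
definition div_rel :: "(nat \<Rightarrow> real) \<Rightarrow> (nat \<Rightarrow> (nat \<Rightarrow> bool) \<Rightarrow> real) \<Rightarrow> ((nat \<Rightarrow> bool) \<Rightarrow> real) \<Rightarrow> bool" where
  "div_rel p u du \<longleftrightarrow> L2proc p u \<and> L2 p du \<and>
     (\<forall>G. D12 p G \<longrightarrow>
        (\<integral>\<omega>. ipair (\<lambda>k. Dk p k G \<omega>) (\<lambda>k. u k \<omega>) \<partial>Mrad p) = (\<integral>\<omega>. G \<omega> * du \<omega> \<partial>Mrad p))"

definition L2lim :: "(nat \<Rightarrow> real) \<Rightarrow> (nat \<Rightarrow> (nat \<Rightarrow> bool) \<Rightarrow> real) \<Rightarrow> ((nat \<Rightarrow> bool) \<Rightarrow> real) \<Rightarrow> bool" where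
  "L2lim p S G \<longleftrightarrow>
     ((\<lambda>N. \<integral>\<^sup>+\<omega>. ennreal ((S N \<omega> - G \<omega>)\<^sup>2) \<partial>Mrad p) \<longlongrightarrow> 0) sequentially"

text \<open>Truncation of the multiple integral J_n(f) to indices < N
  (sum over n-tuples of pairwise distinct indices, tuples represented as lists).\<close>
definition Jtrunc :: "(nat \<Rightarrow> real) \<Rightarrow> nat \<Rightarrow> (nat list \<Rightarrow> real) \<Rightarrow> nat \<Rightarrow> (nat \<Rightarrow> bool) \<Rightarrow> real" where
  "Jtrunc p n f N \<omega> =
     (\<Sum>is\<in>{is. length is = n \<and> distinct is \<and> set is \<subseteq> {..<N}}.
        f is * prod_list (map (\<lambda>i. Yr p i \<omega>) is))"

text \<open>is_J p n f G: G = J_n(f), the multiple integral as L^2 limit of its truncations.\<close>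
definition is_J :: "(nat \<Rightarrow> real) \<Rightarrow> nat \<Rightarrow> (nat list \<Rightarrow> real) \<Rightarrow> ((nat \<Rightarrow> bool) \<Rightarrow> real) \<Rightarrow> bool" where
  "is_J p n f G \<longleftrightarrow> G \<in> borel_measurable (Mrad p) \<and> L2lim p (Jtrunc p n f) G"

text \<open>Linv p F H: H = L^{-1} F, i.e. F = E F + \<Sum>_{n\<ge>1} J_n(f_n) (chaos expansion,
  convergence in L^2) and H = - \<Sum>_{n\<ge>1} (1/n) J_n(f_n).\<close>
definition Linv :: "(nat \<Rightarrow> real) \<Rightarrow> ((nat \<Rightarrow> bool) \<Rightarrow> real) \<Rightarrow> ((nat \<Rightarrow> bool) \<Rightarrow> real) \<Rightarrow> bool" where
  "Linv p F H \<longleftrightarrow> H \<in> borel_measurable (Mrad p) \<and>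
     (\<exists>f :: nat \<Rightarrow> nat list \<Rightarrow> real. \<exists>J :: nat \<Rightarrow> (nat \<Rightarrow> bool) \<Rightarrow> real.
        (\<forall>n\<ge>1. is_J p n (f n) (J n)) \<and>
        L2lim p (\<lambda>N \<omega>. (\<integral>\<omega>'. F \<omega>' \<partial>Mrad p) + (\<Sum>n\<in>{1..N}. J n \<omega>)) F \<and>
        L2lim p (\<lambda>N \<omega>. - (\<Sum>n\<in>{1..N}. J n \<omega> / real n)) H)"

definition Phi :: "real \<Rightarrow> real" where
  "Phi w = (LBINT x:{..w}. std_normal_density x)"

definition fz :: "real \<Rightarrow> real \<Rightarrow> real" where
  "fz z w = (if w \<le> z then Phi w * (1 - Phi z) / std_normal_density w
             else Phi z * (1 - Phi w) / std_normal_density w)"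

end

theory Submission
  imports Defs
begin

(* Stein's method for the moment generating function phi(t) = E[exp(t F)].
   The chaos expansion gives the integration by parts formula E[F G] = E <DG, -DL^{-1}F> for
   G in D^{1,2} (when E F = 0): each multiple integral satisfies n E[G J_n] = E <DG, DJ_n>, and by
   linearity this reduces to Walsh monomials, where it follows by resampling one coordinate.
   Take G = g(F) with g(x) = exp(s x), continued by its tangent line beyond a level L so that g is
   convex and Lipschitz.  The discrete chain rule D_k g(F) = g'(F) D_k F + error, with the error
   bounded by convexity by D_k g'(F) D_k F |D_k L^{-1}F| / sqrt(p_k q_k) = D_k g'(F) u_k, turns the
   formula into E[F g(F)] <= E[g'(F) <DF, -DL^{-1}F>] + E[g'(F) delta(u)], which the hypotheses bound
   by s (1 + gamma1(s) + gamma2(s)) phi(s).  Letting L -> infinity gives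
   phi'(s) <= s (1 + gamma1(s) + gamma2(s)) phi(s); as the gamma_i increase, integrating
   (log phi)' on [0, t] gives the first bound, and the second follows from it on the set defining
   A_0(d_0) and at its supremum by continuity of phi. *)

lemma square_add_le: "((a::real) + b)\<^sup>2 \<le> 2 * a\<^sup>2 + 2 * b\<^sup>2"
proof -
  have "0 \<le> (a - b)\<^sup>2" by simp
  then show ?thesis by (simp add: power2_eq_square algebra_simps)
qed

lemma abs_mult_le_weighted_sq:
  fixes u v e :: real
  assumes e: "e > 0"
  shows "\<bar>u * v\<bar> \<le> e / 2 * u\<^sup>2 + 1 / (2 * e) * v\<^sup>2"
proof -
  have "0 \<le> (e * \<bar>u\<bar> - \<bar>v\<bar>)\<^sup>2 / (2 * e)" using e by simp
  also have "(e * \<bar>u\<bar> - \<bar>v\<bar>)\<^sup>2 / (2 * e) = e / 2 * \<bar>u\<bar>\<^sup>2 + 1 / (2 * e) * \<bar>v\<bar>\<^sup>2 - \<bar>u\<bar> * \<bar>v\<bar>"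
    using e by (simp add: field_simps power2_eq_square)
  finally show ?thesis by (simp add: abs_mult)
qed

lemma summable_abs_mult_of_sq:
  fixes u v :: "nat \<Rightarrow> real"
  assumes "summable (\<lambda>k. (u k)\<^sup>2)" "summable (\<lambda>k. (v k)\<^sup>2)"
  shows "summable (\<lambda>k. \<bar>u k * v k\<bar>)"
proof (rule summable_comparison_test)
  show "\<exists>N. \<forall>n\<ge>N. norm \<bar>u n * v n\<bar> \<le> 1 / 2 * (u n)\<^sup>2 + 1 / 2 * (v n)\<^sup>2"
    using abs_mult_le_weighted_sq[of 1] by auto
  show "summable (\<lambda>n. 1 / 2 * (u n)\<^sup>2 + 1 / 2 * (v n)\<^sup>2)"
    using assms by (intro summable_add summable_mult) auto
qed

lemma tendsto_zero_of_weighted_bound: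
  fixes x b :: "nat \<Rightarrow> real"
  assumes a: "a \<ge> 0" and b: "b \<longlonglongrightarrow> 0" and bd: "\<And>N e. e > 0 \<Longrightarrow> \<bar>x N\<bar> \<le> e * a + b N / e"
  shows "x \<longlonglongrightarrow> 0"
proof (rule LIMSEQ_I)
  fix r :: real assume r: "r > 0"
  define e where "e = r / (2 * (a + 1))"
  have e: "e > 0" using r a by (simp add: e_def)
  have ea: "e * a < r / 2"
  proof -
    have "e * a = r / 2 * (a / (a + 1))" using a by (simp add: e_def field_simps)
    also have "\<dots> < r / 2 * 1" using r a by (intro mult_strict_left_mono) auto
    finally show ?thesis by simp
  qed
  have "e * r / 2 > 0" using e r by simp
  from LIMSEQ_D[OF b this] obtain N0 where N0: "\<And>N. N \<ge> N0 \<Longrightarrow> \<bar>b N\<bar> < e * r / 2" by auto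
  show "\<exists>no. \<forall>n\<ge>no. norm (x n - 0) < r"
  proof (intro exI allI impI)
    fix n assume "N0 \<le> n"
    then have "\<bar>b n\<bar> < e * r / 2" by (rule N0)
    then have h: "b n / e < r / 2" using e by (simp add: field_simps)
    have "\<bar>x n\<bar> < r" using bd[OF e, of n] ea h by linarith
    then show "norm (x n - 0) < r" by simp
  qed
qed

lemma exp_tangent_le: "exp u + exp u * (t - u) \<le> exp (t::real)"
proof -
  have "1 + (t - u) \<le> exp (t - u)" by (rule exp_ge_add_one_self)
  then have "exp u * (1 + (t - u)) \<le> exp u * exp (t - u)" by (intro mult_left_mono) auto
  then show ?thesis by (simp add: exp_diff algebra_simps)
qed

lemma abs_exp_diff_le: "(a::real) \<le> C \<Longrightarrow> b \<le> C \<Longrightarrow> \<bar>exp a - exp b\<bar> \<le> exp C * \<bar>a - b\<bar>"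
proof -
  assume a: "a \<le> C" and b: "b \<le> C"
  have k: "exp v - exp w \<le> exp C * (v - w)" if "w \<le> v" "v \<le> C" for v w
  proof -
    have "exp v + exp v * (w - v) \<le> exp w" by (rule exp_tangent_le)
    then have "exp v - exp w \<le> exp v * (v - w)" by (simp add: algebra_simps)
    also have "\<dots> \<le> exp C * (v - w)" using that by (intro mult_right_mono) auto
    finally show ?thesis .
  qed
  show ?thesis
  proof (cases "b \<le> a")
    case True then show ?thesis using k[OF True a] by (simp add: abs_le_iff)
  next
    case False then show ?thesis using k[of a b] b by (simp add: abs_le_iff)
  qed
qed

lemma exp_mult_le_endpoints:
  fixes t a b x :: real
  assumes "a \<le> t" "t \<le> b"
  shows "exp (t * x) \<le> exp (a * x) + exp (b * x)"
proof (cases "x \<ge> 0")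
  case True
  then have "t * x \<le> b * x" using assms by (intro mult_right_mono) auto
  then have "exp (t * x) \<le> exp (b * x)" by simp
  then show ?thesis using exp_gt_zero[of "a * x"] by linarith
next
  case False
  then have "t * x \<le> a * x" using assms by (intro mult_right_mono_neg) auto
  then have "exp (t * x) \<le> exp (a * x)" by simp
  then show ?thesis using exp_gt_zero[of "b * x"] by linarith
qed

lemma abs_exp_diff_quotient_le:
  fixes y s x d :: real
  assumes d: "\<bar>y - s\<bar> \<le> d" and ys: "y \<noteq> s"
  shows "\<bar>(exp (y * x) - exp (s * x)) / (y - s)\<bar> \<le> \<bar>x\<bar> * exp ((s - d) * x) + \<bar>x\<bar> * exp ((s + d) * x)"
proof -
  define C where "C = max (y * x) (s * x)"
  have "\<bar>exp (y * x) - exp (s * x)\<bar> \<le> exp C * \<bar>y * x - s * x\<bar>"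
    unfolding C_def by (rule abs_exp_diff_le) auto
  also have "\<bar>y * x - s * x\<bar> = \<bar>x\<bar> * \<bar>y - s\<bar>" by (simp add: left_diff_distrib[symmetric] abs_mult)
  finally have a: "\<bar>exp (y * x) - exp (s * x)\<bar> \<le> exp C * (\<bar>x\<bar> * \<bar>y - s\<bar>)" .
  have ypos: "\<bar>y - s\<bar> > 0" using ys by simp
  have "\<bar>(exp (y * x) - exp (s * x)) / (y - s)\<bar> = \<bar>exp (y * x) - exp (s * x)\<bar> / \<bar>y - s\<bar>" by (simp add: abs_divide)
  also have "\<dots> \<le> exp C * (\<bar>x\<bar> * \<bar>y - s\<bar>) / \<bar>y - s\<bar>" using a ypos by (intro divide_right_mono) auto
  also have "\<dots> = exp C * \<bar>x\<bar>" using ypos by simp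
  also have "exp C \<le> exp ((s - d) * x) + exp ((s + d) * x)"
  proof -
    have "exp (y * x) \<le> exp ((s - d) * x) + exp ((s + d) * x)" using d by (intro exp_mult_le_endpoints) auto
    moreover have "exp (s * x) \<le> exp ((s - d) * x) + exp ((s + d) * x)" using d by (intro exp_mult_le_endpoints) auto
    ultimately show ?thesis unfolding C_def by (simp add: max_def)
  qed
  then have "exp C * \<bar>x\<bar> \<le> (exp ((s - d) * x) + exp ((s + d) * x)) * \<bar>x\<bar>" by (intro mult_right_mono) auto
  finally show ?thesis by (simp add: algebra_simps)
qed

lemma exp_diff_quotient_tendsto:
  fixes Z :: "nat \<Rightarrow> real"
  assumes "\<And>n. Z n \<noteq> s" "Z \<longlonglongrightarrow> s"
  shows "(\<lambda>n. (exp (Z n * x) - exp (s * x)) / (Z n - s)) \<longlonglongrightarrow> x * exp (s * x)"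
proof -
  have "((\<lambda>y. exp (y * x)) has_real_derivative exp (s * x) * x) (at s)"
    by (auto intro!: derivative_eq_intros)
  then have "((\<lambda>y. (exp (y * x) - exp (s * x)) / (y - s)) \<longlongrightarrow> exp (s * x) * x) (at s)"
    by (simp add: has_field_derivative_iff)
  then have "(\<lambda>n. (exp (Z n * x) - exp (s * x)) / (Z n - s)) \<longlonglongrightarrow> exp (s * x) * x"
    using LIMSEQ_SEQ_conv[THEN iffD2] assms by blast
  then show ?thesis by (simp add: mult.commute)
qed

lemma abs_mult_exp_le:
  fixes x r A :: real
  assumes r: "0 \<le> r" "r < A"
  shows "\<bar>x\<bar> * exp (r * x) \<le> \<bar>x\<bar> + exp (A * x) / (A - r)"
proof (cases "x \<le> 0")
  case True
  then have "exp (r * x) \<le> 1" using r by (simp add: mult_nonneg_nonpos)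
  then have "\<bar>x\<bar> * exp (r * x) \<le> \<bar>x\<bar>" by (simp add: mult_left_le)
  moreover have "exp (A * x) / (A - r) \<ge> 0" using r by simp
  ultimately show ?thesis by linarith
next
  case False
  have "(A - r) * x \<le> exp ((A - r) * x)" using exp_ge_add_one_self[of "(A - r) * x"] by linarith
  then have "x \<le> exp ((A - r) * x) / (A - r)" using r by (simp add: field_simps)
  then have "x * exp (r * x) \<le> exp ((A - r) * x) / (A - r) * exp (r * x)" by (intro mult_right_mono) auto
  also have "\<dots> = exp (A * x) / (A - r)" by (simp add: exp_add[symmetric] algebra_simps)
  finally show ?thesis using False by simp
qed

lemma le_exp_sq_of_log_deriv_le:
  fixes \<phi> \<phi>' :: "real \<Rightarrow> real" and c t :: real
  assumes t: "0 < t" and cont: "continuous_on {0..t} \<phi>" and pos: "\<And>y. 0 \<le> y \<Longrightarrow> y \<le> t \<Longrightarrow> \<phi> y > 0"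
    and \<phi>0: "\<phi> 0 = 1"
    and deriv: "\<And>y. 0 < y \<Longrightarrow> y < t \<Longrightarrow> (\<phi> has_real_derivative \<phi>' y) (at y)"
    and bound: "\<And>y. 0 < y \<Longrightarrow> y < t \<Longrightarrow> \<phi>' y \<le> c * y * \<phi> y"
  shows "\<phi> t \<le> exp (c * t\<^sup>2 / 2)"
proof -
  define \<psi> where "\<psi> y = ln (\<phi> y) - c * y\<^sup>2 / 2" for y
  have "continuous_on {0..t} \<psi>"
    unfolding \<psi>_def[abs_def] using cont pos by (intro continuous_intros continuous_on_ln) force+
  moreover have \<psi>_deriv: "(\<psi> has_real_derivative (\<phi>' y / \<phi> y - c * y)) (at y)" if "0 < y" "y < t" for y
    unfolding \<psi>_def[abs_def] using deriv[OF that] pos[of y] that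
    by (auto intro!: derivative_eq_intros simp: field_simps power2_eq_square)
  ultimately obtain l z where z: "0 < z" "z < t" and dz: "(\<psi> has_real_derivative l) (at z)"
    and eq: "\<psi> t - \<psi> 0 = (t - 0) * l"
    using MVT[OF t] by (metis real_differentiable_def)
  have "\<phi>' z / \<phi> z \<le> c * z"
    using bound[OF z] pos[of z] z by (simp add: divide_le_eq algebra_simps)
  then have "l \<le> 0"
    using DERIV_unique[OF dz \<psi>_deriv[OF z]] by simp
  then have "t * l \<le> 0"
    using t by (simp add: mult_nonneg_nonpos)
  then have "\<psi> t \<le> \<psi> 0"
    using eq by simp
  then have "exp (ln (\<phi> t)) \<le> exp (c * t\<^sup>2 / 2)"
    unfolding \<psi>_def by (simp add: \<phi>0)
  then show ?thesis
    using pos[of t] t by simp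
qed

lemma le_at_right_endpoint:
  fixes f g :: "real \<Rightarrow> real"
  assumes "a < b" "continuous_on {a..b} f" "continuous_on {a..b} g" "\<And>y. a \<le> y \<Longrightarrow> y < b \<Longrightarrow> f y \<le> g y"
  shows "f b \<le> g b"
proof (rule tendsto_le[OF trivial_limit_at_left_real])
  show "(f \<longlongrightarrow> f b) (at_left b)" "(g \<longlongrightarrow> g b) (at_left b)"
    using assms(1-3) by (auto simp: continuous_on_def at_within_Icc_at_left[symmetric])
  show "eventually (\<lambda>y. f y \<le> g y) (at_left b)"
    using eventually_at_left_real[OF assms(1)] by eventually_elim (use assms(4) in auto)
qed

section \<open>The exponential continued linearly\<close>

text \<open>\<open>trunc_exp s L\<close> is convex and Lipschitz, with derivative \<open>trunc_exp' s L\<close>; unlike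
  \<open>\<lambda>x. exp (s * x)\<close> it maps \<open>D12\<close> into itself.\<close>

definition trunc_exp :: "real \<Rightarrow> real \<Rightarrow> real \<Rightarrow> real" where
  "trunc_exp s L x = (if x \<le> L then exp (s * x) else exp (s * L) * (1 + s * (x - L)))"

definition trunc_exp' :: "real \<Rightarrow> real \<Rightarrow> real \<Rightarrow> real" where
  "trunc_exp' s L x = s * exp (s * min x L)"

lemma trunc_exp_tangent_le:
  assumes s: "s \<ge> 0"
  shows "trunc_exp s L x + trunc_exp' s L x * (y - x) \<le> trunc_exp s L y"
proof (cases "x \<le> L")
  case x: True
  show ?thesis
  proof (cases "y \<le> L")
    case True
    then show ?thesis using x exp_tangent_le[of "s * x" "s * y"]
      by (simp add: trunc_exp_def trunc_exp'_def min_def algebra_simps)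
  next
    case False
    have a: "exp (s * x) + exp (s * x) * (s * L - s * x) \<le> exp (s * L)" by (rule exp_tangent_le)
    have b: "exp (s * x) \<le> exp (s * L)" using x s by (simp add: mult_left_mono)
    have c: "s * exp (s * x) * (y - L) \<le> s * exp (s * L) * (y - L)"
      using b False s by (intro mult_right_mono mult_left_mono) auto
    have "trunc_exp s L x + trunc_exp' s L x * (y - x) = exp (s * x) + exp (s * x) * (s * L - s * x) + s * exp (s * x) * (y - L)"
      using x by (simp add: trunc_exp_def trunc_exp'_def min_def algebra_simps)
    also have "\<dots> \<le> exp (s * L) + s * exp (s * L) * (y - L)" using a c by linarith
    also have "\<dots> = trunc_exp s L y" using False by (simp add: trunc_exp_def algebra_simps)
    finally show ?thesis .
  qed
next
  case x: False
  show ?thesis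
  proof (cases "y \<le> L")
    case True
    have a: "exp (s * L) + exp (s * L) * (s * y - s * L) \<le> exp (s * y)" by (rule exp_tangent_le)
    have "trunc_exp s L x + trunc_exp' s L x * (y - x) = exp (s * L) + exp (s * L) * (s * y - s * L)"
      using x by (simp add: trunc_exp_def trunc_exp'_def min_def algebra_simps)
    also have "\<dots> \<le> trunc_exp s L y" using a True by (simp add: trunc_exp_def)
    finally show ?thesis .
  next
    case False
    then show ?thesis using x by (simp add: trunc_exp_def trunc_exp'_def min_def algebra_simps)
  qed
qed

lemma mono_trunc_exp': "s \<ge> 0 \<Longrightarrow> x \<le> y \<Longrightarrow> trunc_exp' s L x \<le> trunc_exp' s L y"
  unfolding trunc_exp'_def by (intro mult_left_mono) (auto simp: min_def mult_left_mono)

lemma trunc_exp'_nonneg: "s \<ge> 0 \<Longrightarrow> trunc_exp' s L x \<ge> 0"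
  unfolding trunc_exp'_def by simp

lemma trunc_exp'_le_exp: "s \<ge> 0 \<Longrightarrow> trunc_exp' s L x \<le> s * exp (s * x)"
  unfolding trunc_exp'_def by (intro mult_left_mono) (auto simp: min_def mult_left_mono)

lemma trunc_exp'_le_const: "s \<ge> 0 \<Longrightarrow> trunc_exp' s L x \<le> s * exp (s * L)"
  unfolding trunc_exp'_def by (intro mult_left_mono) (auto simp: min_def mult_left_mono)

lemma trunc_exp_le_exp: "s \<ge> 0 \<Longrightarrow> trunc_exp s L x \<le> exp (s * x)"
proof -
  assume s: "s \<ge> 0"
  show ?thesis
  proof (cases "x \<le> L")
    case False
    have "1 + s * (x - L) \<le> exp (s * (x - L))" by (rule exp_ge_add_one_self)
    then have "exp (s * L) * (1 + s * (x - L)) \<le> exp (s * L) * exp (s * (x - L))" by (intro mult_left_mono) auto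
    then show ?thesis using False by (simp add: trunc_exp_def exp_add[symmetric] algebra_simps)
  qed (simp add: trunc_exp_def)
qed

lemma trunc_exp_pos: "s \<ge> 0 \<Longrightarrow> trunc_exp s L x > 0"
proof -
  assume s: "s \<ge> 0"
  show ?thesis
  proof (cases "x \<le> L")
    case False
    then have "s * (x - L) \<ge> 0" using s by simp
    then have "1 + s * (x - L) > 0" by linarith
    then show ?thesis using False by (simp add: trunc_exp_def)
  qed (simp add: trunc_exp_def)
qed

lemma trunc_exp_chain_rule_error:
  assumes s: "s \<ge> 0" and c: "c = a \<or> c = b"
  shows "\<bar>trunc_exp s L a - trunc_exp s L b - trunc_exp' s L c * (a - b)\<bar> \<le> (a - b) * (trunc_exp' s L a - trunc_exp' s L b)"
proof -
  have t1: "trunc_exp s L b + trunc_exp' s L b * (a - b) \<le> trunc_exp s L a" by (rule trunc_exp_tangent_le[OF s])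
  have t2: "trunc_exp s L a + trunc_exp' s L a * (b - a) \<le> trunc_exp s L b" by (rule trunc_exp_tangent_le[OF s])
  show ?thesis
  proof (cases "b \<le> a")
    case True
    have m: "trunc_exp' s L b \<le> trunc_exp' s L a" by (rule mono_trunc_exp'[OF s True])
    have u: "(trunc_exp' s L c - trunc_exp' s L b) * (a - b) \<ge> 0" "(trunc_exp' s L a - trunc_exp' s L c) * (a - b) \<ge> 0"
      using c m True by auto
    show ?thesis using t1 t2 u by (auto simp: abs_le_iff algebra_simps)
  next
    case False
    have m: "trunc_exp' s L a \<le> trunc_exp' s L b" using False by (intro mono_trunc_exp'[OF s]) auto
    have u: "(trunc_exp' s L c - trunc_exp' s L a) * (b - a) \<ge> 0" "(trunc_exp' s L b - trunc_exp' s L c) * (b - a) \<ge> 0"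
      using c m False by auto
    show ?thesis using t1 t2 u by (auto simp: abs_le_iff algebra_simps)
  qed
qed

lemma trunc_exp_lipschitz:
  assumes s: "s \<ge> 0"
  shows "\<bar>trunc_exp s L x - trunc_exp s L y\<bar> \<le> s * exp (s * L) * \<bar>x - y\<bar>"
proof -
  have t1: "trunc_exp s L y + trunc_exp' s L y * (x - y) \<le> trunc_exp s L x" by (rule trunc_exp_tangent_le[OF s])
  have t2: "trunc_exp s L x + trunc_exp' s L x * (y - x) \<le> trunc_exp s L y" by (rule trunc_exp_tangent_le[OF s])
  have b1: "0 \<le> trunc_exp' s L x" "trunc_exp' s L x \<le> s * exp (s * L)" "0 \<le> trunc_exp' s L y" "trunc_exp' s L y \<le> s * exp (s * L)"
    using s by (auto intro: trunc_exp'_nonneg trunc_exp'_le_const)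
  show ?thesis
  proof (cases "y \<le> x")
    case True
    have "trunc_exp' s L x * (x - y) \<le> s * exp (s * L) * (x - y)" using b1 True by (intro mult_right_mono) auto
    moreover have "0 \<le> trunc_exp' s L y * (x - y)" using b1 True by auto
    ultimately show ?thesis using t1 t2 True by (auto simp: abs_le_iff algebra_simps)
  next
    case False
    have "trunc_exp' s L y * (y - x) \<le> s * exp (s * L) * (y - x)" using b1 False by (intro mult_right_mono) auto
    moreover have "0 \<le> trunc_exp' s L x * (y - x)" using b1 False by auto
    ultimately show ?thesis using t1 t2 False by (auto simp: abs_le_iff algebra_simps)
  qed
qed

lemma trunc_exp'_lipschitz:
  assumes s: "s \<ge> 0"
  shows "\<bar>trunc_exp' s L x - trunc_exp' s L y\<bar> \<le> s * (s * exp (s * L)) * \<bar>x - y\<bar>"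
proof -
  have "\<bar>exp (s * min x L) - exp (s * min y L)\<bar> \<le> exp (s * L) * \<bar>s * min x L - s * min y L\<bar>"
    using s by (intro abs_exp_diff_le) (auto simp: mult_left_mono)
  also have "\<bar>s * min x L - s * min y L\<bar> \<le> s * \<bar>x - y\<bar>"
    using s by (simp add: right_diff_distrib[symmetric] abs_mult) (intro mult_left_mono, auto simp: min_def)
  finally have "\<bar>exp (s * min x L) - exp (s * min y L)\<bar> \<le> exp (s * L) * (s * \<bar>x - y\<bar>)"
    by (simp add: mult_left_mono)
  then have "s * \<bar>exp (s * min x L) - exp (s * min y L)\<bar> \<le> s * (exp (s * L) * (s * \<bar>x - y\<bar>))"
    using s by (intro mult_left_mono) auto
  moreover have "\<bar>trunc_exp' s L x - trunc_exp' s L y\<bar> = s * \<bar>exp (s * min x L) - exp (s * min y L)\<bar>"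
    unfolding trunc_exp'_def using s by (simp only: right_diff_distrib[symmetric] abs_mult abs_of_nonneg)
  moreover have "s * (exp (s * L) * (s * \<bar>x - y\<bar>)) = s * (s * exp (s * L)) * \<bar>x - y\<bar>"
    by (simp only: mult_ac)
  ultimately show ?thesis by simp
qed

section \<open>Square-summable sequences and processes\<close>

lemma ipair_finite_support: "(\<And>k. N \<le> k \<Longrightarrow> b k = 0) \<Longrightarrow> ipair a b = (\<Sum>k<N. a k * b k)"
  unfolding ipair_def by (rule suminf_finite) auto

lemma ipair_diff: "summable (\<lambda>k. \<bar>a k * b k\<bar>) \<Longrightarrow> summable (\<lambda>k. \<bar>a k * c k\<bar>) \<Longrightarrow>
   ipair a (\<lambda>k. b k - c k) = ipair a b - ipair a c"
  unfolding ipair_def by (subst suminf_diff) (auto intro: summable_rabs_cancel simp: algebra_simps)lemma ipair_sum: "finite I \<Longrightarrow> (\<And>i. i \<in> I \<Longrightarrow> summable (\<lambda>k. \<bar>a k * b i k\<bar>)) \<Longrightarrow>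
   ipair a (\<lambda>k. \<Sum>i\<in>I. b i k) = (\<Sum>i\<in>I. ipair a (b i))"
  unfolding ipair_def by (subst suminf_sum[symmetric]) (auto intro: summable_rabs_cancel simp: sum_distrib_left)

lemma ipair_mult_right: "summable (\<lambda>k. \<bar>a k * b k\<bar>) \<Longrightarrow> ipair a (\<lambda>k. r * b k) = r * ipair a b"
  unfolding ipair_def by (subst suminf_mult[symmetric]) (auto intro: summable_rabs_cancel simp: algebra_simps)

lemma ipair_commute: "ipair a b = ipair b a"
  unfolding ipair_def by (simp add: mult.commute)

lemma ipair_le_add:
  assumes le: "\<And>k. a k * b k \<le> c * (d k * b k) + e k * v k"
    and sa: "summable (\<lambda>k. \<bar>a k * b k\<bar>)" and sd: "summable (\<lambda>k. \<bar>d k * b k\<bar>)" and se: "summable (\<lambda>k. \<bar>e k * v k\<bar>)"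
  shows "ipair a b \<le> c * ipair d b + ipair e v"
proof -
  have sd': "summable (\<lambda>k. c * (d k * b k))" and se': "summable (\<lambda>k. e k * v k)"
    using summable_rabs_cancel[OF sd] summable_rabs_cancel[OF se] by (auto intro: summable_mult)
  have "ipair a b \<le> (\<Sum>k. c * (d k * b k) + e k * v k)"
    unfolding ipair_def using summable_rabs_cancel[OF sa] sd' se' by (intro suminf_le le summable_add)
  also have "\<dots> = c * ipair d b + ipair e v"
    unfolding ipair_def using sd' se' summable_rabs_cancel[OF sd] by (simp add: suminf_add[symmetric] suminf_mult)
  finally show ?thesis .
qed

lemma integrable_mult_bounded:
  fixes G R :: "'a \<Rightarrow> real"
  assumes "integrable M G" "R \<in> borel_measurable M" "\<And>x. \<bar>R x\<bar> \<le> C"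
  shows "integrable M (\<lambda>x. G x * R x)"
proof (rule Bochner_Integration.integrable_bound[where f="\<lambda>x. C * G x"])
  show "integrable M (\<lambda>x. C * G x)" using assms by auto
  show "(\<lambda>x. G x * R x) \<in> borel_measurable M" using assms by auto
  show "AE x in M. norm (G x * R x) \<le> norm (C * G x)"
  proof (intro AE_I2)
    fix x
    have "\<bar>R x\<bar> * \<bar>G x\<bar> \<le> C * \<bar>G x\<bar>" using assms(3)[of x] by (intro mult_right_mono) auto
    moreover have "C \<ge> 0" using assms(3)[of x] by linarith
    ultimately show "norm (G x * R x) \<le> norm (C * G x)" by (simp add: abs_mult mult.commute)
  qed
qed

lemma abs_integral_mult_le:
  fixes X Y :: "'a \<Rightarrow> real" and e :: real
  assumes X: "integrable M (\<lambda>\<omega>. (X \<omega>)\<^sup>2)" and Y: "integrable M (\<lambda>\<omega>. (Y \<omega>)\<^sup>2)"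
    and m: "X \<in> borel_measurable M" "Y \<in> borel_measurable M" and e: "e > 0"
  shows "\<bar>\<integral>\<omega>. X \<omega> * Y \<omega> \<partial>M\<bar> \<le> e / 2 * (\<integral>\<omega>. (X \<omega>)\<^sup>2 \<partial>M) + 1 / (2 * e) * (\<integral>\<omega>. (Y \<omega>)\<^sup>2 \<partial>M)"
proof -
  have i2: "integrable M (\<lambda>\<omega>. e / 2 * (X \<omega>)\<^sup>2 + 1 / (2 * e) * (Y \<omega>)\<^sup>2)" using X Y by auto
  have i1: "integrable M (\<lambda>\<omega>. X \<omega> * Y \<omega>)"
  proof (rule Bochner_Integration.integrable_bound[OF i2])
    show "(\<lambda>\<omega>. X \<omega> * Y \<omega>) \<in> borel_measurable M" using m by auto
    show "AE x in M. norm (X x * Y x) \<le> norm (e / 2 * (X x)\<^sup>2 + 1 / (2 * e) * (Y x)\<^sup>2)"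
    proof (intro AE_I2)
      fix x
      have h: "\<bar>X x * Y x\<bar> \<le> e / 2 * (X x)\<^sup>2 + 1 / (2 * e) * (Y x)\<^sup>2" by (rule abs_mult_le_weighted_sq[OF e])
      have "0 \<le> e / 2 * (X x)\<^sup>2 + 1 / (2 * e) * (Y x)\<^sup>2" using e by (intro add_nonneg_nonneg mult_nonneg_nonneg) auto
      then show "norm (X x * Y x) \<le> norm (e / 2 * (X x)\<^sup>2 + 1 / (2 * e) * (Y x)\<^sup>2)"
        using h by (simp only: real_norm_def abs_of_nonneg)
    qed
  qed
  have "\<bar>\<integral>\<omega>. X \<omega> * Y \<omega> \<partial>M\<bar> \<le> (\<integral>\<omega>. \<bar>X \<omega> * Y \<omega>\<bar> \<partial>M)" by (rule integral_abs_bound)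
  also have "\<dots> \<le> (\<integral>\<omega>. e / 2 * (X \<omega>)\<^sup>2 + 1 / (2 * e) * (Y \<omega>)\<^sup>2 \<partial>M)"
    using i1 i2 abs_mult_le_weighted_sq[OF e] by (intro integral_mono) auto
  also have "\<dots> = e / 2 * (\<integral>\<omega>. (X \<omega>)\<^sup>2 \<partial>M) + 1 / (2 * e) * (\<integral>\<omega>. (Y \<omega>)\<^sup>2 \<partial>M)"
    using X Y by simp
  finally show ?thesis .
qed

definition proc_sqnorm :: "'a measure \<Rightarrow> (nat \<Rightarrow> 'a \<Rightarrow> real) \<Rightarrow> ennreal" where
  "proc_sqnorm M U = (\<integral>\<^sup>+\<omega>. (\<Sum>k. ennreal ((U k \<omega>)\<^sup>2)) \<partial>M)"

definition sqnorm :: "'a measure \<Rightarrow> ('a \<Rightarrow> real) \<Rightarrow> ennreal" where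
  "sqnorm M X = (\<integral>\<^sup>+\<omega>. ennreal ((X \<omega>)\<^sup>2) \<partial>M)"

lemma nn_integral_abs_mult_le:
  assumes U: "\<And>k. U k \<in> borel_measurable M" and V: "\<And>k. V k \<in> borel_measurable M" and e: "e > 0"
  shows "(\<integral>\<^sup>+\<omega>. (\<Sum>k. ennreal \<bar>U k \<omega> * V k \<omega>\<bar>) \<partial>M) \<le> ennreal (e / 2) * proc_sqnorm M U + ennreal (1 / (2 * e)) * proc_sqnorm M V"
proof -
  have "(\<integral>\<^sup>+\<omega>. (\<Sum>k. ennreal \<bar>U k \<omega> * V k \<omega>\<bar>) \<partial>M) \<le>
      (\<integral>\<^sup>+\<omega>. ennreal (e / 2) * (\<Sum>k. ennreal ((U k \<omega>)\<^sup>2)) + ennreal (1 / (2 * e)) * (\<Sum>k. ennreal ((V k \<omega>)\<^sup>2)) \<partial>M)"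
  proof (intro nn_integral_mono)
    fix \<omega>
    have "(\<Sum>k. ennreal \<bar>U k \<omega> * V k \<omega>\<bar>) \<le> (\<Sum>k. ennreal (e / 2) * ennreal ((U k \<omega>)\<^sup>2) + ennreal (1 / (2 * e)) * ennreal ((V k \<omega>)\<^sup>2))"
    proof (intro suminf_le summableI)
      fix k
      have "\<bar>U k \<omega> * V k \<omega>\<bar> \<le> e / 2 * (U k \<omega>)\<^sup>2 + 1 / (2 * e) * (V k \<omega>)\<^sup>2" by (rule abs_mult_le_weighted_sq[OF e])
      then show "ennreal \<bar>U k \<omega> * V k \<omega>\<bar> \<le> ennreal (e / 2) * ennreal ((U k \<omega>)\<^sup>2) + ennreal (1 / (2 * e)) * ennreal ((V k \<omega>)\<^sup>2)"
        using e by (simp add: ennreal_mult[symmetric] ennreal_plus[symmetric] del: ennreal_plus)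
    qed
    also have "\<dots> = ennreal (e / 2) * (\<Sum>k. ennreal ((U k \<omega>)\<^sup>2)) + ennreal (1 / (2 * e)) * (\<Sum>k. ennreal ((V k \<omega>)\<^sup>2))"
      by (subst suminf_add[symmetric]) (auto intro: summableI)
    finally show "(\<Sum>k. ennreal \<bar>U k \<omega> * V k \<omega>\<bar>) \<le> \<dots>" .
  qed
  also have "\<dots> = ennreal (e / 2) * proc_sqnorm M U + ennreal (1 / (2 * e)) * proc_sqnorm M V"
    unfolding proc_sqnorm_def using U V
    by (subst nn_integral_add) (auto intro!: borel_measurable_suminf_order simp: nn_integral_cmult)
  finally show ?thesis .
qed

lemma AE_summable_sq:
  assumes U: "\<And>k. U k \<in> borel_measurable M" and f: "proc_sqnorm M U < \<infinity>"
  shows "AE \<omega> in M. summable (\<lambda>k. (U k \<omega>)\<^sup>2)"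
proof -
  have "AE \<omega> in M. (\<Sum>k. ennreal ((U k \<omega>)\<^sup>2)) \<noteq> \<infinity>"
    using f U unfolding proc_sqnorm_def by (intro nn_integral_PInf_AE) auto
  then show ?thesis by eventually_elim (auto intro: summable_suminf_not_top)
qed

lemma integrable_ipair:
  assumes U: "\<And>k. U k \<in> borel_measurable M" and V: "\<And>k. V k \<in> borel_measurable M"
    and fU: "proc_sqnorm M U < \<infinity>" and fV: "proc_sqnorm M V < \<infinity>"
  shows "integrable M (\<lambda>\<omega>. ipair (\<lambda>k. U k \<omega>) (\<lambda>k. V k \<omega>))"
    and "AE \<omega> in M. summable (\<lambda>k. \<bar>U k \<omega> * V k \<omega>\<bar>)"
    and "(\<integral>\<^sup>+\<omega>. norm (ipair (\<lambda>k. U k \<omega>) (\<lambda>k. V k \<omega>)) \<partial>M) \<le> (\<integral>\<^sup>+\<omega>. (\<Sum>k. ennreal \<bar>U k \<omega> * V k \<omega>\<bar>) \<partial>M)"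
proof -
  show sm: "AE \<omega> in M. summable (\<lambda>k. \<bar>U k \<omega> * V k \<omega>\<bar>)"
    using AE_summable_sq[OF U fU] AE_summable_sq[OF V fV]
    by eventually_elim (rule summable_abs_mult_of_sq)
  have meas: "(\<lambda>\<omega>. ipair (\<lambda>k. U k \<omega>) (\<lambda>k. V k \<omega>)) \<in> borel_measurable M"
    unfolding ipair_def using U V by (intro borel_measurable_suminf) auto
  show le: "(\<integral>\<^sup>+\<omega>. norm (ipair (\<lambda>k. U k \<omega>) (\<lambda>k. V k \<omega>)) \<partial>M) \<le> (\<integral>\<^sup>+\<omega>. (\<Sum>k. ennreal \<bar>U k \<omega> * V k \<omega>\<bar>) \<partial>M)"
  proof (intro nn_integral_mono_AE)
    show "AE \<omega> in M. ennreal (norm (ipair (\<lambda>k. U k \<omega>) (\<lambda>k. V k \<omega>))) \<le> (\<Sum>k. ennreal \<bar>U k \<omega> * V k \<omega>\<bar>)"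
      using sm
    proof eventually_elim
      case (elim \<omega>)
      have h1: "norm (ipair (\<lambda>k. U k \<omega>) (\<lambda>k. V k \<omega>)) \<le> (\<Sum>k. \<bar>U k \<omega> * V k \<omega>\<bar>)"
        unfolding ipair_def using elim by (simp add: summable_rabs)
      have h2: "ennreal (\<Sum>k. \<bar>U k \<omega> * V k \<omega>\<bar>) = (\<Sum>k. ennreal \<bar>U k \<omega> * V k \<omega>\<bar>)"
        using elim by (intro suminf_ennreal2[symmetric]) auto
      have "ennreal (norm (ipair (\<lambda>k. U k \<omega>) (\<lambda>k. V k \<omega>))) \<le> ennreal (\<Sum>k. \<bar>U k \<omega> * V k \<omega>\<bar>)"
        by (rule ennreal_leI[OF h1])
      then show ?case unfolding h2 .
    qed
  qed
  have "(\<integral>\<^sup>+\<omega>. (\<Sum>k. ennreal \<bar>U k \<omega> * V k \<omega>\<bar>) \<partial>M) \<le> ennreal (1 / 2) * proc_sqnorm M U + ennreal (1 / (2 * 1)) * proc_sqnorm M V"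
    by (rule nn_integral_abs_mult_le[OF U V]) simp
  also have "\<dots> < \<infinity>"
    using fU fV by (simp add: less_top[symmetric] ennreal_mult_eq_top_iff)
  finally show "integrable M (\<lambda>\<omega>. ipair (\<lambda>k. U k \<omega>) (\<lambda>k. V k \<omega>))"
    unfolding integrable_iff_bounded using meas le by auto
qed

lemma abs_integral_ipair_le:
  assumes U: "\<And>k. U k \<in> borel_measurable M" and V: "\<And>k. V k \<in> borel_measurable M"
    and fU: "proc_sqnorm M U < \<infinity>" and fV: "proc_sqnorm M V < \<infinity>" and e: "e > 0"
  shows "\<bar>\<integral>\<omega>. ipair (\<lambda>k. U k \<omega>) (\<lambda>k. V k \<omega>) \<partial>M\<bar> \<le> e / 2 * enn2real (proc_sqnorm M U) + 1 / (2 * e) * enn2real (proc_sqnorm M V)"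
proof -
  have "ennreal \<bar>\<integral>\<omega>. ipair (\<lambda>k. U k \<omega>) (\<lambda>k. V k \<omega>) \<partial>M\<bar> \<le> (\<integral>\<^sup>+\<omega>. norm (ipair (\<lambda>k. U k \<omega>) (\<lambda>k. V k \<omega>)) \<partial>M)"
    using integral_norm_bound_ennreal[OF integrable_ipair(1)[OF U V fU fV]] by simp
  also have "\<dots> \<le> (\<integral>\<^sup>+\<omega>. (\<Sum>k. ennreal \<bar>U k \<omega> * V k \<omega>\<bar>) \<partial>M)" by (rule integrable_ipair(3)[OF U V fU fV])
  also have "\<dots> \<le> ennreal (e / 2) * proc_sqnorm M U + ennreal (1 / (2 * e)) * proc_sqnorm M V" by (rule nn_integral_abs_mult_le[OF U V e])
  also have "\<dots> = ennreal (e / 2 * enn2real (proc_sqnorm M U) + 1 / (2 * e) * enn2real (proc_sqnorm M V))"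
    using fU fV e by (cases "proc_sqnorm M U"; cases "proc_sqnorm M V")
      (simp_all add: ennreal_mult'[symmetric] ennreal_plus[symmetric] del: ennreal_plus)
  finally show ?thesis using e by (subst (asm) ennreal_le_iff) (auto intro!: add_nonneg_nonneg mult_nonneg_nonneg enn2real_nonneg)
qed

lemma integral_ipair_tendsto_0:
  assumes U: "\<And>k. U k \<in> borel_measurable M" and fU: "proc_sqnorm M U < \<infinity>"
    and V: "\<And>N k. V N k \<in> borel_measurable M" and fV: "\<And>N. proc_sqnorm M (V N) < \<infinity>"
    and l: "(\<lambda>N. proc_sqnorm M (V N)) \<longlonglongrightarrow> 0"
  shows "(\<lambda>N. \<integral>\<omega>. ipair (\<lambda>k. U k \<omega>) (\<lambda>k. V N k \<omega>) \<partial>M) \<longlonglongrightarrow> 0"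
proof (rule tendsto_zero_of_weighted_bound)
  show "0 \<le> enn2real (proc_sqnorm M U)" by simp
  show "(\<lambda>N. enn2real (proc_sqnorm M (V N))) \<longlonglongrightarrow> 0" using l by (intro tendsto_enn2real) auto
  fix N and e :: real assume e: "e > 0"
  have "\<bar>\<integral>\<omega>. ipair (\<lambda>k. U k \<omega>) (\<lambda>k. V N k \<omega>) \<partial>M\<bar> \<le> e / 2 * enn2real (proc_sqnorm M U) + 1 / (2 * e) * enn2real (proc_sqnorm M (V N))"
    by (rule abs_integral_ipair_le[OF U V fU fV e])
  also have "\<dots> \<le> e * enn2real (proc_sqnorm M U) + enn2real (proc_sqnorm M (V N)) / e"
    using e by (intro add_mono) (auto simp: field_simps)
  finally show "\<bar>\<integral>\<omega>. ipair (\<lambda>k. U k \<omega>) (\<lambda>k. V N k \<omega>) \<partial>M\<bar> \<le> e * enn2real (proc_sqnorm M U) + enn2real (proc_sqnorm M (V N)) / e" .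
qed

section \<open>The Rademacher space and the gradient\<close>

locale rademacher =
  fixes p :: "nat \<Rightarrow> real"
  assumes p_bounds: "\<And>k. 0 < p k \<and> p k < 1"
begin

abbreviation "M \<equiv> Mrad p"

abbreviation "bern k \<equiv> measure_pmf (bernoulli_pmf (p k))"

lemma prob_space_Mrad: "prob_space M"
  unfolding Mrad_def by (intro prob_space_PiM) (simp add: prob_space_measure_pmf)

sublocale P: prob_space M by (rule prob_space_Mrad)

lemma space_M[simp]: "space M = UNIV"
  unfolding Mrad_def by (simp add: space_PiM)

lemma measurable_fun_upd_Mrad[measurable]: "(\<lambda>\<omega>. fun_upd \<omega> k b) \<in> measurable M M"
  unfolding Mrad_def
  by (rule measurable_fun_upd[where J=UNIV]) auto

lemma borel_measurable_fun_upd: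
  "f \<in> borel_measurable M \<Longrightarrow> (\<lambda>\<omega>. f (fun_upd \<omega> k b)) \<in> borel_measurable M"
  using measurable_comp[OF measurable_fun_upd_Mrad] by (auto simp: comp_def)

lemma distr_fun_upd_eq: "distr (bern k \<Otimes>\<^sub>M M) M (\<lambda>(x, X). fun_upd X k x) = M"
proof -
  have "distr (bern k \<Otimes>\<^sub>M (\<Pi>\<^sub>M i\<in>UNIV. measure_pmf (bernoulli_pmf (p i))))
      (\<Pi>\<^sub>M i\<in>insert k UNIV. measure_pmf (bernoulli_pmf (p i))) (\<lambda>(x, X). fun_upd X k x) =
    (\<Pi>\<^sub>M i\<in>insert k UNIV. measure_pmf (bernoulli_pmf (p i)))"
    by (rule distr_pair_PiM_eq_PiM) (auto simp: prob_space_measure_pmf)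
  then show ?thesis unfolding Mrad_def by simp
qed

lemma measurable_fun_upd_pair[measurable]: "(\<lambda>(x, X). fun_upd X k x) \<in> measurable (bern k \<Otimes>\<^sub>M M) M"
proof -
  have "(\<lambda>(x, X). fun_upd X k x) = (\<lambda>y. fun_upd (snd y) k (fst y))" by auto
  moreover have "(\<lambda>y. fun_upd (snd y) k (fst y)) \<in> measurable (bern k \<Otimes>\<^sub>M M) M"
    unfolding Mrad_def by (rule measurable_fun_upd[where J=UNIV]) auto
  ultimately show ?thesis by simp
qed

lemma nn_integral_resample:
  assumes f[measurable]: "f \<in> borel_measurable M"
  shows "(\<integral>\<^sup>+\<omega>. f \<omega> \<partial>M) = (\<integral>\<^sup>+\<omega>. f (fun_upd \<omega> k True) * ennreal (p k) + f (fun_upd \<omega> k False) * ennreal (1 - p k) \<partial>M)"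
proof -
  interpret B: prob_space "bern k" by (rule prob_space_measure_pmf)
  interpret PS: pair_sigma_finite "bern k" M
    by unfold_locales
  have "(\<integral>\<^sup>+\<omega>. f \<omega> \<partial>M) = (\<integral>\<^sup>+\<omega>. f \<omega> \<partial>distr (bern k \<Otimes>\<^sub>M M) M (\<lambda>(x, X). fun_upd X k x))"
    by (simp add: distr_fun_upd_eq)
  also have "\<dots> = (\<integral>\<^sup>+y. f ((\<lambda>(x, X). fun_upd X k x) y) \<partial>(bern k \<Otimes>\<^sub>M M))"
    by (rule nn_integral_distr) auto
  also have "\<dots> = (\<integral>\<^sup>+ X. (\<integral>\<^sup>+ x. f (fun_upd X k x) \<partial>bern k) \<partial>M)"
  proof -
    have m: "(\<lambda>y. f (fun_upd (snd y) k (fst y))) \<in> borel_measurable (bern k \<Otimes>\<^sub>M M)"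
      using measurable_comp[OF measurable_fun_upd_pair f] by (simp add: comp_def case_prod_beta)
    show ?thesis using PS.nn_integral_snd[OF m] by (simp add: case_prod_beta)
  qed
  also have "\<dots> = (\<integral>\<^sup>+\<omega>. f (fun_upd \<omega> k True) * ennreal (p k) + f (fun_upd \<omega> k False) * ennreal (1 - p k) \<partial>M)"
    using p_bounds[of k] by (intro nn_integral_cong) (simp add: nn_integral_measure_pmf_support[of UNIV] UNIV_bool)
  finally show ?thesis .
qed

lemma integral_resample:
  assumes f: "integrable M f"
  shows "integrable M (\<lambda>\<omega>. f (fun_upd \<omega> k True) * p k + f (fun_upd \<omega> k False) * (1 - p k))"
    and "(\<integral>\<omega>. f \<omega> \<partial>M) = (\<integral>\<omega>. f (fun_upd \<omega> k True) * p k + f (fun_upd \<omega> k False) * (1 - p k) \<partial>M)"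
proof -
  interpret B: prob_space "bern k" by (rule prob_space_measure_pmf)
  interpret PS: pair_sigma_finite "bern k" M by unfold_locales
  have [measurable]: "f \<in> borel_measurable M" using f by auto
  have "integrable (distr (bern k \<Otimes>\<^sub>M M) M (\<lambda>(x, \<omega>). fun_upd \<omega> k x)) f"
    using f by (simp add: distr_fun_upd_eq)
  then have "integrable (bern k \<Otimes>\<^sub>M M) (\<lambda>y. f ((\<lambda>(x, \<omega>). fun_upd \<omega> k x) y))"
    by (subst (asm) integrable_distr_eq) auto
  then have i: "integrable (bern k \<Otimes>\<^sub>M M) (\<lambda>(x, \<omega>). f (fun_upd \<omega> k x))"
    by (simp add: case_prod_beta')
  have inner: "(\<integral>x. f (fun_upd \<omega> k x) \<partial>bern k) = f (fun_upd \<omega> k True) * p k + f (fun_upd \<omega> k False) * (1 - p k)" for \<omega>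
    using p_bounds[of k] by simp
  show "integrable M (\<lambda>\<omega>. f (fun_upd \<omega> k True) * p k + f (fun_upd \<omega> k False) * (1 - p k))"
    using PS.integrable_snd[OF i] by (simp add: inner)
  have "(\<integral>\<omega>. f \<omega> \<partial>M) = (\<integral>\<omega>. f \<omega> \<partial>distr (bern k \<Otimes>\<^sub>M M) M (\<lambda>(x, \<omega>). fun_upd \<omega> k x))"
    by (simp add: distr_fun_upd_eq)
  also have "\<dots> = (\<integral>y. f ((\<lambda>(x, \<omega>). fun_upd \<omega> k x) y) \<partial>(bern k \<Otimes>\<^sub>M M))"
    by (rule integral_distr) auto
  also have "\<dots> = (\<integral>\<omega>. (\<integral>x. f (fun_upd \<omega> k x) \<partial>bern k) \<partial>M)"
    using PS.integral_snd[OF i] by (simp add: case_prod_beta')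
  finally show "(\<integral>\<omega>. f \<omega> \<partial>M) = (\<integral>\<omega>. f (fun_upd \<omega> k True) * p k + f (fun_upd \<omega> k False) * (1 - p k) \<partial>M)"
    by (simp add: inner)
qed

abbreviation "sdev k \<equiv> sqrt (p k * (1 - p k))"

lemma sdev_pos: "sdev k > 0" using p_bounds[of k] by simp

lemma borel_measurable_Dk[measurable]: "G \<in> borel_measurable M \<Longrightarrow> (\<lambda>\<omega>. Dk p k G \<omega>) \<in> borel_measurable M"
proof -
  assume G: "G \<in> borel_measurable M"
  have "(\<lambda>\<omega>. G (fun_upd \<omega> k True)) \<in> borel_measurable M" "(\<lambda>\<omega>. G (fun_upd \<omega> k False)) \<in> borel_measurable M"
    using borel_measurable_fun_upd[OF G] by auto
  then show ?thesis unfolding Dk_def by measurable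
qed

lemma Dk_diff: "Dk p k (\<lambda>\<omega>. G \<omega> - K \<omega>) \<omega> = Dk p k G \<omega> - Dk p k K \<omega>"
  by (simp add: Dk_def algebra_simps)

lemma Dk_scale: "Dk p k (\<lambda>\<omega>. a * G \<omega>) \<omega> = a * Dk p k G \<omega>"
  by (simp add: Dk_def algebra_simps)

lemma Dk_minus: "Dk p k (\<lambda>\<omega>. - G \<omega>) \<omega> = - Dk p k G \<omega>"
  by (simp add: Dk_def algebra_simps)

lemma Dk_sum: "Dk p k (\<lambda>\<omega>. \<Sum>i\<in>S. G i \<omega>) \<omega> = (\<Sum>i\<in>S. Dk p k (G i) \<omega>)"
  by (simp add: Dk_def sum_subtractf[symmetric] sum_distrib_left)

lemma Dk_eq_0_if_indep: "(\<And>\<omega> b. G (fun_upd \<omega> k b) = G \<omega>) \<Longrightarrow> Dk p k G \<omega> = 0"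
  by (simp add: Dk_def)

lemma Dk_sq_le: "(Dk p k G \<omega>)\<^sup>2 \<le> p k * (G (fun_upd \<omega> k True))\<^sup>2 + (1 - p k) * (G (fun_upd \<omega> k False))\<^sup>2"
proof -
  define x where "x = G (fun_upd \<omega> k True)"
  define y where "y = G (fun_upd \<omega> k False)"
  have q: "p k * (1 - p k) \<ge> 0" using p_bounds[of k] by simp
  have "(Dk p k G \<omega>)\<^sup>2 = p k * (1 - p k) * (x - y)\<^sup>2"
    using q by (simp add: Dk_def x_def y_def power_mult_distrib)
  also have "\<dots> \<le> p k * x\<^sup>2 + (1 - p k) * y\<^sup>2"
  proof -
    have "p k * x\<^sup>2 + (1 - p k) * y\<^sup>2 - p k * (1 - p k) * (x - y)\<^sup>2 = (p k * x + (1 - p k) * y)\<^sup>2"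
      by (simp add: power2_eq_square algebra_simps)
    then show ?thesis by (smt (verit) zero_le_power2)
  qed
  finally show ?thesis by (simp add: x_def y_def)
qed

lemma nn_integral_Dk_sq_le:
  assumes [measurable]: "G \<in> borel_measurable M"
  shows "(\<integral>\<^sup>+\<omega>. ennreal ((Dk p k G \<omega>)\<^sup>2) \<partial>M) \<le> (\<integral>\<^sup>+\<omega>. ennreal ((G \<omega>)\<^sup>2) \<partial>M)"
proof -
  have "(\<integral>\<^sup>+\<omega>. ennreal ((G \<omega>)\<^sup>2) \<partial>M) = (\<integral>\<^sup>+\<omega>. ennreal ((G (fun_upd \<omega> k True))\<^sup>2) * ennreal (p k)
      + ennreal ((G (fun_upd \<omega> k False))\<^sup>2) * ennreal (1 - p k) \<partial>M)"
    by (rule nn_integral_resample) measurable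
  also have "\<dots> = (\<integral>\<^sup>+\<omega>. ennreal (p k * (G (fun_upd \<omega> k True))\<^sup>2 + (1 - p k) * (G (fun_upd \<omega> k False))\<^sup>2) \<partial>M)"
  proof (intro nn_integral_cong)
    fix \<omega>
    have a: "0 \<le> p k" "0 \<le> 1 - p k" using p_bounds[of k] by auto
    show "ennreal ((G (fun_upd \<omega> k True))\<^sup>2) * ennreal (p k) + ennreal ((G (fun_upd \<omega> k False))\<^sup>2) * ennreal (1 - p k) =
      ennreal (p k * (G (fun_upd \<omega> k True))\<^sup>2 + (1 - p k) * (G (fun_upd \<omega> k False))\<^sup>2)"
      using a by (simp add: ennreal_mult'[symmetric] ennreal_plus[symmetric] mult.commute del: ennreal_plus)
  qed
  finally show ?thesis
    by (auto intro!: nn_integral_mono ennreal_leI Dk_sq_le)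
qed

lemma L2_iff: "L2 p G \<longleftrightarrow> G \<in> borel_measurable M \<and> (\<integral>\<^sup>+\<omega>. ennreal ((G \<omega>)\<^sup>2) \<partial>M) < \<infinity>"
  unfolding L2_def by (auto simp: integrable_iff_bounded)

lemma L2_Dk: "L2 p G \<Longrightarrow> L2 p (Dk p k G)"
  unfolding L2_iff using nn_integral_Dk_sq_le[of G k] borel_measurable_Dk[of G k] by auto

lemma L2_integrable: "L2 p G \<Longrightarrow> integrable M G"
  unfolding L2_def by (auto intro: P.square_integrable_imp_integrable)

lemma L2_integrable_mult:
  assumes "L2 p G" "L2 p K"
  shows "integrable M (\<lambda>\<omega>. G \<omega> * K \<omega>)"
proof (rule Bochner_Integration.integrable_bound)
  show "integrable M (\<lambda>\<omega>. 1 / 2 * (G \<omega>)\<^sup>2 + 1 / (2 * 1) * (K \<omega>)\<^sup>2)"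
    using assms unfolding L2_def by auto
  show "(\<lambda>\<omega>. G \<omega> * K \<omega>) \<in> borel_measurable M"
    using assms unfolding L2_def by auto
  show "AE \<omega> in M. norm (G \<omega> * K \<omega>) \<le> norm (1 / 2 * (G \<omega>)\<^sup>2 + 1 / (2 * 1) * (K \<omega>)\<^sup>2)"
    using abs_mult_le_weighted_sq[of 1] by (intro AE_I2) (simp del: divide_self_if)
qed

lemma L2_add: "L2 p G \<Longrightarrow> L2 p K \<Longrightarrow> L2 p (\<lambda>\<omega>. G \<omega> + K \<omega>)"
proof -
  assume a: "L2 p G" "L2 p K"
  have "integrable M (\<lambda>\<omega>. G \<omega> * K \<omega>)" by (rule L2_integrable_mult[OF a])
  then have "integrable M (\<lambda>\<omega>. (G \<omega>)\<^sup>2 + (K \<omega>)\<^sup>2 + 2 * (G \<omega> * K \<omega>))"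
    using a unfolding L2_def by (intro Bochner_Integration.integrable_add Bochner_Integration.integrable_mult_right) auto
  then show ?thesis using a unfolding L2_def power2_sum by (auto simp: mult.assoc)
qed

lemma L2_scale: "L2 p G \<Longrightarrow> L2 p (\<lambda>\<omega>. a * G \<omega>)"
  unfolding L2_def power_mult_distrib by auto

lemma L2_diff: "L2 p G \<Longrightarrow> L2 p K \<Longrightarrow> L2 p (\<lambda>\<omega>. G \<omega> - K \<omega>)"
  using L2_add[of G "\<lambda>\<omega>. (-1) * K \<omega>"] L2_scale[of K "-1"] by simp

lemma L2_bounded: "G \<in> borel_measurable M \<Longrightarrow> (\<And>\<omega>. \<bar>G \<omega>\<bar> \<le> C) \<Longrightarrow> L2 p G"
  unfolding L2_def
proof (intro conjI P.integrable_const_bound[where B="C\<^sup>2"] AE_I2)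
  fix x assume "G \<in> borel_measurable M" "\<And>\<omega>. \<bar>G \<omega>\<bar> \<le> C"
  then have "\<bar>G x\<bar> \<le> C" by auto
  then have "\<bar>G x\<bar>\<^sup>2 \<le> C\<^sup>2" by (intro power_mono) auto
  then show "norm ((G x)\<^sup>2) \<le> C\<^sup>2" by simp
qed (auto intro!: borel_measurable_power)

lemma L2_sum: "finite S \<Longrightarrow> (\<And>i. i \<in> S \<Longrightarrow> L2 p (G i)) \<Longrightarrow> L2 p (\<lambda>\<omega>. \<Sum>i\<in>S. G i \<omega>)"
proof (induction S rule: finite_induct)
  case empty then show ?case by (auto intro: L2_bounded[where C=0])
next
  case (insert x F) then show ?case by (auto intro!: L2_add)
qed

lemma sqnorm_diff_commute: "sqnorm M (\<lambda>\<omega>. X \<omega> - Y \<omega>) = sqnorm M (\<lambda>\<omega>. Y \<omega> - X \<omega>)"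
  unfolding sqnorm_def by (simp add: power2_commute)

lemma Dk_sq_split_le: "(Dk p k Q \<omega>)\<^sup>2 \<le> 2 * (Dk p k Qm \<omega>)\<^sup>2 + 2 * (Dk p k (\<lambda>\<omega>. Q \<omega> - Qm \<omega>) \<omega>)\<^sup>2"
  using square_add_le[of "Dk p k Qm \<omega>" "Dk p k (\<lambda>\<omega>. Q \<omega> - Qm \<omega>) \<omega>"] by (simp add: Dk_diff)

abbreviation "grad X \<equiv> (\<lambda>k. Dk p k X)"

lemma nn_integral_Dk_sq_le_split:
  assumes [measurable]: "Q \<in> borel_measurable M" "Q' \<in> borel_measurable M"
  shows "(\<integral>\<^sup>+\<omega>. ennreal ((Dk p k Q \<omega>)\<^sup>2) \<partial>M) \<le>
    2 * (\<integral>\<^sup>+\<omega>. ennreal ((Dk p k Q' \<omega>)\<^sup>2) \<partial>M) + 2 * sqnorm M (\<lambda>\<omega>. Q \<omega> - Q' \<omega>)"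
proof -
  have "(\<integral>\<^sup>+\<omega>. ennreal ((Dk p k Q \<omega>)\<^sup>2) \<partial>M) \<le>
      (\<integral>\<^sup>+\<omega>. 2 * ennreal ((Dk p k Q' \<omega>)\<^sup>2) + 2 * ennreal ((Dk p k (\<lambda>\<omega>. Q \<omega> - Q' \<omega>) \<omega>)\<^sup>2) \<partial>M)"
    by (intro nn_integral_mono order_trans[OF ennreal_leI[OF Dk_sq_split_le[where Qm=Q']]])
      (simp add: ennreal_plus ennreal_mult)
  also have "\<dots> = 2 * (\<integral>\<^sup>+\<omega>. ennreal ((Dk p k Q' \<omega>)\<^sup>2) \<partial>M)
      + 2 * (\<integral>\<^sup>+\<omega>. ennreal ((Dk p k (\<lambda>\<omega>. Q \<omega> - Q' \<omega>) \<omega>)\<^sup>2) \<partial>M)"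
    by (subst nn_integral_add) (auto simp: nn_integral_cmult)
  also have "(\<integral>\<^sup>+\<omega>. ennreal ((Dk p k (\<lambda>\<omega>. Q \<omega> - Q' \<omega>) \<omega>)\<^sup>2) \<partial>M) \<le> sqnorm M (\<lambda>\<omega>. Q \<omega> - Q' \<omega>)"
    unfolding sqnorm_def by (intro nn_integral_Dk_sq_le) auto
  finally show ?thesis by (simp add: add_left_mono mult_left_mono)
qed

lemma proc_sqnorm_grad_eq_suminf:
  "Q \<in> borel_measurable M \<Longrightarrow> proc_sqnorm M (grad Q) = (\<Sum>k. \<integral>\<^sup>+\<omega>. ennreal ((Dk p k Q \<omega>)\<^sup>2) \<partial>M)"
  unfolding proc_sqnorm_def by (intro nn_integral_suminf) auto

lemma proc_sqnorm_grad_limit_le: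
  assumes Qm: "\<And>m. Qs m \<in> borel_measurable M" and Q: "Q \<in> borel_measurable M"
    and lim: "(\<lambda>m. sqnorm M (\<lambda>\<omega>. Qs m \<omega> - Q \<omega>)) \<longlonglongrightarrow> 0"
    and bd: "eventually (\<lambda>m. proc_sqnorm M (grad (Qs m)) \<le> Bd) sequentially"
  shows "proc_sqnorm M (grad Q) \<le> 2 * Bd"
proof -
  have "(\<Sum>k<K. \<integral>\<^sup>+\<omega>. ennreal ((Dk p k Q \<omega>)\<^sup>2) \<partial>M) \<le> 2 * Bd + ennreal \<delta>" if "0 < \<delta>" for K \<delta>
  proof -
    define d where "d = \<delta> / (2 * real K + 1)"
    have d: "d > 0" "real K * (2 * d) \<le> \<delta>" using \<open>0 < \<delta>\<close> by (auto simp: d_def field_simps)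
    have "eventually (\<lambda>m. sqnorm M (\<lambda>\<omega>. Qs m \<omega> - Q \<omega>) < ennreal d) sequentially"
      using lim d by (intro order_tendstoD(2)) auto
    with bd have "eventually (\<lambda>m. proc_sqnorm M (grad (Qs m)) \<le> Bd \<and> sqnorm M (\<lambda>\<omega>. Qs m \<omega> - Q \<omega>) < ennreal d) sequentially"
      by (rule eventually_conj)
    then obtain m where m: "proc_sqnorm M (grad (Qs m)) \<le> Bd" "sqnorm M (\<lambda>\<omega>. Qs m \<omega> - Q \<omega>) < ennreal d"
      by (auto simp: eventually_sequentially)
    then have m2: "sqnorm M (\<lambda>\<omega>. Q \<omega> - Qs m \<omega>) \<le> ennreal d"
      by (simp add: sqnorm_diff_commute[of Q])
    have "(\<Sum>k<K. \<integral>\<^sup>+\<omega>. ennreal ((Dk p k Q \<omega>)\<^sup>2) \<partial>M)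
        \<le> (\<Sum>k<K. 2 * (\<integral>\<^sup>+\<omega>. ennreal ((Dk p k (Qs m) \<omega>)\<^sup>2) \<partial>M) + 2 * ennreal d)"
      using m2 by (intro sum_mono order_trans[OF nn_integral_Dk_sq_le_split[OF Q Qm[of m]]] add_left_mono mult_left_mono) auto
    also have "\<dots> = 2 * (\<Sum>k<K. \<integral>\<^sup>+\<omega>. ennreal ((Dk p k (Qs m) \<omega>)\<^sup>2) \<partial>M) + ennreal (real K * (2 * d))"
      using d by (simp add: sum.distrib sum_distrib_left ennreal_mult ennreal_of_nat_eq_real_of_nat)
    also have "(\<Sum>k<K. \<integral>\<^sup>+\<omega>. ennreal ((Dk p k (Qs m) \<omega>)\<^sup>2) \<partial>M) \<le> proc_sqnorm M (grad (Qs m))"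
      unfolding proc_sqnorm_grad_eq_suminf[OF Qm] by (intro sum_le_suminf summableI) auto
    finally have "(\<Sum>k<K. \<integral>\<^sup>+\<omega>. ennreal ((Dk p k Q \<omega>)\<^sup>2) \<partial>M)
        \<le> 2 * proc_sqnorm M (grad (Qs m)) + ennreal (real K * (2 * d))"
      by (simp add: add_right_mono mult_left_mono)
    also have "\<dots> \<le> 2 * Bd + ennreal \<delta>"
      using m(1) d(2) by (intro add_mono mult_left_mono ennreal_leI) auto
    finally show ?thesis .
  qed
  then show ?thesis
    unfolding proc_sqnorm_grad_eq_suminf[OF Q] by (intro suminf_le_const summableI) (rule ennreal_le_epsilon, blast)
qed

lemma proc_sqnorm_grad_limit_le_tendsto:
  assumes Qm: "\<And>m. Qs m \<in> borel_measurable M" and Q: "Q \<in> borel_measurable M"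
    and lim: "(\<lambda>m. sqnorm M (\<lambda>\<omega>. Qs m \<omega> - Q \<omega>)) \<longlonglongrightarrow> 0"
    and bd: "\<And>m. proc_sqnorm M (grad (Qs m)) \<le> Bd m" and Bd: "Bd \<longlonglongrightarrow> B"
  shows "proc_sqnorm M (grad Q) \<le> 2 * B"
proof (rule ennreal_le_epsilon)
  fix e :: real assume "2 * B < top" "0 < e"
  then have "B < B + ennreal (e / 2)"
    by (auto simp: ennreal_mult_less_top top.not_eq_extremum)
  then have "eventually (\<lambda>m. Bd m < B + ennreal (e / 2)) sequentially"
    using Bd by (rule order_tendstoD(2)[rotated])
  then have "eventually (\<lambda>m. proc_sqnorm M (grad (Qs m)) \<le> B + ennreal (e / 2)) sequentially"
    by eventually_elim (use bd in \<open>auto intro: order_trans less_imp_le\<close>)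
  then have "proc_sqnorm M (grad Q) \<le> 2 * (B + ennreal (e / 2))"
    by (rule proc_sqnorm_grad_limit_le[OF Qm Q lim])
  also have "\<dots> = 2 * B + ennreal e"
    using \<open>0 < e\<close> by (simp add: distrib_left ennreal_times_divide[symmetric] flip: ennreal_numeral ennreal_mult)
  finally show "proc_sqnorm M (grad Q) \<le> 2 * B + ennreal e" .
qed

lemma sqnorm_eq_integral: "L2 p X \<Longrightarrow> sqnorm M X = ennreal (\<integral>\<omega>. (X \<omega>)\<^sup>2 \<partial>M)"
  unfolding sqnorm_def L2_def by (intro nn_integral_eq_integral) auto

lemma L2_iff_sqnorm: "L2 p X \<longleftrightarrow> X \<in> borel_measurable M \<and> sqnorm M X < \<infinity>"
  unfolding sqnorm_def by (rule L2_iff)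

lemma sqnorm_diff_triangle:
  assumes "X \<in> borel_measurable M" "Y \<in> borel_measurable M" "Z \<in> borel_measurable M"
  shows "sqnorm M (\<lambda>\<omega>. X \<omega> - Z \<omega>) \<le> 2 * sqnorm M (\<lambda>\<omega>. X \<omega> - Y \<omega>) + 2 * sqnorm M (\<lambda>\<omega>. Y \<omega> - Z \<omega>)"
proof -
  have "sqnorm M (\<lambda>\<omega>. X \<omega> - Z \<omega>) \<le> (\<integral>\<^sup>+\<omega>. 2 * ennreal ((X \<omega> - Y \<omega>)\<^sup>2) + 2 * ennreal ((Y \<omega> - Z \<omega>)\<^sup>2) \<partial>M)"
    unfolding sqnorm_def
  proof (intro nn_integral_mono)
    fix \<omega>
    have "ennreal ((X \<omega> - Z \<omega>)\<^sup>2) \<le> ennreal (2 * (X \<omega> - Y \<omega>)\<^sup>2 + 2 * (Y \<omega> - Z \<omega>)\<^sup>2)"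
      using square_add_le[of "X \<omega> - Y \<omega>" "Y \<omega> - Z \<omega>"] by (intro ennreal_leI) simp
    then show "ennreal ((X \<omega> - Z \<omega>)\<^sup>2) \<le> 2 * ennreal ((X \<omega> - Y \<omega>)\<^sup>2) + 2 * ennreal ((Y \<omega> - Z \<omega>)\<^sup>2)"
      by (simp add: ennreal_plus ennreal_mult)
  qed
  also have "\<dots> = 2 * sqnorm M (\<lambda>\<omega>. X \<omega> - Y \<omega>) + 2 * sqnorm M (\<lambda>\<omega>. Y \<omega> - Z \<omega>)"
    unfolding sqnorm_def using assms by (subst nn_integral_add) (auto simp: nn_integral_cmult)
  finally show ?thesis .
qed

lemma integral_sq_diff_triangle:
  assumes X: "L2 p X" and Y: "L2 p Y" and Z: "L2 p Z"
  shows "(\<integral>\<omega>. (X \<omega> - Z \<omega>)\<^sup>2 \<partial>M) \<le> 2 * (\<integral>\<omega>. (X \<omega> - Y \<omega>)\<^sup>2 \<partial>M) + 2 * (\<integral>\<omega>. (Y \<omega> - Z \<omega>)\<^sup>2 \<partial>M)"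
proof -
  have i: "integrable M (\<lambda>\<omega>. (U \<omega> - V \<omega>)\<^sup>2)" if "L2 p U" "L2 p V" for U V
    using L2_diff[OF that] unfolding L2_def by auto
  have "(\<integral>\<omega>. (X \<omega> - Z \<omega>)\<^sup>2 \<partial>M) \<le> (\<integral>\<omega>. 2 * (X \<omega> - Y \<omega>)\<^sup>2 + 2 * (Y \<omega> - Z \<omega>)\<^sup>2 \<partial>M)"
    using i[OF X Z] i[OF X Y] i[OF Y Z] square_add_le[of "X \<omega> - Y \<omega>" "Y \<omega> - Z \<omega>" for \<omega>]
    by (intro integral_mono) auto
  also have "\<dots> = 2 * (\<integral>\<omega>. (X \<omega> - Y \<omega>)\<^sup>2 \<partial>M) + 2 * (\<integral>\<omega>. (Y \<omega> - Z \<omega>)\<^sup>2 \<partial>M)"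
    using i[OF X Y] i[OF Y Z] by simp
  finally show ?thesis .
qed

lemma L2_L2lim:
  assumes S: "\<And>N. L2 p (S N)" and G: "G \<in> borel_measurable M" and lim: "L2lim p S G"
  shows "L2 p G"
proof -
  have l: "(\<lambda>N. sqnorm M (\<lambda>\<omega>. S N \<omega> - G \<omega>)) \<longlonglongrightarrow> 0" using lim unfolding L2lim_def sqnorm_def by simp
  have "eventually (\<lambda>N. sqnorm M (\<lambda>\<omega>. S N \<omega> - G \<omega>) < 1) sequentially"
    using l by (intro order_tendstoD(2)) auto
  then obtain N where N: "sqnorm M (\<lambda>\<omega>. S N \<omega> - G \<omega>) < 1" by (auto simp: eventually_sequentially)
  have "sqnorm M G = sqnorm M (\<lambda>\<omega>. G \<omega> - 0)" by simp
  also have "\<dots> \<le> 2 * sqnorm M (\<lambda>\<omega>. G \<omega> - S N \<omega>) + 2 * sqnorm M (\<lambda>\<omega>. S N \<omega> - 0)"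
    using S[of N] G by (intro sqnorm_diff_triangle) (auto simp: L2_def)
  also have "\<dots> < \<infinity>"
  proof -
    have a: "sqnorm M (\<lambda>\<omega>. S N \<omega> - G \<omega>) \<noteq> \<top>" using N by auto
    have b: "sqnorm M (S N) \<noteq> \<top>" using S[of N] unfolding L2_iff_sqnorm by auto
    show ?thesis using a b sqnorm_diff_commute[of G "S N"] by (simp add: ennreal_mult_eq_top_iff less_top[symmetric])
  qed
  finally show ?thesis unfolding L2_iff_sqnorm using G by simp
qed

lemma integral_sq_eq_sqnorm: "L2 p X \<Longrightarrow> (\<integral>\<omega>. (X \<omega>)\<^sup>2 \<partial>M) = enn2real (sqnorm M X)"
  using sqnorm_eq_integral[of X] by simp

lemma L2lim_integral_mult:
  assumes S: "\<And>N. L2 p (S N)" and G: "L2 p G" and Y: "L2 p Y" and lim: "L2lim p S G"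
  shows "(\<lambda>N. \<integral>\<omega>. S N \<omega> * Y \<omega> \<partial>M) \<longlonglongrightarrow> (\<integral>\<omega>. G \<omega> * Y \<omega> \<partial>M)"
proof -
  define x where "x N = (\<integral>\<omega>. (S N \<omega> - G \<omega>) * Y \<omega> \<partial>M)" for N
  define b where "b N = enn2real (sqnorm M (\<lambda>\<omega>. S N \<omega> - G \<omega>))" for N
  have l: "(\<lambda>N. sqnorm M (\<lambda>\<omega>. S N \<omega> - G \<omega>)) \<longlonglongrightarrow> 0" using lim unfolding L2lim_def sqnorm_def by simp
  have b: "b \<longlonglongrightarrow> 0" unfolding b_def using l by (intro tendsto_enn2real) auto
  have D: "L2 p (\<lambda>\<omega>. S N \<omega> - G \<omega>)" for N using S G by (rule L2_diff)
  have "x \<longlonglongrightarrow> 0"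
  proof (rule tendsto_zero_of_weighted_bound[OF _ b])
    show "0 \<le> (\<integral>\<omega>. (Y \<omega>)\<^sup>2 \<partial>M)" by simp
    fix N and e :: real assume e: "e > 0"
    have "\<bar>x N\<bar> = \<bar>\<integral>\<omega>. Y \<omega> * (S N \<omega> - G \<omega>) \<partial>M\<bar>" unfolding x_def by (simp add: mult.commute)
    also have "\<dots> \<le> e / 2 * (\<integral>\<omega>. (Y \<omega>)\<^sup>2 \<partial>M) + 1 / (2 * e) * (\<integral>\<omega>. (S N \<omega> - G \<omega>)\<^sup>2 \<partial>M)"
      using Y D[of N] e by (intro abs_integral_mult_le) (auto simp: L2_def)
    also have "(\<integral>\<omega>. (S N \<omega> - G \<omega>)\<^sup>2 \<partial>M) = b N" unfolding b_def by (rule integral_sq_eq_sqnorm[OF D])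
    also have "e / 2 * (\<integral>\<omega>. (Y \<omega>)\<^sup>2 \<partial>M) + 1 / (2 * e) * b N \<le> e * (\<integral>\<omega>. (Y \<omega>)\<^sup>2 \<partial>M) + b N / e"
    proof -
      have "0 \<le> (\<integral>\<omega>. (Y \<omega>)\<^sup>2 \<partial>M)" "0 \<le> b N" by (auto simp: b_def)
      then show ?thesis using e by (intro add_mono) (auto simp: field_simps)
    qed
    finally show "\<bar>x N\<bar> \<le> e * (\<integral>\<omega>. (Y \<omega>)\<^sup>2 \<partial>M) + b N / e" .
  qed
  moreover have "x N = (\<integral>\<omega>. S N \<omega> * Y \<omega> \<partial>M) - (\<integral>\<omega>. G \<omega> * Y \<omega> \<partial>M)" for N
    unfolding x_def left_diff_distrib using L2_integrable_mult[OF S Y] L2_integrable_mult[OF G Y] by simp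
  ultimately have "(\<lambda>N. (\<integral>\<omega>. S N \<omega> * Y \<omega> \<partial>M) - (\<integral>\<omega>. G \<omega> * Y \<omega> \<partial>M)) \<longlonglongrightarrow> 0"
  proof -
    assume a: "x \<longlonglongrightarrow> 0" and b: "\<And>N. x N = (\<integral>\<omega>. S N \<omega> * Y \<omega> \<partial>M) - (\<integral>\<omega>. G \<omega> * Y \<omega> \<partial>M)"
    have "x = (\<lambda>N. (\<integral>\<omega>. S N \<omega> * Y \<omega> \<partial>M) - (\<integral>\<omega>. G \<omega> * Y \<omega> \<partial>M))" using b by (rule ext)
    with a show ?thesis by simp
  qed
  then show ?thesis by (simp add: LIM_zero_iff)
qed

lemma D12_iff: "D12 p G \<longleftrightarrow> L2 p G \<and> proc_sqnorm M (grad G) < \<infinity>"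
  unfolding D12_def proc_sqnorm_def by simp

lemma borel_measurable_grad: "X \<in> borel_measurable M \<Longrightarrow> grad X k \<in> borel_measurable M"
  using borel_measurable_Dk[of X k] by simp

lemma proc_sqnorm_grad_split:
  assumes "Q \<in> borel_measurable M" "Qm \<in> borel_measurable M"
  shows "proc_sqnorm M (grad Q) \<le> 2 * proc_sqnorm M (grad Qm) + 2 * proc_sqnorm M (grad (\<lambda>\<omega>. Q \<omega> - Qm \<omega>))"
proof -
  have "proc_sqnorm M (grad Q) \<le> (\<integral>\<^sup>+\<omega>. 2 * (\<Sum>k. ennreal ((Dk p k Qm \<omega>)\<^sup>2)) + 2 * (\<Sum>k. ennreal ((Dk p k (\<lambda>\<omega>. Q \<omega> - Qm \<omega>) \<omega>)\<^sup>2)) \<partial>M)"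
    unfolding proc_sqnorm_def
  proof (intro nn_integral_mono)
    fix \<omega>
    have "(\<Sum>k. ennreal ((Dk p k Q \<omega>)\<^sup>2)) \<le> (\<Sum>k. 2 * ennreal ((Dk p k Qm \<omega>)\<^sup>2) + 2 * ennreal ((Dk p k (\<lambda>\<omega>. Q \<omega> - Qm \<omega>) \<omega>)\<^sup>2))"
    proof (intro suminf_le summableI)
      fix k
      have "ennreal ((Dk p k Q \<omega>)\<^sup>2) \<le> ennreal (2 * (Dk p k Qm \<omega>)\<^sup>2 + 2 * (Dk p k (\<lambda>\<omega>. Q \<omega> - Qm \<omega>) \<omega>)\<^sup>2)"
        by (intro ennreal_leI Dk_sq_split_le)
      then show "ennreal ((Dk p k Q \<omega>)\<^sup>2) \<le> 2 * ennreal ((Dk p k Qm \<omega>)\<^sup>2) + 2 * ennreal ((Dk p k (\<lambda>\<omega>. Q \<omega> - Qm \<omega>) \<omega>)\<^sup>2)"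
        by (simp add: ennreal_plus ennreal_mult)
    qed
    also have "\<dots> = 2 * (\<Sum>k. ennreal ((Dk p k Qm \<omega>)\<^sup>2)) + 2 * (\<Sum>k. ennreal ((Dk p k (\<lambda>\<omega>. Q \<omega> - Qm \<omega>) \<omega>)\<^sup>2))"
      by (subst suminf_add[symmetric]) (auto intro: summableI)
    finally show "(\<Sum>k. ennreal ((Dk p k Q \<omega>)\<^sup>2)) \<le> \<dots>" .
  qed
  also have "\<dots> = 2 * proc_sqnorm M (grad Qm) + 2 * proc_sqnorm M (grad (\<lambda>\<omega>. Q \<omega> - Qm \<omega>))"
    unfolding proc_sqnorm_def using assms
    by (subst nn_integral_add) (auto intro!: borel_measurable_suminf_order borel_measurable_Dk simp: nn_integral_cmult)
  finally show ?thesis .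
qed

lemma proc_sqnorm_grad_mult: "X \<in> borel_measurable M \<Longrightarrow> proc_sqnorm M (grad (\<lambda>\<omega>. r * X \<omega>)) = ennreal (r\<^sup>2) * proc_sqnorm M (grad X)"
proof -
  assume Xm: "X \<in> borel_measurable M"
  have "proc_sqnorm M (grad (\<lambda>\<omega>. r * X \<omega>)) = (\<integral>\<^sup>+\<omega>. ennreal (r\<^sup>2) * (\<Sum>k. ennreal ((grad X k \<omega>)\<^sup>2)) \<partial>M)"
    unfolding proc_sqnorm_def
  proof (intro nn_integral_cong)
    fix \<omega>
    have e: "ennreal ((Dk p k (\<lambda>\<omega>. r * X \<omega>) \<omega>)\<^sup>2) = ennreal (r\<^sup>2) * ennreal ((Dk p k X \<omega>)\<^sup>2)" for k
    proof -
      have "(Dk p k (\<lambda>\<omega>. r * X \<omega>) \<omega>)\<^sup>2 = r\<^sup>2 * (Dk p k X \<omega>)\<^sup>2"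
        by (simp only: Dk_scale) (simp add: power_mult_distrib)
      then show ?thesis by (simp add: ennreal_mult)
    qed
    show "(\<Sum>k. ennreal ((grad (\<lambda>\<omega>. r * X \<omega>) k \<omega>)\<^sup>2)) = ennreal (r\<^sup>2) * (\<Sum>k. ennreal ((grad X k \<omega>)\<^sup>2))"
      by (simp only: e ennreal_suminf_cmult)
  qed
  also have "\<dots> = ennreal (r\<^sup>2) * proc_sqnorm M (grad X)" unfolding proc_sqnorm_def using Xm
    by (intro nn_integral_cmult) (auto intro!: borel_measurable_suminf_order borel_measurable_Dk)
  finally show ?thesis .
qed

lemma D12_measurable: "D12 p X \<Longrightarrow> X \<in> borel_measurable M"
  unfolding D12_iff L2_def by simp

lemma D12_scale: "D12 p X \<Longrightarrow> D12 p (\<lambda>\<omega>. r * X \<omega>)"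
  using proc_sqnorm_grad_mult[of X r] D12_measurable[of X] unfolding D12_iff
  by (auto intro: L2_scale simp: ennreal_mult_less_top)

lemma D12_add: "D12 p X \<Longrightarrow> D12 p Y \<Longrightarrow> D12 p (\<lambda>\<omega>. X \<omega> + Y \<omega>)"
proof -
  assume X: "D12 p X" and Y: "D12 p Y"
  have Xm: "X \<in> borel_measurable M" and Ym: "Y \<in> borel_measurable M" using X Y by (auto intro: D12_measurable)
  have "proc_sqnorm M (grad (\<lambda>\<omega>. X \<omega> + Y \<omega>)) \<le> 2 * proc_sqnorm M (grad X) + 2 * proc_sqnorm M (grad (\<lambda>\<omega>. (X \<omega> + Y \<omega>) - X \<omega>))"
    using Xm Ym by (intro proc_sqnorm_grad_split) auto
  also have "(\<lambda>\<omega>. (X \<omega> + Y \<omega>) - X \<omega>) = Y" by auto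
  also have "2 * proc_sqnorm M (grad X) + 2 * proc_sqnorm M (grad Y) < \<infinity>"
    using X Y unfolding D12_iff by (simp add: ennreal_mult_eq_top_iff less_top[symmetric])
  finally show ?thesis using X Y unfolding D12_iff by (auto intro: L2_add)
qed

lemma D12_zero: "D12 p (\<lambda>\<omega>. 0)"
  unfolding D12_iff proc_sqnorm_def Dk_def by (auto intro: L2_bounded[where C=0])

lemma D12_sum: "finite A \<Longrightarrow> (\<And>n. n \<in> A \<Longrightarrow> D12 p (X n)) \<Longrightarrow> D12 p (\<lambda>\<omega>. \<Sum>n\<in>A. X n \<omega>)"
proof (induction A rule: finite_induct)
  case empty then show ?case using D12_zero by simp
next
  case (insert x F) then show ?case by (auto intro!: D12_add)
qed

lemma D12_proc_sqnorm_finite: "D12 p X \<Longrightarrow> proc_sqnorm M (grad X) < \<infinity>" unfolding D12_iff by simp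

lemma D12_L2: "D12 p X \<Longrightarrow> L2 p X" unfolding D12_iff by simp

lemma integrable_ipair_grad: "D12 p X \<Longrightarrow> D12 p Y \<Longrightarrow> integrable M (\<lambda>\<omega>. ipair (\<lambda>k. Dk p k X \<omega>) (\<lambda>k. Dk p k Y \<omega>))"
  using integrable_ipair(1)[OF borel_measurable_grad borel_measurable_grad D12_proc_sqnorm_finite D12_proc_sqnorm_finite] D12_measurable by auto

lemma AE_summable_ipair_grad: "D12 p X \<Longrightarrow> D12 p Y \<Longrightarrow> AE \<omega> in M. summable (\<lambda>k. \<bar>Dk p k X \<omega> * Dk p k Y \<omega>\<bar>)"
  using integrable_ipair(2)[OF borel_measurable_grad borel_measurable_grad D12_proc_sqnorm_finite D12_proc_sqnorm_finite] D12_measurable by auto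

lemma D12_diff: "D12 p X \<Longrightarrow> D12 p Y \<Longrightarrow> D12 p (\<lambda>\<omega>. X \<omega> - Y \<omega>)"
  using D12_add[of X "\<lambda>\<omega>. (-1) * Y \<omega>"] D12_scale[of Y "-1"] by simp

lemma integral_ipair_grad_diff:
  assumes G: "D12 p G" and X: "D12 p X" and Y: "D12 p Y"
  shows "(\<integral>\<omega>. ipair (\<lambda>k. Dk p k G \<omega>) (\<lambda>k. Dk p k (\<lambda>\<omega>. X \<omega> - Y \<omega>) \<omega>) \<partial>M) =
    (\<integral>\<omega>. ipair (\<lambda>k. Dk p k G \<omega>) (\<lambda>k. Dk p k X \<omega>) \<partial>M) - (\<integral>\<omega>. ipair (\<lambda>k. Dk p k G \<omega>) (\<lambda>k. Dk p k Y \<omega>) \<partial>M)"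
proof -
  have "AE \<omega> in M. ipair (\<lambda>k. Dk p k G \<omega>) (\<lambda>k. Dk p k (\<lambda>\<omega>. X \<omega> - Y \<omega>) \<omega>) =
      ipair (\<lambda>k. Dk p k G \<omega>) (\<lambda>k. Dk p k X \<omega>) - ipair (\<lambda>k. Dk p k G \<omega>) (\<lambda>k. Dk p k Y \<omega>)"
    using AE_summable_ipair_grad[OF G X] AE_summable_ipair_grad[OF G Y]
    by eventually_elim (simp add: Dk_diff ipair_diff)
  then have "(\<integral>\<omega>. ipair (\<lambda>k. Dk p k G \<omega>) (\<lambda>k. Dk p k (\<lambda>\<omega>. X \<omega> - Y \<omega>) \<omega>) \<partial>M) =
      (\<integral>\<omega>. ipair (\<lambda>k. Dk p k G \<omega>) (\<lambda>k. Dk p k X \<omega>) - ipair (\<lambda>k. Dk p k G \<omega>) (\<lambda>k. Dk p k Y \<omega>) \<partial>M)"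
    using integrable_ipair_grad[OF G D12_diff[OF X Y]] integrable_ipair_grad[OF G X] integrable_ipair_grad[OF G Y]
    by (intro integral_cong_AE) auto
  then show ?thesis using integrable_ipair_grad[OF G X] integrable_ipair_grad[OF G Y] by simp
qed

lemma integral_ipair_grad_tendsto:
  assumes G: "D12 p G" and Q: "\<And>N. D12 p (Q N)" and Q0: "D12 p Q0"
    and lim: "(\<lambda>N. proc_sqnorm M (grad (\<lambda>\<omega>. Q N \<omega> - Q0 \<omega>))) \<longlonglongrightarrow> 0"
  shows "(\<lambda>N. \<integral>\<omega>. ipair (\<lambda>k. Dk p k G \<omega>) (\<lambda>k. Dk p k (Q N) \<omega>) \<partial>M) \<longlonglongrightarrow> (\<integral>\<omega>. ipair (\<lambda>k. Dk p k G \<omega>) (\<lambda>k. Dk p k Q0 \<omega>) \<partial>M)"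
proof -
  have "(\<lambda>N. \<integral>\<omega>. ipair (\<lambda>k. Dk p k G \<omega>) (\<lambda>k. Dk p k (\<lambda>\<omega>. Q N \<omega> - Q0 \<omega>) \<omega>) \<partial>M) \<longlonglongrightarrow> 0"
    using G D12_diff[OF Q Q0] lim
    by (intro integral_ipair_tendsto_0 borel_measurable_grad D12_measurable D12_proc_sqnorm_finite)
  then show ?thesis
    unfolding integral_ipair_grad_diff[OF G Q Q0] by (simp add: LIM_zero_iff)
qed

lemma D12_minus: "D12 p X \<Longrightarrow> D12 p (\<lambda>\<omega>. - X \<omega>)"
  using D12_scale[of X "-1"] by simp

lemma integral_ipair_grad_sum:
  assumes G: "D12 p G" and A: "finite A" and X: "\<And>n. n \<in> A \<Longrightarrow> D12 p (X n)"
  shows "(\<integral>\<omega>. ipair (\<lambda>k. Dk p k G \<omega>) (\<lambda>k. Dk p k (\<lambda>\<omega>. \<Sum>n\<in>A. c n * X n \<omega>) \<omega>) \<partial>M) =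
    (\<Sum>n\<in>A. c n * (\<integral>\<omega>. ipair (\<lambda>k. Dk p k G \<omega>) (\<lambda>k. Dk p k (X n) \<omega>) \<partial>M))"
proof -
  have int: "integrable M (\<lambda>\<omega>. ipair (\<lambda>k. Dk p k G \<omega>) (\<lambda>k. Dk p k (X n) \<omega>))" if "n \<in> A" for n
    using integrable_ipair_grad[OF G X[OF that]] .
  have "AE \<omega> in M. \<forall>n\<in>A. summable (\<lambda>k. \<bar>Dk p k G \<omega> * Dk p k (X n) \<omega>\<bar>)"
    using A X by (intro eventually_ball_finite ballI AE_summable_ipair_grad[OF G]) auto
  then have "AE \<omega> in M. ipair (\<lambda>k. Dk p k G \<omega>) (\<lambda>k. Dk p k (\<lambda>\<omega>. \<Sum>n\<in>A. c n * X n \<omega>) \<omega>) =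
      (\<Sum>n\<in>A. c n * ipair (\<lambda>k. Dk p k G \<omega>) (\<lambda>k. Dk p k (X n) \<omega>))"
  proof eventually_elim
    case (elim \<omega>)
    have "summable (\<lambda>k. \<bar>Dk p k G \<omega> * (c n * Dk p k (X n) \<omega>)\<bar>)" if "n \<in> A" for n
      using summable_mult[OF elim[rule_format, OF that], of "\<bar>c n\<bar>"] by (simp add: abs_mult ac_simps)
    then have "ipair (\<lambda>k. Dk p k G \<omega>) (\<lambda>k. \<Sum>n\<in>A. c n * Dk p k (X n) \<omega>) =
        (\<Sum>n\<in>A. ipair (\<lambda>k. Dk p k G \<omega>) (\<lambda>k. c n * Dk p k (X n) \<omega>))"
      by (rule ipair_sum[OF A])
    also have "\<dots> = (\<Sum>n\<in>A. c n * ipair (\<lambda>k. Dk p k G \<omega>) (\<lambda>k. Dk p k (X n) \<omega>))"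
      using elim by (intro sum.cong refl ipair_mult_right) auto
    finally show ?case by (simp add: Dk_sum Dk_scale)
  qed
  then have "(\<integral>\<omega>. ipair (\<lambda>k. Dk p k G \<omega>) (\<lambda>k. Dk p k (\<lambda>\<omega>. \<Sum>n\<in>A. c n * X n \<omega>) \<omega>) \<partial>M) =
      (\<integral>\<omega>. (\<Sum>n\<in>A. c n * ipair (\<lambda>k. Dk p k G \<omega>) (\<lambda>k. Dk p k (X n) \<omega>)) \<partial>M)"
    using integrable_ipair_grad[OF G D12_sum[OF A D12_scale[OF X]]] int
    by (intro integral_cong_AE) auto
  also have "\<dots> = (\<Sum>n\<in>A. c n * (\<integral>\<omega>. ipair (\<lambda>k. Dk p k G \<omega>) (\<lambda>k. Dk p k (X n) \<omega>) \<partial>M))"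
    using int by (simp add: Bochner_Integration.integral_sum)
  finally show ?thesis .
qed

lemma proc_sqnorm_grad_eq_integral:
  assumes X: "D12 p X"
  shows "proc_sqnorm M (grad X) = ennreal (\<integral>\<omega>. ipair (\<lambda>k. Dk p k X \<omega>) (\<lambda>k. Dk p k X \<omega>) \<partial>M)"
proof -
  have "proc_sqnorm M (grad X) = (\<integral>\<^sup>+\<omega>. ennreal (ipair (\<lambda>k. Dk p k X \<omega>) (\<lambda>k. Dk p k X \<omega>)) \<partial>M)"
    unfolding proc_sqnorm_def
  proof (intro nn_integral_cong_AE)
    show "AE \<omega> in M. (\<Sum>k. ennreal ((grad X k \<omega>)\<^sup>2)) = ennreal (ipair (\<lambda>k. Dk p k X \<omega>) (\<lambda>k. Dk p k X \<omega>))"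
      using AE_summable_ipair_grad[OF X X]
    proof eventually_elim
      case (elim \<omega>)
      then have s: "summable (\<lambda>k. (Dk p k X \<omega>)\<^sup>2)" by (simp add: power2_eq_square)
      have "(\<Sum>k. ennreal ((Dk p k X \<omega>)\<^sup>2)) = ennreal (\<Sum>k. (Dk p k X \<omega>)\<^sup>2)"
        by (rule suminf_ennreal2[OF _ s]) simp
      also have "(\<Sum>k. (Dk p k X \<omega>)\<^sup>2) = ipair (\<lambda>k. Dk p k X \<omega>) (\<lambda>k. Dk p k X \<omega>)"
        unfolding ipair_def power2_eq_square ..
      finally show ?case .
    qed
  qed
  also have "\<dots> = ennreal (\<integral>\<omega>. ipair (\<lambda>k. Dk p k X \<omega>) (\<lambda>k. Dk p k X \<omega>) \<partial>M)"
  proof (intro nn_integral_eq_integral integrable_ipair_grad[OF X X])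
    show "AE \<omega> in M. 0 \<le> ipair (\<lambda>k. Dk p k X \<omega>) (\<lambda>k. Dk p k X \<omega>)"
      using AE_summable_ipair_grad[OF X X]
    proof eventually_elim
      case (elim \<omega>)
      then have s: "summable (\<lambda>k. Dk p k X \<omega> * Dk p k X \<omega>)" by (simp add: abs_mult)
      show ?case unfolding ipair_def by (rule suminf_nonneg[OF s]) simp
    qed
  qed
  finally show ?thesis .
qed

lemma L2_comp_lipschitz:
  assumes F: "L2 p F" and m: "(\<lambda>\<omega>. \<psi> (F \<omega>)) \<in> borel_measurable M"
    and lip: "\<And>x y. \<bar>\<psi> x - \<psi> y\<bar> \<le> Lc * \<bar>x - y\<bar>"
  shows "L2 p (\<lambda>\<omega>. \<psi> (F \<omega>))"
  unfolding L2_def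
proof (intro conjI m)
  have bound: "(\<psi> (F \<omega>))\<^sup>2 \<le> 2 * (\<psi> 0)\<^sup>2 + 2 * Lc\<^sup>2 * (F \<omega>)\<^sup>2" for \<omega>
  proof -
    have "\<bar>\<psi> (F \<omega>) - \<psi> 0\<bar>\<^sup>2 \<le> (Lc * \<bar>F \<omega>\<bar>)\<^sup>2"
      using lip[of "F \<omega>" 0] by (intro power_mono) auto
    moreover have "(\<psi> (F \<omega>))\<^sup>2 \<le> 2 * (\<psi> 0)\<^sup>2 + 2 * (\<psi> (F \<omega>) - \<psi> 0)\<^sup>2"
      using square_add_le[of "\<psi> 0" "\<psi> (F \<omega>) - \<psi> 0"] by simp
    ultimately show ?thesis by (simp add: power_mult_distrib)
  qed
  show "integrable M (\<lambda>\<omega>. (\<psi> (F \<omega>))\<^sup>2)"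
    by (rule Bochner_Integration.integrable_bound[where f="\<lambda>\<omega>. 2 * (\<psi> 0)\<^sup>2 + 2 * Lc\<^sup>2 * (F \<omega>)\<^sup>2", OF _ _ AE_I2])
      (use bound F m in \<open>auto simp: L2_def\<close>)
qed

lemma Dk_sq_comp_lipschitz_le:
  assumes lip: "\<And>x y. \<bar>\<psi> x - \<psi> y\<bar> \<le> Lc * \<bar>x - y\<bar>"
  shows "(Dk p k (\<lambda>\<omega>. \<psi> (F \<omega>)) \<omega>)\<^sup>2 \<le> Lc\<^sup>2 * (Dk p k F \<omega>)\<^sup>2"
proof -
  have "\<bar>Dk p k (\<lambda>\<omega>. \<psi> (F \<omega>)) \<omega>\<bar> = sdev k * \<bar>\<psi> (F (fun_upd \<omega> k True)) - \<psi> (F (fun_upd \<omega> k False))\<bar>"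
    unfolding Dk_def using sdev_pos[of k] by (simp add: abs_mult)
  also have "\<dots> \<le> sdev k * (Lc * \<bar>F (fun_upd \<omega> k True) - F (fun_upd \<omega> k False)\<bar>)"
    using lip p_bounds[of k] by (intro mult_left_mono) auto
  also have "\<dots> = Lc * \<bar>Dk p k F \<omega>\<bar>"
    unfolding Dk_def using sdev_pos[of k] by (simp add: abs_mult)
  finally have "\<bar>Dk p k (\<lambda>\<omega>. \<psi> (F \<omega>)) \<omega>\<bar>\<^sup>2 \<le> (Lc * \<bar>Dk p k F \<omega>\<bar>)\<^sup>2"
    by (intro power_mono) auto
  then show ?thesis by (simp add: power_mult_distrib)
qed

lemma D12_comp_lipschitz:
  assumes F: "D12 p F" and m: "(\<lambda>\<omega>. \<psi> (F \<omega>)) \<in> borel_measurable M"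
    and lip: "\<And>x y. \<bar>\<psi> x - \<psi> y\<bar> \<le> Lc * \<bar>x - y\<bar>"
  shows "D12 p (\<lambda>\<omega>. \<psi> (F \<omega>))"
proof -
  have "proc_sqnorm M (grad (\<lambda>\<omega>. \<psi> (F \<omega>))) \<le> (\<integral>\<^sup>+\<omega>. ennreal (Lc\<^sup>2) * (\<Sum>k. ennreal ((Dk p k F \<omega>)\<^sup>2)) \<partial>M)"
    unfolding proc_sqnorm_def ennreal_suminf_cmult[symmetric]
    using Dk_sq_comp_lipschitz_le[OF lip]
    by (intro nn_integral_mono suminf_le summableI) (simp add: ennreal_leI flip: ennreal_mult)
  also have "\<dots> = ennreal (Lc\<^sup>2) * proc_sqnorm M (grad F)"
    unfolding proc_sqnorm_def using D12_measurable[OF F]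
    by (intro nn_integral_cmult) (auto intro!: borel_measurable_suminf_order borel_measurable_Dk)
  also have "\<dots> < \<infinity>"
    using D12_proc_sqnorm_finite[OF F] by (simp add: ennreal_mult_less_top)
  finally show ?thesis
    using L2_comp_lipschitz[OF D12_L2[OF F] m lip] unfolding D12_iff by simp
qed

lemma borel_measurable_trunc_exp: "trunc_exp s L \<in> borel_measurable borel"
  unfolding trunc_exp_def[abs_def] by measurable

lemma borel_measurable_trunc_exp': "trunc_exp' s L \<in> borel_measurable borel"
  unfolding trunc_exp'_def[abs_def] by measurable

lemma measurable_trunc_exp_comp: "F \<in> borel_measurable M \<Longrightarrow> (\<lambda>\<omega>. trunc_exp s L (F \<omega>)) \<in> borel_measurable M"
  using measurable_comp[of F M borel "trunc_exp s L" borel] borel_measurable_trunc_exp by (simp add: comp_def)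

lemma measurable_trunc_exp'_comp: "F \<in> borel_measurable M \<Longrightarrow> (\<lambda>\<omega>. trunc_exp' s L (F \<omega>)) \<in> borel_measurable M"
  using measurable_comp[of F M borel "trunc_exp' s L" borel] borel_measurable_trunc_exp' by (simp add: comp_def)

lemma D12_trunc_exp_comp: "D12 p F \<Longrightarrow> s \<ge> 0 \<Longrightarrow> D12 p (\<lambda>\<omega>. trunc_exp s L (F \<omega>))"
  by (rule D12_comp_lipschitz[OF _ measurable_trunc_exp_comp[OF D12_measurable] trunc_exp_lipschitz])

lemma D12_trunc_exp'_comp: "D12 p F \<Longrightarrow> s \<ge> 0 \<Longrightarrow> D12 p (\<lambda>\<omega>. trunc_exp' s L (F \<omega>))"
  by (rule D12_comp_lipschitz[OF _ measurable_trunc_exp'_comp[OF D12_measurable] trunc_exp'_lipschitz])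

text \<open>The discrete chain rule with its error term; the factor multiplying \<open>Dk p k (trunc_exp' s L \<circ> F)\<close>
  is the \<open>k\<close>-th component of the process \<open>u\<close> of the main theorem.\<close>

lemma Dk_trunc_exp_mult_le:
  assumes s: "s \<ge> 0"
  shows "Dk p k (\<lambda>\<omega>. trunc_exp s L (F \<omega>)) \<omega> * (- Dk p k H \<omega>) \<le>
    trunc_exp' s L (F \<omega>) * (Dk p k F \<omega> * (- Dk p k H \<omega>)) +
    Dk p k (\<lambda>\<omega>. trunc_exp' s L (F \<omega>)) \<omega> * ((1 / sdev k) * Dk p k F \<omega> * \<bar>Dk p k H \<omega>\<bar>)"
proof -
  define a where "a = F (fun_upd \<omega> k True)"
  define b where "b = F (fun_upd \<omega> k False)"
  define h where "h = Dk p k H \<omega>"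
  define c where "c = sdev k"
  have c: "c > 0" unfolding c_def by (rule sdev_pos)
  have Fw: "F \<omega> = a \<or> F \<omega> = b"
    by (cases "\<omega> k") (simp_all add: a_def b_def fun_upd_idem)
  have DG: "Dk p k (\<lambda>\<omega>. trunc_exp s L (F \<omega>)) \<omega> = c * (trunc_exp s L a - trunc_exp s L b)" unfolding Dk_def a_def b_def c_def by simp
  have DG': "Dk p k (\<lambda>\<omega>. trunc_exp' s L (F \<omega>)) \<omega> = c * (trunc_exp' s L a - trunc_exp' s L b)" unfolding Dk_def a_def b_def c_def by simp
  have DF: "Dk p k F \<omega> = c * (a - b)" unfolding Dk_def a_def b_def c_def by simp
  have ch: "\<bar>trunc_exp s L a - trunc_exp s L b - trunc_exp' s L (F \<omega>) * (a - b)\<bar> \<le> (a - b) * (trunc_exp' s L a - trunc_exp' s L b)"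
    by (rule trunc_exp_chain_rule_error[OF s Fw])
  have "c * (trunc_exp s L a - trunc_exp s L b) * (- h) - trunc_exp' s L (F \<omega>) * (c * (a - b) * (- h))
      = c * (trunc_exp s L a - trunc_exp s L b - trunc_exp' s L (F \<omega>) * (a - b)) * (- h)" by (simp add: algebra_simps)
  also have "\<dots> \<le> c * \<bar>trunc_exp s L a - trunc_exp s L b - trunc_exp' s L (F \<omega>) * (a - b)\<bar> * \<bar>h\<bar>"
  proof -
    let ?Y = "trunc_exp s L a - trunc_exp s L b - trunc_exp' s L (F \<omega>) * (a - b)"
    have "c * ?Y * (- h) \<le> \<bar>c * ?Y * (- h)\<bar>" by (rule abs_ge_self)
    also have "\<bar>c * ?Y * (- h)\<bar> = c * \<bar>?Y\<bar> * \<bar>h\<bar>" using c by (simp add: abs_mult)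
    finally show ?thesis .
  qed
  also have "\<dots> \<le> c * ((a - b) * (trunc_exp' s L a - trunc_exp' s L b)) * \<bar>h\<bar>"
    using c ch by (intro mult_right_mono mult_left_mono) auto
  also have "\<dots> = c * (trunc_exp' s L a - trunc_exp' s L b) * ((1 / c) * (c * (a - b)) * \<bar>h\<bar>)"
    using c by (simp add: field_simps)
  finally show ?thesis unfolding DG DG' DF h_def c_def[symmetric] by simp
qed

end

section \<open>Walsh monomials and multiple integrals\<close>

definition walsh :: "(nat \<Rightarrow> real) \<Rightarrow> nat set \<Rightarrow> (nat \<Rightarrow> bool) \<Rightarrow> real" where
  "walsh p S \<omega> = (\<Prod>i\<in>S. Yr p i \<omega>)"

definition distinct_tuples :: "nat \<Rightarrow> nat \<Rightarrow> nat list set" where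
  "distinct_tuples n N = {is. length is = n \<and> distinct is \<and> set is \<subseteq> {..<N}}"

definition chaos_poly :: "(nat \<Rightarrow> real) \<Rightarrow> nat \<Rightarrow> nat \<Rightarrow> ((nat \<Rightarrow> bool) \<Rightarrow> real) \<Rightarrow> bool" where
  "chaos_poly p n N P \<longleftrightarrow> (\<exists>c. \<forall>\<omega>. P \<omega> = (\<Sum>is\<in>distinct_tuples n N. c is * walsh p (set is) \<omega>))"

lemma finite_distinct_tuples: "finite (distinct_tuples n N)"
proof -
  have "distinct_tuples n N \<subseteq> {xs. set xs \<subseteq> {..<N} \<and> length xs = n}" unfolding distinct_tuples_def by auto
  then show ?thesis using finite_lists_length_eq[of "{..<N}" n] finite_subset by auto
qed

context rademacher
begin

lemma Yr_eq: "Yr p k \<omega> = (if \<omega> k then (1 - p k) / sdev k else - p k / sdev k)"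
proof -
  have c: "sdev k > 0" by (rule sdev_pos)
  have "2 * sdev k \<noteq> 0" using c by linarith
  then show ?thesis using p_bounds[of k] unfolding Yr_def Xr_def by (auto simp: field_simps)
qed

lemma abs_Yr_le: "\<bar>Yr p k \<omega>\<bar> \<le> 1 / sdev k"
  using p_bounds[of k] sdev_pos[of k] unfolding Yr_eq by (auto simp: divide_right_mono abs_div_pos)

lemma measurable_component_Mrad: "(\<lambda>\<omega>. \<omega> k) \<in> measurable M (count_space UNIV)"
proof -
  have "(\<lambda>\<omega>. \<omega> k) \<in> measurable M (bern k)"
    unfolding Mrad_def by (rule measurable_component_singleton) auto
  moreover have "measurable M (bern k) = measurable M (count_space UNIV)"
    by (rule measurable_cong_sets) auto
  ultimately show ?thesis by simp
qed

lemma borel_measurable_Yr[measurable]: "(\<lambda>\<omega>. Yr p k \<omega>) \<in> borel_measurable M"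
proof -
  have "(\<lambda>b. if b then (1 - p k) / sdev k else - p k / sdev k) \<circ> (\<lambda>\<omega>. \<omega> k) \<in> borel_measurable M"
    by (rule measurable_comp[OF measurable_component_Mrad]) auto
  then show ?thesis by (simp add: Yr_eq[abs_def] comp_def)
qed

lemma borel_measurable_walsh[measurable]: "(\<lambda>\<omega>. walsh p S \<omega>) \<in> borel_measurable M"
  unfolding walsh_def by measurable

lemma abs_walsh_le: "\<bar>walsh p S \<omega>\<bar> \<le> (\<Prod>i\<in>S. 1 / sdev i)"
  unfolding walsh_def abs_prod by (intro prod_mono) (auto simp: abs_Yr_le)

lemma Yr_fun_upd_other: "i \<noteq> k \<Longrightarrow> Yr p i (fun_upd \<omega> k b) = Yr p i \<omega>"
  unfolding Yr_eq by simp

lemma walsh_fun_upd_notin: "k \<notin> S \<Longrightarrow> walsh p S (fun_upd \<omega> k b) = walsh p S \<omega>"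
  unfolding walsh_def by (rule prod.cong[OF refl]) (metis Yr_fun_upd_other)

lemma walsh_remove: "finite S \<Longrightarrow> k \<in> S \<Longrightarrow> walsh p S \<omega> = Yr p k \<omega> * walsh p (S - {k}) \<omega>"
  unfolding walsh_def by (simp add: prod.remove)

lemma Yr_True: "Yr p k (fun_upd \<omega> k True) = (1 - p k) / sdev k"
  and Yr_False: "Yr p k (fun_upd \<omega> k False) = - p k / sdev k"
  by (simp_all add: Yr_eq)

lemma Yr_True_minus_False: "Yr p k (fun_upd \<omega> k True) - Yr p k (fun_upd \<omega> k False) = 1 / sdev k"
  unfolding Yr_True Yr_False diff_divide_distrib[symmetric] by simp

lemma Dk_walsh_in:
  assumes S: "finite S" "k \<in> S"
  shows "Dk p k (walsh p S) \<omega> = walsh p (S - {k}) \<omega>"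
proof -
  have "Dk p k (walsh p S) \<omega> = sdev k * (Yr p k (fun_upd \<omega> k True) - Yr p k (fun_upd \<omega> k False)) * walsh p (S - {k}) \<omega>"
    unfolding Dk_def using S by (simp add: walsh_remove[OF S] walsh_fun_upd_notin algebra_simps)
  then show ?thesis using p_bounds[of k] by (simp add: Yr_True_minus_False)
qed

lemma Dk_walsh_notin: "k \<notin> S \<Longrightarrow> Dk p k (walsh p S) \<omega> = 0"
  by (rule Dk_eq_0_if_indep) (simp add: walsh_fun_upd_notin)

lemma L2_walsh: "L2 p (walsh p S)"
  by (rule L2_bounded[OF _ abs_walsh_le]) (use borel_measurable_walsh in simp)

lemma integral_mult_walsh_eq_Dk:
  assumes G: "L2 p G" and S: "finite S" "k \<in> S"
  shows "(\<integral>\<omega>. G \<omega> * walsh p S \<omega> \<partial>M) = (\<integral>\<omega>. Dk p k G \<omega> * walsh p (S - {k}) \<omega> \<partial>M)"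
proof -
  have i: "integrable M (\<lambda>\<omega>. G \<omega> * walsh p S \<omega>)"
    by (rule integrable_mult_bounded[OF L2_integrable[OF G] borel_measurable_walsh abs_walsh_le])
  define c where "c = sdev k"
  have "p k * (1 - p k) / c = c"
    unfolding c_def using p_bounds[of k] by (intro real_div_sqrt) simp
  then have p_Yr: "p k * ((1 - p k) / c) = c" "(1 - p k) * (p k / c) = c"
    by (metis times_divide_eq_right mult.commute)+
  have "(\<integral>\<omega>. G \<omega> * walsh p S \<omega> \<partial>M) =
     (\<integral>\<omega>. G (fun_upd \<omega> k True) * walsh p S (fun_upd \<omega> k True) * p k +
          G (fun_upd \<omega> k False) * walsh p S (fun_upd \<omega> k False) * (1 - p k) \<partial>M)"
    by (rule integral_resample(2)[OF i])
  also have "\<dots> = (\<integral>\<omega>. Dk p k G \<omega> * walsh p (S - {k}) \<omega> \<partial>M)"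
  proof (intro Bochner_Integration.integral_cong refl)
    fix \<omega>
    define R where "R = walsh p (S - {k}) \<omega>"
    define Gt Gf where "Gt = G (fun_upd \<omega> k True)" and "Gf = G (fun_upd \<omega> k False)"
    have W: "walsh p S (fun_upd \<omega> k b) = Yr p k (fun_upd \<omega> k b) * R" for b
      unfolding R_def using S by (simp add: walsh_remove[OF S] walsh_fun_upd_notin)
    have "G (fun_upd \<omega> k True) * walsh p S (fun_upd \<omega> k True) * p k +
          G (fun_upd \<omega> k False) * walsh p S (fun_upd \<omega> k False) * (1 - p k) =
        Gt * R * (p k * ((1 - p k) / c)) - Gf * R * ((1 - p k) * (p k / c))"
      unfolding W Yr_True Yr_False c_def[symmetric] Gt_def[symmetric] Gf_def[symmetric]
      by (simp add: algebra_simps)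
    also have "\<dots> = Dk p k G \<omega> * walsh p (S - {k}) \<omega>"
      unfolding p_Yr unfolding Dk_def R_def Gt_def Gf_def c_def by (simp add: algebra_simps)
    finally show "G (fun_upd \<omega> k True) * walsh p S (fun_upd \<omega> k True) * p k +
          G (fun_upd \<omega> k False) * walsh p S (fun_upd \<omega> k False) * (1 - p k) =
          Dk p k G \<omega> * walsh p (S - {k}) \<omega>" .
  qed
  finally show ?thesis .
qed

lemma Dk_walsh: "finite S \<Longrightarrow> Dk p k (walsh p S) \<omega> = (if k \<in> S then walsh p (S - {k}) \<omega> else 0)"
  using Dk_walsh_in Dk_walsh_notin by auto

lemma card_mult_integral_walsh:
  assumes G: "L2 p G" and S: "finite S" "S \<subseteq> {..<N}"
  shows "real (card S) * (\<integral>\<omega>. G \<omega> * walsh p S \<omega> \<partial>M) = (\<Sum>k<N. \<integral>\<omega>. Dk p k G \<omega> * Dk p k (walsh p S) \<omega> \<partial>M)"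
proof -
  have "(\<Sum>k<N. \<integral>\<omega>. Dk p k G \<omega> * Dk p k (walsh p S) \<omega> \<partial>M) =
        (\<Sum>k<N. if k \<in> S then (\<integral>\<omega>. Dk p k G \<omega> * walsh p (S - {k}) \<omega> \<partial>M) else 0)"
    by (intro sum.cong refl) (simp add: Dk_walsh[OF S(1)])
  also have "\<dots> = (\<Sum>k\<in>S. \<integral>\<omega>. Dk p k G \<omega> * walsh p (S - {k}) \<omega> \<partial>M)"
  proof -
    have "S \<inter> {..<N} = S" "{..<N} \<inter> S = S" using S by auto
    then show ?thesis by (simp add: sum.If_cases)
  qed
  also have "\<dots> = (\<Sum>k\<in>S. \<integral>\<omega>. G \<omega> * walsh p S \<omega> \<partial>M)"
    by (intro sum.cong refl) (simp add: integral_mult_walsh_eq_Dk[OF G S(1)])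
  finally show ?thesis by simp
qed

lemma chaos_polyE: "chaos_poly p n N P \<Longrightarrow> \<exists>c. P = (\<lambda>\<omega>. \<Sum>xs\<in>distinct_tuples n N. c xs * walsh p (set xs) \<omega>)"
  unfolding chaos_poly_def by auto

lemma L2_chaos_poly: "chaos_poly p n N P \<Longrightarrow> L2 p P"
  using chaos_polyE[of n N P]
  by (auto intro!: L2_sum L2_scale finite_distinct_tuples L2_walsh)

lemma Dk_chaos_poly_beyond: "chaos_poly p n N P \<Longrightarrow> N \<le> k \<Longrightarrow> Dk p k P \<omega> = 0"
proof -
  assume "chaos_poly p n N P" "N \<le> k"
  then obtain c where P: "P = (\<lambda>\<omega>. \<Sum>xs\<in>distinct_tuples n N. c xs * walsh p (set xs) \<omega>)" using chaos_polyE by blast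
  show ?thesis unfolding P
  proof (rule Dk_eq_0_if_indep)
    fix \<omega> b
    show "(\<Sum>xs\<in>distinct_tuples n N. c xs * walsh p (set xs) (fun_upd \<omega> k b)) = (\<Sum>xs\<in>distinct_tuples n N. c xs * walsh p (set xs) \<omega>)"
    proof (intro sum.cong refl)
      fix xs assume "xs \<in> distinct_tuples n N"
      then have "k \<notin> set xs" using \<open>N \<le> k\<close> by (auto simp: distinct_tuples_def)
      then show "c xs * walsh p (set xs) (fun_upd \<omega> k b) = c xs * walsh p (set xs) \<omega>" by (simp add: walsh_fun_upd_notin)
    qed
  qed
qed

lemma chaos_poly_mono: "chaos_poly p n N P \<Longrightarrow> N \<le> N' \<Longrightarrow> chaos_poly p n N' P"
proof -
  assume "chaos_poly p n N P" "N \<le> N'"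
  then obtain c where P: "P = (\<lambda>\<omega>. \<Sum>xs\<in>distinct_tuples n N. c xs * walsh p (set xs) \<omega>)" using chaos_polyE by blast
  define c' where "c' xs = (if xs \<in> distinct_tuples n N then c xs else 0)" for xs
  have sub: "distinct_tuples n N \<subseteq> distinct_tuples n N'" using \<open>N \<le> N'\<close> by (auto simp: distinct_tuples_def)
  have "P \<omega> = (\<Sum>xs\<in>distinct_tuples n N'. c' xs * walsh p (set xs) \<omega>)" for \<omega>
  proof -
    have "(\<Sum>xs\<in>distinct_tuples n N'. c' xs * walsh p (set xs) \<omega>) = (\<Sum>xs\<in>distinct_tuples n N. c' xs * walsh p (set xs) \<omega>)"
      by (rule sum.mono_neutral_right[OF finite_distinct_tuples sub]) (auto simp: c'_def)
    also have "\<dots> = P \<omega>" unfolding P c'_def by simp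
    finally show ?thesis by simp
  qed
  then show ?thesis unfolding chaos_poly_def by (intro exI[of _ c']) auto
qed

lemma chaos_poly_diff: "chaos_poly p n N P \<Longrightarrow> chaos_poly p n N Q \<Longrightarrow> chaos_poly p n N (\<lambda>\<omega>. P \<omega> - Q \<omega>)"
proof -
  assume "chaos_poly p n N P" "chaos_poly p n N Q"
  then obtain c where P: "P = (\<lambda>\<omega>. \<Sum>xs\<in>distinct_tuples n N. c xs * walsh p (set xs) \<omega>)"
    using chaos_polyE by blast
  obtain d where Q: "Q = (\<lambda>\<omega>. \<Sum>xs\<in>distinct_tuples n N. d xs * walsh p (set xs) \<omega>)"
    using chaos_polyE \<open>chaos_poly p n N Q\<close> by blast
  have "P \<omega> - Q \<omega> = (\<Sum>xs\<in>distinct_tuples n N. (c xs - d xs) * walsh p (set xs) \<omega>)" for \<omega>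
    unfolding P Q by (simp add: sum_subtractf left_diff_distrib)
  then show ?thesis unfolding chaos_poly_def by (intro exI[of _ "\<lambda>xs. c xs - d xs"]) auto
qed

lemma chaos_poly_Jtrunc: "chaos_poly p n N (Jtrunc p n f N)"
proof -
  have "Jtrunc p n f N \<omega> = (\<Sum>xs\<in>distinct_tuples n N. f xs * walsh p (set xs) \<omega>)" for \<omega>
    unfolding Jtrunc_def distinct_tuples_def walsh_def
    by (intro sum.cong refl) (auto simp: prod.distinct_set_conv_list)
  then show ?thesis unfolding chaos_poly_def by (intro exI[of _ f]) auto
qed

lemma chaos_poly_duality:
  assumes P: "chaos_poly p n N P" and G: "L2 p G"
  shows "integrable M (\<lambda>\<omega>. \<Sum>k<N. Dk p k G \<omega> * Dk p k P \<omega>)"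
    and "real n * (\<integral>\<omega>. G \<omega> * P \<omega> \<partial>M) = (\<integral>\<omega>. (\<Sum>k<N. Dk p k G \<omega> * Dk p k P \<omega>) \<partial>M)"
proof -
  obtain c where Pe: "P = (\<lambda>\<omega>. \<Sum>xs\<in>distinct_tuples n N. c xs * walsh p (set xs) \<omega>)"
    using chaos_polyE[OF P] by blast
  have iDD: "integrable M (\<lambda>\<omega>. Dk p k G \<omega> * Dk p k (walsh p S) \<omega>)" for k S
    by (rule L2_integrable_mult[OF L2_Dk[OF G] L2_Dk[OF L2_walsh]])
  have iGW: "integrable M (\<lambda>\<omega>. G \<omega> * walsh p S \<omega>)" for S
    by (rule L2_integrable_mult[OF G L2_walsh])
  have DP: "(\<Sum>k<N. Dk p k G \<omega> * Dk p k P \<omega>) =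
      (\<Sum>k<N. \<Sum>xs\<in>distinct_tuples n N. c xs * (Dk p k G \<omega> * Dk p k (walsh p (set xs)) \<omega>))" for \<omega>
    unfolding Pe by (simp add: Dk_sum Dk_scale sum_distrib_left algebra_simps)
  show "integrable M (\<lambda>\<omega>. \<Sum>k<N. Dk p k G \<omega> * Dk p k P \<omega>)"
    unfolding DP by (intro Bochner_Integration.integrable_sum Bochner_Integration.integrable_mult_right iDD)
  have "(\<integral>\<omega>. G \<omega> * P \<omega> \<partial>M) = (\<integral>\<omega>. (\<Sum>xs\<in>distinct_tuples n N. c xs * (G \<omega> * walsh p (set xs) \<omega>)) \<partial>M)"
    unfolding Pe by (simp add: sum_distrib_left mult.left_commute)
  also have "\<dots> = (\<Sum>xs\<in>distinct_tuples n N. c xs * (\<integral>\<omega>. G \<omega> * walsh p (set xs) \<omega> \<partial>M))"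
    by (subst Bochner_Integration.integral_sum) (auto intro!: Bochner_Integration.integrable_mult_right iGW)
  finally have "real n * (\<integral>\<omega>. G \<omega> * P \<omega> \<partial>M)
      = (\<Sum>xs\<in>distinct_tuples n N. c xs * (real n * (\<integral>\<omega>. G \<omega> * walsh p (set xs) \<omega> \<partial>M)))"
    by (simp add: sum_distrib_left mult.left_commute)
  also have "\<dots> = (\<Sum>xs\<in>distinct_tuples n N. c xs * (\<Sum>k<N. \<integral>\<omega>. Dk p k G \<omega> * Dk p k (walsh p (set xs)) \<omega> \<partial>M))"
  proof (intro sum.cong refl arg_cong2[where f="(*)"])
    fix xs assume "xs \<in> distinct_tuples n N"
    then show "real n * (\<integral>\<omega>. G \<omega> * walsh p (set xs) \<omega> \<partial>M)
        = (\<Sum>k<N. \<integral>\<omega>. Dk p k G \<omega> * Dk p k (walsh p (set xs)) \<omega> \<partial>M)"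
      using card_mult_integral_walsh[OF G, of "set xs" N] by (auto simp: distinct_tuples_def distinct_card)
  qed
  also have "\<dots> = (\<integral>\<omega>. (\<Sum>k<N. Dk p k G \<omega> * Dk p k P \<omega>) \<partial>M)"
    unfolding DP using iDD
    by (simp add: Bochner_Integration.integral_sum Bochner_Integration.integrable_sum sum_distrib_left sum.swap[of _ "{..<N}"])
  finally show "real n * (\<integral>\<omega>. G \<omega> * P \<omega> \<partial>M) = (\<integral>\<omega>. (\<Sum>k<N. Dk p k G \<omega> * Dk p k P \<omega>) \<partial>M)" .
qed

lemma proc_sqnorm_grad_chaos_poly:
  assumes Q: "chaos_poly p n N Q"
  shows "proc_sqnorm M (\<lambda>k. Dk p k Q) = ennreal (real n) * sqnorm M Q"
proof -
  have LQ: "L2 p Q" by (rule L2_chaos_poly[OF Q])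
  have "proc_sqnorm M (\<lambda>k. Dk p k Q) = (\<integral>\<^sup>+\<omega>. ennreal (\<Sum>k<N. Dk p k Q \<omega> * Dk p k Q \<omega>) \<partial>M)"
    unfolding proc_sqnorm_def
  proof (intro nn_integral_cong)
    fix \<omega>
    have "(\<Sum>k. ennreal ((Dk p k Q \<omega>)\<^sup>2)) = (\<Sum>k<N. ennreal ((Dk p k Q \<omega>)\<^sup>2))"
      by (rule suminf_finite) (auto simp: Dk_chaos_poly_beyond[OF Q])
    also have "\<dots> = ennreal (\<Sum>k<N. Dk p k Q \<omega> * Dk p k Q \<omega>)" by (simp add: power2_eq_square)
    finally show "(\<Sum>k. ennreal ((Dk p k Q \<omega>)\<^sup>2)) = ennreal (\<Sum>k<N. Dk p k Q \<omega> * Dk p k Q \<omega>)" .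
  qed
  also have "\<dots> = ennreal (\<integral>\<omega>. (\<Sum>k<N. Dk p k Q \<omega> * Dk p k Q \<omega>) \<partial>M)"
    using chaos_poly_duality(1)[OF Q LQ] by (intro nn_integral_eq_integral) (auto intro!: AE_I2 sum_nonneg)
  also have "(\<integral>\<omega>. (\<Sum>k<N. Dk p k Q \<omega> * Dk p k Q \<omega>) \<partial>M) = real n * (\<integral>\<omega>. Q \<omega> * Q \<omega> \<partial>M)"
    using chaos_poly_duality(2)[OF Q LQ] by simp
  also have "ennreal (real n * (\<integral>\<omega>. Q \<omega> * Q \<omega> \<partial>M)) = ennreal (real n) * sqnorm M Q"
    using sqnorm_eq_integral[OF LQ] by (simp add: ennreal_mult power2_eq_square)
  finally show ?thesis .
qed

lemma D12_chaos_poly: "chaos_poly p n N P \<Longrightarrow> D12 p P"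
  using proc_sqnorm_grad_chaos_poly[of n N P] L2_chaos_poly[of n N P]
  unfolding D12_iff L2_iff_sqnorm by (simp add: ennreal_mult_less_top)

context
  fixes n :: nat and f :: "nat list \<Rightarrow> real" and J :: "(nat \<Rightarrow> bool) \<Rightarrow> real"
  assumes J: "is_J p n f J"
begin

lemma L2_is_J: "L2 p J"
  using J unfolding is_J_def by (intro L2_L2lim[where S="Jtrunc p n f", OF L2_chaos_poly[OF chaos_poly_Jtrunc]]) auto

lemma proc_sqnorm_grad_Jtrunc_diff_le:
  "proc_sqnorm M (grad (\<lambda>\<omega>. Jtrunc p n f N \<omega> - J \<omega>)) \<le> 4 * (ennreal (real n) * sqnorm M (\<lambda>\<omega>. Jtrunc p n f N \<omega> - J \<omega>))"
proof -
  define P where "P = Jtrunc p n f"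
  have Pm: "P m \<in> borel_measurable M" for m
    unfolding P_def using L2_chaos_poly[OF chaos_poly_Jtrunc] by (simp add: L2_def)
  have Jm: "J \<in> borel_measurable M" and lim: "(\<lambda>m. sqnorm M (\<lambda>\<omega>. P m \<omega> - J \<omega>)) \<longlonglongrightarrow> 0"
    using J unfolding is_J_def L2lim_def sqnorm_def P_def by auto
  have "proc_sqnorm M (grad (\<lambda>\<omega>. P N \<omega> - J \<omega>)) \<le> 2 * (ennreal (real n) * (2 * sqnorm M (\<lambda>\<omega>. P N \<omega> - J \<omega>) + 2 * 0))"
  proof (rule proc_sqnorm_grad_limit_le_tendsto[where Qs="\<lambda>m \<omega>. P N \<omega> - P m \<omega>"])
    show "(\<lambda>\<omega>. P N \<omega> - P m \<omega>) \<in> borel_measurable M" for m using Pm by auto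
    show "(\<lambda>\<omega>. P N \<omega> - J \<omega>) \<in> borel_measurable M" using Pm Jm by auto
    show "(\<lambda>m. sqnorm M (\<lambda>\<omega>. (P N \<omega> - P m \<omega>) - (P N \<omega> - J \<omega>))) \<longlonglongrightarrow> 0"
      using lim by (simp add: sqnorm_diff_commute[of J])
    show "proc_sqnorm M (grad (\<lambda>\<omega>. P N \<omega> - P m \<omega>))
        \<le> ennreal (real n) * (2 * sqnorm M (\<lambda>\<omega>. P N \<omega> - J \<omega>) + 2 * sqnorm M (\<lambda>\<omega>. P m \<omega> - J \<omega>))" for m
    proof -
      have "chaos_poly p n (max N m) (\<lambda>\<omega>. P N \<omega> - P m \<omega>)"
        unfolding P_def by (intro chaos_poly_diff chaos_poly_mono[OF chaos_poly_Jtrunc]) auto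
      then have "proc_sqnorm M (grad (\<lambda>\<omega>. P N \<omega> - P m \<omega>)) = ennreal (real n) * sqnorm M (\<lambda>\<omega>. P N \<omega> - P m \<omega>)"
        by (rule proc_sqnorm_grad_chaos_poly)
      also have "sqnorm M (\<lambda>\<omega>. P N \<omega> - P m \<omega>) \<le> 2 * sqnorm M (\<lambda>\<omega>. P N \<omega> - J \<omega>) + 2 * sqnorm M (\<lambda>\<omega>. J \<omega> - P m \<omega>)"
        using Pm Jm by (intro sqnorm_diff_triangle)
      finally show ?thesis by (simp add: mult_left_mono sqnorm_diff_commute[of J])
    qed
    show "(\<lambda>m. ennreal (real n) * (2 * sqnorm M (\<lambda>\<omega>. P N \<omega> - J \<omega>) + 2 * sqnorm M (\<lambda>\<omega>. P m \<omega> - J \<omega>)))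
        \<longlonglongrightarrow> ennreal (real n) * (2 * sqnorm M (\<lambda>\<omega>. P N \<omega> - J \<omega>) + 2 * 0)"
      by (intro ennreal_tendsto_cmult tendsto_add tendsto_const lim) auto
  qed
  then show ?thesis unfolding P_def by (simp add: mult_ac)
qed

lemma proc_sqnorm_grad_Jtrunc_diff_tendsto:
  "(\<lambda>N. proc_sqnorm M (grad (\<lambda>\<omega>. Jtrunc p n f N \<omega> - J \<omega>))) \<longlonglongrightarrow> 0"
proof (rule tendsto_sandwich[OF _ _ tendsto_const])
  have "(\<lambda>N. 4 * (ennreal (real n) * sqnorm M (\<lambda>\<omega>. Jtrunc p n f N \<omega> - J \<omega>))) \<longlonglongrightarrow> 4 * (ennreal (real n) * 0)"
    using J unfolding is_J_def L2lim_def sqnorm_def by (intro ennreal_tendsto_cmult) auto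
  then show "(\<lambda>N. 4 * (ennreal (real n) * sqnorm M (\<lambda>\<omega>. Jtrunc p n f N \<omega> - J \<omega>))) \<longlonglongrightarrow> 0"
    by simp
qed (use proc_sqnorm_grad_Jtrunc_diff_le in auto)

lemma D12_is_J: "D12 p J"
proof -
  let ?P = "Jtrunc p n f 0"
  have "sqnorm M (\<lambda>\<omega>. ?P \<omega> - J \<omega>) < \<infinity>"
    using L2_diff[OF L2_chaos_poly[OF chaos_poly_Jtrunc] L2_is_J] unfolding L2_iff_sqnorm by simp
  then have "proc_sqnorm M (grad (\<lambda>\<omega>. ?P \<omega> - J \<omega>)) < \<infinity>"
    using proc_sqnorm_grad_Jtrunc_diff_le[of 0] by (auto simp: ennreal_mult_less_top le_less_trans)
  then have "D12 p (\<lambda>\<omega>. ?P \<omega> - J \<omega>)"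
    unfolding D12_iff using L2_diff[OF L2_chaos_poly[OF chaos_poly_Jtrunc] L2_is_J] by simp
  then have "D12 p (\<lambda>\<omega>. ?P \<omega> - (?P \<omega> - J \<omega>))"
    by (rule D12_diff[OF D12_chaos_poly[OF chaos_poly_Jtrunc]])
  then show ?thesis by simp
qed

lemma is_J_duality:
  assumes G: "D12 p G"
  shows "real n * (\<integral>\<omega>. G \<omega> * J \<omega> \<partial>M) = (\<integral>\<omega>. ipair (\<lambda>k. Dk p k G \<omega>) (\<lambda>k. Dk p k J \<omega>) \<partial>M)"
proof -
  define P where "P = Jtrunc p n f"
  have P: "chaos_poly p n N (P N)" for N unfolding P_def by (rule chaos_poly_Jtrunc)
  have approx: "real n * (\<integral>\<omega>. G \<omega> * P N \<omega> \<partial>M) = (\<integral>\<omega>. ipair (\<lambda>k. Dk p k G \<omega>) (\<lambda>k. Dk p k (P N) \<omega>) \<partial>M)" for N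
  proof -
    have "ipair (\<lambda>k. Dk p k G \<omega>) (\<lambda>k. Dk p k (P N) \<omega>) = (\<Sum>k<N. Dk p k G \<omega> * Dk p k (P N) \<omega>)" for \<omega>
      by (rule ipair_finite_support) (simp add: Dk_chaos_poly_beyond[OF P])
    then show ?thesis using chaos_poly_duality(2)[OF P D12_L2[OF G]] by simp
  qed
  have "(\<lambda>N. real n * (\<integral>\<omega>. G \<omega> * P N \<omega> \<partial>M)) \<longlonglongrightarrow> real n * (\<integral>\<omega>. G \<omega> * J \<omega> \<partial>M)"
    using L2lim_integral_mult[OF L2_chaos_poly[OF P] L2_is_J D12_L2[OF G]] J
    unfolding is_J_def P_def by (intro tendsto_mult_left) (simp add: mult.commute)
  moreover have "(\<lambda>N. \<integral>\<omega>. ipair (\<lambda>k. Dk p k G \<omega>) (\<lambda>k. Dk p k (P N) \<omega>) \<partial>M)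
      \<longlonglongrightarrow> (\<integral>\<omega>. ipair (\<lambda>k. Dk p k G \<omega>) (\<lambda>k. Dk p k J \<omega>) \<partial>M)"
    unfolding P_def using proc_sqnorm_grad_Jtrunc_diff_tendsto
    by (rule integral_ipair_grad_tendsto[OF G D12_chaos_poly[OF chaos_poly_Jtrunc] D12_is_J])
  ultimately show ?thesis unfolding approx by (rule LIMSEQ_unique)
qed

end

end

section \<open>Integration by parts through the chaos expansion\<close>

text \<open>The assumptions unpack \<open>Linv p F H\<close>, with its witnesses \<open>f\<close> and \<open>J\<close> fixed.\<close>

locale chaos_expansion = rademacher +
  fixes F H :: "(nat \<Rightarrow> bool) \<Rightarrow> real" and f :: "nat \<Rightarrow> nat list \<Rightarrow> real"
    and J :: "nat \<Rightarrow> (nat \<Rightarrow> bool) \<Rightarrow> real"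
  assumes D12_F: "D12 p F"
    and is_J: "\<And>n. n \<ge> 1 \<Longrightarrow> is_J p n (f n) (J n)"
    and L2lim_F: "L2lim p (\<lambda>N \<omega>. (\<integral>\<omega>'. F \<omega>' \<partial>Mrad p) + (\<Sum>n\<in>{1..N}. J n \<omega>)) F"
    and L2lim_H: "L2lim p (\<lambda>N \<omega>. - (\<Sum>n\<in>{1..N}. J n \<omega> / real n)) H"
    and borel_measurable_H: "H \<in> borel_measurable (Mrad p)"
begin

abbreviation "EF \<equiv> \<integral>\<omega>. F \<omega> \<partial>M"

lemma D12_J: "n \<ge> 1 \<Longrightarrow> D12 p (J n)"
  using D12_is_J[OF is_J] .

lemma L2_J: "n \<ge> 1 \<Longrightarrow> L2 p (J n)"
  using L2_is_J[OF is_J] .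

lemma J_duality:
  "n \<ge> 1 \<Longrightarrow> D12 p G \<Longrightarrow> real n * (\<integral>\<omega>. G \<omega> * J n \<omega> \<partial>M) = (\<integral>\<omega>. ipair (\<lambda>k. Dk p k G \<omega>) (\<lambda>k. Dk p k (J n) \<omega>) \<partial>M)"
  using is_J_duality[OF is_J] .

lemma J_orthogonal:
  assumes n: "n \<ge> 1" and m: "m \<ge> 1" and "n \<noteq> m"
  shows "(\<integral>\<omega>. J n \<omega> * J m \<omega> \<partial>M) = 0"
proof -
  have "real n * (\<integral>\<omega>. J n \<omega> * J m \<omega> \<partial>M) = real m * (\<integral>\<omega>. J n \<omega> * J m \<omega> \<partial>M)"
    using J_duality[OF n D12_J[OF m]] J_duality[OF m D12_J[OF n]]
    by (simp add: ipair_commute mult.commute)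
  then show ?thesis using \<open>n \<noteq> m\<close> by simp
qed

text \<open>\<open>J 0\<close> is not part of the expansion, hence the case distinction.\<close>

definition chaos_var :: "nat \<Rightarrow> real" where
  "chaos_var n = (if n \<ge> 1 then \<integral>\<omega>. (J n \<omega>)\<^sup>2 \<partial>M else 0)"

lemma chaos_var_nonneg: "chaos_var n \<ge> 0"
  unfolding chaos_var_def by simp

lemma integral_sum_J_mult:
  assumes A: "finite A" "A \<subseteq> {1..}"
  shows "(\<integral>\<omega>. (\<Sum>n\<in>A. J n \<omega>) * (\<Sum>m\<in>A. w m * J m \<omega>) \<partial>M) = (\<Sum>n\<in>A. w n * chaos_var n)"
proof -
  have JJ: "n \<in> A \<Longrightarrow> m \<in> A \<Longrightarrow> integrable M (\<lambda>\<omega>. J n \<omega> * J m \<omega>)" for n m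
    using A by (intro L2_integrable_mult L2_J) auto
  have "(\<integral>\<omega>. (\<Sum>n\<in>A. J n \<omega>) * (\<Sum>m\<in>A. w m * J m \<omega>) \<partial>M)
      = (\<integral>\<omega>. (\<Sum>n\<in>A. \<Sum>m\<in>A. w m * (J n \<omega> * J m \<omega>)) \<partial>M)"
    by (simp add: sum_product algebra_simps)
  also have "\<dots> = (\<Sum>n\<in>A. \<Sum>m\<in>A. w m * (\<integral>\<omega>. J n \<omega> * J m \<omega> \<partial>M))"
    using JJ A(1) by (simp add: Bochner_Integration.integral_sum Bochner_Integration.integrable_sum)
  also have "\<dots> = (\<Sum>n\<in>A. \<Sum>m\<in>A. if m = n then w n * chaos_var n else 0)"
    using A by (intro sum.cong refl) (auto simp: J_orthogonal chaos_var_def power2_eq_square subset_iff)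
  also have "\<dots> = (\<Sum>n\<in>A. w n * chaos_var n)"
    using A(1) by simp
  finally show ?thesis .
qed

lemma integral_sum_J_sq:
  "finite A \<Longrightarrow> A \<subseteq> {1..} \<Longrightarrow> (\<integral>\<omega>. (\<Sum>n\<in>A. J n \<omega>)\<^sup>2 \<partial>M) = (\<Sum>n\<in>A. chaos_var n)"
  using integral_sum_J_mult[of A "\<lambda>_. 1"] by (simp add: power2_eq_square)

definition chaos_partial :: "nat \<Rightarrow> (nat \<Rightarrow> bool) \<Rightarrow> real" where
  "chaos_partial N \<omega> = EF + (\<Sum>n\<in>{1..N}. J n \<omega>)"

lemma L2lim_chaos_partial: "L2lim p chaos_partial F"
  using L2lim_F unfolding chaos_partial_def[abs_def] .

lemma L2_F: "L2 p F"
  using D12_F by (rule D12_L2)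

lemma L2_sum_J: "L2 p (\<lambda>\<omega>. \<Sum>n\<in>{1..N}. J n \<omega>)"
  by (intro L2_sum L2_J) auto

lemma L2_chaos_partial: "L2 p (chaos_partial N)"
  unfolding chaos_partial_def[abs_def] by (intro L2_add L2_bounded[where C="\<bar>EF\<bar>"] L2_sum_J) auto

text \<open>Bessel's inequality for the chaos decomposition.\<close>

lemma summable_chaos_var: "summable chaos_var"
proof -
  define x where "x N = (\<integral>\<omega>. (chaos_partial N \<omega> - F \<omega>)\<^sup>2 \<partial>M)" for N
  have "x = (\<lambda>N. enn2real (sqnorm M (\<lambda>\<omega>. chaos_partial N \<omega> - F \<omega>)))"
    unfolding x_def by (rule ext) (rule integral_sq_eq_sqnorm[OF L2_diff[OF L2_chaos_partial L2_F]])
  also have "\<dots> \<longlonglongrightarrow> 0"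
    using L2lim_chaos_partial unfolding L2lim_def sqnorm_def by (intro tendsto_enn2real) auto
  finally have "Bseq x" by (intro convergent_imp_Bseq convergentI)
  then obtain K where K: "\<And>N. \<bar>x N\<bar> \<le> K" by (metis BseqE real_norm_def)
  show ?thesis
  proof (rule summableI_nonneg_bounded[OF chaos_var_nonneg])
    fix N
    have "(\<Sum>n<N. chaos_var n) \<le> (\<Sum>n\<le>N. chaos_var n)"
      by (intro sum_mono2) (auto simp: chaos_var_nonneg)
    also have "\<dots> = (\<Sum>n\<in>{1..N}. chaos_var n)"
      by (rule sum.mono_neutral_right) (auto simp: chaos_var_def)
    also have "\<dots> = (\<integral>\<omega>. (chaos_partial N \<omega> - EF)\<^sup>2 \<partial>M)"
      by (subst integral_sum_J_sq[symmetric]) (auto simp: chaos_partial_def)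
    also have "\<dots> \<le> 2 * x N + 2 * (\<integral>\<omega>. (F \<omega> - EF)\<^sup>2 \<partial>M)"
      unfolding x_def by (rule integral_sq_diff_triangle[OF L2_chaos_partial L2_F L2_bounded[where C="\<bar>EF\<bar>"]]) auto
    also have "\<dots> \<le> 2 * K + 2 * (\<integral>\<omega>. (F \<omega> - EF)\<^sup>2 \<partial>M)"
      using K[of N] by simp
    finally show "(\<Sum>n<N. chaos_var n) \<le> 2 * K + 2 * (\<integral>\<omega>. (F \<omega> - EF)\<^sup>2 \<partial>M)" .
  qed
qed

definition chaos_tail :: "nat \<Rightarrow> real" where
  "chaos_tail N = (\<Sum>i. chaos_var (i + Suc N))"

lemma summable_chaos_tail: "summable (\<lambda>i. chaos_var (i + Suc N))"
  using summable_iff_shift[of chaos_var "Suc N"] summable_chaos_var by blast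

lemma chaos_tail_tendsto_0: "chaos_tail \<longlonglongrightarrow> 0"
  unfolding chaos_tail_def[abs_def] by (rule LIMSEQ_Suc[OF suminf_exist_split2[OF summable_chaos_var]])

lemma sum_chaos_var_le_tail: "(\<Sum>n\<in>{Suc N..m}. chaos_var n) \<le> chaos_tail N"
proof -
  have "(\<Sum>n\<in>{Suc N..m}. chaos_var n) = (\<Sum>i\<in>{0..m - Suc N}. chaos_var (i + Suc N))" if "Suc N \<le> m"
    using sum.shift_bounds_cl_nat_ivl[of chaos_var 0 "Suc N" "m - Suc N"] that by simp
  moreover have "(\<Sum>i\<in>{0..m - Suc N}. chaos_var (i + Suc N)) \<le> chaos_tail N"
    unfolding chaos_tail_def by (intro sum_le_suminf summable_chaos_tail) (auto simp: chaos_var_nonneg)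
  moreover have "0 \<le> chaos_tail N"
    unfolding chaos_tail_def by (intro suminf_nonneg summable_chaos_tail chaos_var_nonneg)
  ultimately show ?thesis by (cases "Suc N \<le> m") auto
qed

definition Jdiv_sum :: "nat set \<Rightarrow> (nat \<Rightarrow> bool) \<Rightarrow> real" where
  "Jdiv_sum A \<omega> = (\<Sum>n\<in>A. (1 / real n) * J n \<omega>)"

lemma D12_Jdiv_sum: "finite A \<Longrightarrow> A \<subseteq> {1..} \<Longrightarrow> D12 p (Jdiv_sum A)"
  unfolding Jdiv_sum_def[abs_def] by (intro D12_sum D12_scale D12_J) auto

lemma integral_mult_sum_J:
  assumes G: "D12 p G" and A: "finite A" "A \<subseteq> {1..}"
  shows "(\<integral>\<omega>. G \<omega> * (\<Sum>n\<in>A. J n \<omega>) \<partial>M) = (\<integral>\<omega>. ipair (\<lambda>k. Dk p k G \<omega>) (\<lambda>k. Dk p k (Jdiv_sum A) \<omega>) \<partial>M)"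
proof -
  have "(\<integral>\<omega>. G \<omega> * (\<Sum>n\<in>A. J n \<omega>) \<partial>M) = (\<Sum>n\<in>A. \<integral>\<omega>. G \<omega> * J n \<omega> \<partial>M)"
    unfolding sum_distrib_left using A
    by (intro Bochner_Integration.integral_sum L2_integrable_mult D12_L2 G L2_J) auto
  also have "\<dots> = (\<Sum>n\<in>A. (1 / real n) * (\<integral>\<omega>. ipair (\<lambda>k. Dk p k G \<omega>) (\<lambda>k. Dk p k (J n) \<omega>) \<partial>M))"
    using A J_duality[OF _ G] by (intro sum.cong refl) (auto simp: field_simps)
  also have "\<dots> = (\<integral>\<omega>. ipair (\<lambda>k. Dk p k G \<omega>) (\<lambda>k. Dk p k (Jdiv_sum A) \<omega>) \<partial>M)"
    unfolding Jdiv_sum_def[abs_def] using A D12_J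
    by (intro integral_ipair_grad_sum[OF G, symmetric]) auto
  finally show ?thesis .
qed

lemma proc_sqnorm_grad_Jdiv_sum:
  assumes A: "finite A" "A \<subseteq> {1..}"
  shows "proc_sqnorm M (grad (Jdiv_sum A)) = ennreal (\<Sum>n\<in>A. (1 / real n) * chaos_var n)"
proof -
  have "proc_sqnorm M (grad (Jdiv_sum A))
      = ennreal (\<integral>\<omega>. ipair (\<lambda>k. Dk p k (Jdiv_sum A) \<omega>) (\<lambda>k. Dk p k (Jdiv_sum A) \<omega>) \<partial>M)"
    by (rule proc_sqnorm_grad_eq_integral[OF D12_Jdiv_sum[OF A]])
  also have "(\<integral>\<omega>. ipair (\<lambda>k. Dk p k (Jdiv_sum A) \<omega>) (\<lambda>k. Dk p k (Jdiv_sum A) \<omega>) \<partial>M)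
      = (\<integral>\<omega>. (\<Sum>n\<in>A. J n \<omega>) * (\<Sum>m\<in>A. (1 / real m) * J m \<omega>) \<partial>M)"
    unfolding integral_mult_sum_J[OF D12_Jdiv_sum[OF A] A, symmetric] Jdiv_sum_def by (simp add: mult.commute)
  also have "\<dots> = (\<Sum>n\<in>A. (1 / real n) * chaos_var n)"
    by (rule integral_sum_J_mult[OF A])
  finally show ?thesis .
qed

abbreviation "Jdiv_partial N \<equiv> Jdiv_sum {1..N}"

lemma D12_Jdiv_partial: "D12 p (Jdiv_partial N)"
  by (rule D12_Jdiv_sum) auto

lemma proc_sqnorm_grad_Jdiv_tail:
  assumes "N \<le> m"
  shows "proc_sqnorm M (grad (\<lambda>\<omega>. Jdiv_partial N \<omega> - Jdiv_partial m \<omega>)) \<le> ennreal (chaos_tail N)"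
proof -
  have "{1..m} = {1..N} \<union> {Suc N..m}" using assms by auto
  then have "(\<lambda>\<omega>. Jdiv_partial N \<omega> - Jdiv_partial m \<omega>) = (\<lambda>\<omega>. - Jdiv_sum {Suc N..m} \<omega>)"
    unfolding Jdiv_sum_def by (intro ext) (simp add: sum.union_disjoint)
  then have "proc_sqnorm M (grad (\<lambda>\<omega>. Jdiv_partial N \<omega> - Jdiv_partial m \<omega>)) = proc_sqnorm M (grad (Jdiv_sum {Suc N..m}))"
    by (simp add: proc_sqnorm_def Dk_minus)
  also have "\<dots> = ennreal (\<Sum>n\<in>{Suc N..m}. (1 / real n) * chaos_var n)"
    by (rule proc_sqnorm_grad_Jdiv_sum) auto
  also have "\<dots> \<le> ennreal (chaos_tail N)"
    using chaos_var_nonneg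
    by (intro ennreal_leI order_trans[OF _ sum_chaos_var_le_tail[of N m]] sum_mono mult_left_le_one_le) auto
  finally show ?thesis .
qed

lemma proc_sqnorm_grad_Jdiv_H_le:
  "proc_sqnorm M (grad (\<lambda>\<omega>. Jdiv_partial N \<omega> + H \<omega>)) \<le> 2 * ennreal (chaos_tail N)"
proof (rule proc_sqnorm_grad_limit_le[where Qs="\<lambda>m \<omega>. Jdiv_partial N \<omega> - Jdiv_partial m \<omega>"])
  show "(\<lambda>\<omega>. Jdiv_partial N \<omega> - Jdiv_partial m \<omega>) \<in> borel_measurable M" for m
    using D12_measurable[OF D12_Jdiv_partial] by auto
  show "(\<lambda>\<omega>. Jdiv_partial N \<omega> + H \<omega>) \<in> borel_measurable M"
    using D12_measurable[OF D12_Jdiv_partial] borel_measurable_H by auto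
  have eq: "(Jdiv_partial N \<omega> - Jdiv_partial m \<omega>) - (Jdiv_partial N \<omega> + H \<omega>)
      = - (\<Sum>n\<in>{1..m}. J n \<omega> / real n) - H \<omega>" for m \<omega>
    by (simp add: Jdiv_sum_def)
  show "(\<lambda>m. sqnorm M (\<lambda>\<omega>. (Jdiv_partial N \<omega> - Jdiv_partial m \<omega>) - (Jdiv_partial N \<omega> + H \<omega>))) \<longlonglongrightarrow> 0"
    using L2lim_H unfolding L2lim_def sqnorm_def eq .
  show "eventually (\<lambda>m. proc_sqnorm M (grad (\<lambda>\<omega>. Jdiv_partial N \<omega> - Jdiv_partial m \<omega>)) \<le> ennreal (chaos_tail N)) sequentially"
    using proc_sqnorm_grad_Jdiv_tail by (rule eventually_sequentiallyI)
qed

lemma proc_sqnorm_grad_Jdiv_H_tendsto: "(\<lambda>N. proc_sqnorm M (grad (\<lambda>\<omega>. Jdiv_partial N \<omega> + H \<omega>))) \<longlonglongrightarrow> 0"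
proof (rule tendsto_sandwich[OF _ _ tendsto_const])
  have "(\<lambda>N. 2 * ennreal (chaos_tail N)) \<longlonglongrightarrow> 2 * ennreal 0"
    by (intro ennreal_tendsto_cmult tendsto_ennrealI chaos_tail_tendsto_0) auto
  then show "(\<lambda>N. 2 * ennreal (chaos_tail N)) \<longlonglongrightarrow> 0" by simp
qed (use proc_sqnorm_grad_Jdiv_H_le in auto)

lemma D12_H: "D12 p H"
proof -
  have "L2 p (\<lambda>\<omega>. (-1) * (\<Sum>n\<in>{1..N}. (1 / real n) * J n \<omega>))" for N
    by (intro L2_scale L2_sum L2_J) auto
  then have "L2 p (\<lambda>\<omega>. - (\<Sum>n\<in>{1..N}. J n \<omega> / real n))" for N
    by simp
  then have "L2 p H"
    by (rule L2_L2lim[OF _ borel_measurable_H L2lim_H])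
  moreover have "proc_sqnorm M (grad H) < \<infinity>"
    using proc_sqnorm_grad_Jdiv_H_le[of 0] by (simp add: Jdiv_sum_def ennreal_mult_less_top le_less_trans)
  ultimately show ?thesis unfolding D12_iff by simp
qed

lemma integration_by_parts:
  assumes G: "D12 p G"
  shows "(\<integral>\<omega>. F \<omega> * G \<omega> \<partial>M) = EF * (\<integral>\<omega>. G \<omega> \<partial>M) + (\<integral>\<omega>. ipair (\<lambda>k. Dk p k G \<omega>) (\<lambda>k. - Dk p k H \<omega>) \<partial>M)"
proof -
  have approx: "(\<integral>\<omega>. chaos_partial N \<omega> * G \<omega> \<partial>M)
      = EF * (\<integral>\<omega>. G \<omega> \<partial>M) + (\<integral>\<omega>. ipair (\<lambda>k. Dk p k G \<omega>) (\<lambda>k. Dk p k (Jdiv_partial N) \<omega>) \<partial>M)" for N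
  proof -
    have "(\<integral>\<omega>. chaos_partial N \<omega> * G \<omega> \<partial>M) = (\<integral>\<omega>. EF * G \<omega> + G \<omega> * (\<Sum>n\<in>{1..N}. J n \<omega>) \<partial>M)"
      unfolding chaos_partial_def by (simp add: algebra_simps)
    also have "\<dots> = EF * (\<integral>\<omega>. G \<omega> \<partial>M) + (\<integral>\<omega>. G \<omega> * (\<Sum>n\<in>{1..N}. J n \<omega>) \<partial>M)"
      using L2_integrable[OF D12_L2[OF G]] L2_integrable_mult[OF D12_L2[OF G] L2_sum_J] by simp
    also have "(\<integral>\<omega>. G \<omega> * (\<Sum>n\<in>{1..N}. J n \<omega>) \<partial>M) = (\<integral>\<omega>. ipair (\<lambda>k. Dk p k G \<omega>) (\<lambda>k. Dk p k (Jdiv_partial N) \<omega>) \<partial>M)"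
      by (rule integral_mult_sum_J[OF G]) auto
    finally show ?thesis .
  qed
  have "(\<lambda>N. \<integral>\<omega>. ipair (\<lambda>k. Dk p k G \<omega>) (\<lambda>k. Dk p k (Jdiv_partial N) \<omega>) \<partial>M)
      \<longlonglongrightarrow> (\<integral>\<omega>. ipair (\<lambda>k. Dk p k G \<omega>) (\<lambda>k. Dk p k (\<lambda>\<omega>. - H \<omega>) \<omega>) \<partial>M)"
    using proc_sqnorm_grad_Jdiv_H_tendsto
    by (intro integral_ipair_grad_tendsto[OF G D12_Jdiv_partial D12_minus[OF D12_H]]) simp
  then have "(\<lambda>N. \<integral>\<omega>. chaos_partial N \<omega> * G \<omega> \<partial>M)
      \<longlonglongrightarrow> EF * (\<integral>\<omega>. G \<omega> \<partial>M) + (\<integral>\<omega>. ipair (\<lambda>k. Dk p k G \<omega>) (\<lambda>k. - Dk p k H \<omega>) \<partial>M)"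
    unfolding approx by (intro tendsto_add tendsto_const) (simp add: Dk_minus)
  moreover have "(\<lambda>N. \<integral>\<omega>. chaos_partial N \<omega> * G \<omega> \<partial>M) \<longlonglongrightarrow> (\<integral>\<omega>. F \<omega> * G \<omega> \<partial>M)"
    by (rule L2lim_integral_mult[OF L2_chaos_partial L2_F D12_L2[OF G] L2lim_chaos_partial])
  ultimately show ?thesis by (rule LIMSEQ_unique[rotated])
qed

end

context rademacher
begin

lemma D12_Linv:
  assumes "D12 p F" and "Linv p F H"
  shows "D12 p H"
proof -
  from assms(2) obtain f J where "chaos_expansion p F H f J"
    using assms(1) unfolding Linv_def chaos_expansion_def chaos_expansion_axioms_def by (blast intro: rademacher_axioms)
  then show ?thesis by (rule chaos_expansion.D12_H)
qed

lemma Linv_integration_by_parts: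
  assumes "D12 p F" and "Linv p F H" and "D12 p G"
  shows "(\<integral>\<omega>. F \<omega> * G \<omega> \<partial>M)
    = (\<integral>\<omega>. F \<omega> \<partial>M) * (\<integral>\<omega>. G \<omega> \<partial>M) + (\<integral>\<omega>. ipair (\<lambda>k. Dk p k G \<omega>) (\<lambda>k. - Dk p k H \<omega>) \<partial>M)"
proof -
  from assms(2) obtain f J where "chaos_expansion p F H f J"
    using assms(1) unfolding Linv_def chaos_expansion_def chaos_expansion_axioms_def by (blast intro: rademacher_axioms)
  then show ?thesis using assms(3) by (rule chaos_expansion.integration_by_parts)
qed

end

section \<open>The moment generating function\<close>

locale mgf_setting = rademacher +
  fixes F H du :: "(nat \<Rightarrow> bool) \<Rightarrow> real" and A :: real and \<gamma>1 \<gamma>2 :: "real \<Rightarrow> real"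
  assumes D12_F: "D12 p F"
    and mean_F: "(\<integral>\<omega>. F \<omega> \<partial>Mrad p) = 0"
    and Linv_H: "Linv p F H"
    and div_u: "div_rel p (\<lambda>k \<omega>. (1 / sqrt (p k * (1 - p k))) * Dk p k F \<omega> * \<bar>Dk p k H \<omega>\<bar>) du"
    and A_pos: "A > 0"
    and mono_\<gamma>1: "mono_on {0..A} \<gamma>1"
    and mono_\<gamma>2: "mono_on {0..A} \<gamma>2"
    and integrable_exp: "\<And>t. 0 \<le> t \<Longrightarrow> t \<le> A \<Longrightarrow> integrable (Mrad p) (\<lambda>\<omega>. exp (t * F \<omega>))"
    and \<gamma>1_bound: "\<And>t. 0 \<le> t \<Longrightarrow> t \<le> A \<Longrightarrow>
       integrable (Mrad p) (\<lambda>\<omega>. \<bar>1 - ipair (\<lambda>k. Dk p k F \<omega>) (\<lambda>k. - Dk p k H \<omega>)\<bar> * exp (t * F \<omega>)) \<and>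
       (\<integral>\<omega>. \<bar>1 - ipair (\<lambda>k. Dk p k F \<omega>) (\<lambda>k. - Dk p k H \<omega>)\<bar> * exp (t * F \<omega>) \<partial>Mrad p)
         \<le> \<gamma>1 t * (\<integral>\<omega>. exp (t * F \<omega>) \<partial>Mrad p)"
    and \<gamma>2_bound: "\<And>t. 0 \<le> t \<Longrightarrow> t \<le> A \<Longrightarrow>
       integrable (Mrad p) (\<lambda>\<omega>. \<bar>du \<omega>\<bar> * exp (t * F \<omega>)) \<and>
       (\<integral>\<omega>. \<bar>du \<omega>\<bar> * exp (t * F \<omega>) \<partial>Mrad p) \<le> \<gamma>2 t * (\<integral>\<omega>. exp (t * F \<omega>) \<partial>Mrad p)"
begin

definition mgf :: "real \<Rightarrow> real" where
  "mgf t = (\<integral>\<omega>. exp (t * F \<omega>) \<partial>M)"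

abbreviation u :: "nat \<Rightarrow> (nat \<Rightarrow> bool) \<Rightarrow> real" where
  "u k \<omega> \<equiv> (1 / sdev k) * Dk p k F \<omega> * \<bar>Dk p k H \<omega>\<bar>"

abbreviation "DFH \<omega> \<equiv> ipair (\<lambda>k. Dk p k F \<omega>) (\<lambda>k. - Dk p k H \<omega>)"

lemma borel_measurable_F: "F \<in> borel_measurable M"
  using D12_F by (rule D12_measurable)

lemma D12_H: "D12 p H"
  using D12_Linv[OF D12_F Linv_H] .

lemma borel_measurable_u: "u k \<in> borel_measurable M"
  and proc_sqnorm_u: "proc_sqnorm M u < \<infinity>"
  and L2_du: "L2 p du"
  and u_duality: "D12 p G \<Longrightarrow> (\<integral>\<omega>. ipair (\<lambda>k. Dk p k G \<omega>) (\<lambda>k. u k \<omega>) \<partial>M) = (\<integral>\<omega>. G \<omega> * du \<omega> \<partial>M)"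
  using div_u unfolding div_rel_def L2proc_def proc_sqnorm_def by auto

lemma integrable_ipair_grad_neg_H: "D12 p G \<Longrightarrow> integrable M (\<lambda>\<omega>. ipair (\<lambda>k. Dk p k G \<omega>) (\<lambda>k. - Dk p k H \<omega>))"
  using integrable_ipair_grad[OF _ D12_minus[OF D12_H]] by (simp add: Dk_minus)


lemma AE_ipair_grad_trunc_exp_le:
  assumes s: "0 \<le> s"
  shows "AE \<omega> in M. ipair (\<lambda>k. Dk p k (\<lambda>\<omega>. trunc_exp s L (F \<omega>)) \<omega>) (\<lambda>k. - Dk p k H \<omega>)
    \<le> trunc_exp' s L (F \<omega>) * DFH \<omega> + ipair (\<lambda>k. Dk p k (\<lambda>\<omega>. trunc_exp' s L (F \<omega>)) \<omega>) (\<lambda>k. u k \<omega>)"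
  using AE_summable_ipair_grad[OF D12_trunc_exp_comp[OF D12_F s, of L] D12_H] AE_summable_ipair_grad[OF D12_F D12_H]
    integrable_ipair(2)[OF borel_measurable_grad[OF D12_measurable[OF D12_trunc_exp'_comp[OF D12_F s, of L]]]
      borel_measurable_u D12_proc_sqnorm_finite[OF D12_trunc_exp'_comp[OF D12_F s, of L]] proc_sqnorm_u]
proof eventually_elim
  case (elim \<omega>)
  show ?case
    by (rule ipair_le_add) (use elim Dk_trunc_exp_mult_le[OF s] in \<open>simp_all add: abs_mult\<close>)
qed

lemma integral_trunc_exp'_mult_DFH_le:
  assumes s: "0 \<le> s" "s \<le> A"
  shows "(\<integral>\<omega>. trunc_exp' s L (F \<omega>) * DFH \<omega> \<partial>M) \<le> s * (1 + \<gamma>1 s) * mgf s"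
proof -
  have "(\<integral>\<omega>. trunc_exp' s L (F \<omega>) * DFH \<omega> \<partial>M) \<le> (\<integral>\<omega>. s * exp (s * F \<omega>) + s * (\<bar>1 - DFH \<omega>\<bar> * exp (s * F \<omega>)) \<partial>M)"
  proof (rule integral_mono)
    show "integrable M (\<lambda>\<omega>. trunc_exp' s L (F \<omega>) * DFH \<omega>)"
      using s(1) trunc_exp'_nonneg[OF s(1)] trunc_exp'_le_const[OF s(1)] borel_measurable_F
      by (subst mult.commute, intro integrable_mult_bounded[where C="s * exp (s * L)"]
          integrable_ipair_grad_neg_H[OF D12_F] measurable_trunc_exp'_comp) auto
    show "integrable M (\<lambda>\<omega>. s * exp (s * F \<omega>) + s * (\<bar>1 - DFH \<omega>\<bar> * exp (s * F \<omega>)))"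
      using integrable_exp[OF s] \<gamma>1_bound[OF s] by auto
    fix \<omega>
    have "DFH \<omega> \<le> 1 + \<bar>1 - DFH \<omega>\<bar>"
      using abs_ge_minus_self[of "1 - DFH \<omega>"] by linarith
    then have "trunc_exp' s L (F \<omega>) * DFH \<omega> \<le> trunc_exp' s L (F \<omega>) * (1 + \<bar>1 - DFH \<omega>\<bar>)"
      using trunc_exp'_nonneg[OF s(1)] by (rule mult_left_mono)
    also have "\<dots> = trunc_exp' s L (F \<omega>) + trunc_exp' s L (F \<omega>) * \<bar>1 - DFH \<omega>\<bar>"
      by (simp add: distrib_left)
    also have "\<dots> \<le> s * exp (s * F \<omega>) + s * exp (s * F \<omega>) * \<bar>1 - DFH \<omega>\<bar>"
      using trunc_exp'_le_exp[OF s(1)] by (intro add_mono mult_right_mono) auto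
    finally show "trunc_exp' s L (F \<omega>) * DFH \<omega> \<le> s * exp (s * F \<omega>) + s * (\<bar>1 - DFH \<omega>\<bar> * exp (s * F \<omega>))"
      by (simp add: algebra_simps)
  qed
  also have "\<dots> = s * mgf s + s * (\<integral>\<omega>. \<bar>1 - DFH \<omega>\<bar> * exp (s * F \<omega>) \<partial>M)"
    using integrable_exp[OF s] \<gamma>1_bound[OF s] unfolding mgf_def by simp
  also have "\<dots> \<le> s * mgf s + s * (\<gamma>1 s * mgf s)"
    using \<gamma>1_bound[OF s] s unfolding mgf_def by (intro add_left_mono mult_left_mono) auto
  finally show ?thesis by (simp add: algebra_simps)
qed

lemma integral_trunc_exp'_mult_du_le:
  assumes s: "0 \<le> s" "s \<le> A"
  shows "(\<integral>\<omega>. trunc_exp' s L (F \<omega>) * du \<omega> \<partial>M) \<le> s * \<gamma>2 s * mgf s"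
proof -
  have "(\<integral>\<omega>. trunc_exp' s L (F \<omega>) * du \<omega> \<partial>M) \<le> (\<integral>\<omega>. s * (\<bar>du \<omega>\<bar> * exp (s * F \<omega>)) \<partial>M)"
  proof (rule integral_mono)
    show "integrable M (\<lambda>\<omega>. trunc_exp' s L (F \<omega>) * du \<omega>)"
      using s(1) trunc_exp'_nonneg[OF s(1)] trunc_exp'_le_const[OF s(1)] borel_measurable_F
      by (subst mult.commute, intro integrable_mult_bounded[where C="s * exp (s * L)"]
          L2_integrable[OF L2_du] measurable_trunc_exp'_comp) auto
    show "integrable M (\<lambda>\<omega>. s * (\<bar>du \<omega>\<bar> * exp (s * F \<omega>)))"
      using \<gamma>2_bound[OF s] by auto
    fix \<omega>
    have "trunc_exp' s L (F \<omega>) * du \<omega> \<le> trunc_exp' s L (F \<omega>) * \<bar>du \<omega>\<bar>"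
      using trunc_exp'_nonneg[OF s(1)] by (intro mult_left_mono) auto
    also have "\<dots> \<le> s * exp (s * F \<omega>) * \<bar>du \<omega>\<bar>"
      using trunc_exp'_le_exp[OF s(1)] by (intro mult_right_mono) auto
    finally show "trunc_exp' s L (F \<omega>) * du \<omega> \<le> s * (\<bar>du \<omega>\<bar> * exp (s * F \<omega>))"
      by (simp add: algebra_simps)
  qed
  also have "\<dots> \<le> s * (\<gamma>2 s * mgf s)"
    using \<gamma>2_bound[OF s] s unfolding mgf_def by (simp add: mult_left_mono)
  finally show ?thesis by (simp add: algebra_simps)
qed

lemma integral_F_trunc_exp_le:
  assumes s: "0 \<le> s" "s \<le> A"
  shows "(\<integral>\<omega>. F \<omega> * trunc_exp s L (F \<omega>) \<partial>M) \<le> s * (1 + \<gamma>1 s + \<gamma>2 s) * mgf s"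
proof -
  let ?G = "\<lambda>\<omega>. trunc_exp s L (F \<omega>)" and ?G' = "\<lambda>\<omega>. trunc_exp' s L (F \<omega>)"
  have G': "D12 p ?G'"
    by (rule D12_trunc_exp'_comp[OF D12_F s(1)])
  have int_G'_DFH: "integrable M (\<lambda>\<omega>. ?G' \<omega> * DFH \<omega>)"
    using s(1) trunc_exp'_nonneg[OF s(1)] trunc_exp'_le_const[OF s(1)] borel_measurable_F
    by (subst mult.commute, intro integrable_mult_bounded[where C="s * exp (s * L)"]
        integrable_ipair_grad_neg_H[OF D12_F] measurable_trunc_exp'_comp) auto
  have int_G'_u: "integrable M (\<lambda>\<omega>. ipair (\<lambda>k. Dk p k ?G' \<omega>) (\<lambda>k. u k \<omega>))"
    using integrable_ipair(1)[OF borel_measurable_grad[OF D12_measurable[OF G']] borel_measurable_u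
        D12_proc_sqnorm_finite[OF G'] proc_sqnorm_u] .
  have "(\<integral>\<omega>. F \<omega> * ?G \<omega> \<partial>M) = (\<integral>\<omega>. ipair (\<lambda>k. Dk p k ?G \<omega>) (\<lambda>k. - Dk p k H \<omega>) \<partial>M)"
    using Linv_integration_by_parts[OF D12_F Linv_H D12_trunc_exp_comp[OF D12_F s(1)]] mean_F by simp
  also have "\<dots> \<le> (\<integral>\<omega>. ?G' \<omega> * DFH \<omega> + ipair (\<lambda>k. Dk p k ?G' \<omega>) (\<lambda>k. u k \<omega>) \<partial>M)"
    using int_G'_DFH int_G'_u AE_ipair_grad_trunc_exp_le[OF s(1)]
    by (intro integral_mono_AE integrable_ipair_grad_neg_H D12_trunc_exp_comp[OF D12_F s(1)]) auto
  also have "\<dots> = (\<integral>\<omega>. ?G' \<omega> * DFH \<omega> \<partial>M) + (\<integral>\<omega>. ?G' \<omega> * du \<omega> \<partial>M)"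
    using int_G'_DFH int_G'_u u_duality[OF G'] by simp
  also have "\<dots> \<le> s * (1 + \<gamma>1 s) * mgf s + s * \<gamma>2 s * mgf s"
    by (intro add_mono integral_trunc_exp'_mult_DFH_le integral_trunc_exp'_mult_du_le s)
  finally show ?thesis by (simp add: algebra_simps)
qed

lemma integrable_F: "integrable M F"
  using L2_integrable[OF D12_L2[OF D12_F]] .

lemma integrable_abs_F_mult_exp:
  assumes r: "0 \<le> r" "r < A"
  shows "integrable M (\<lambda>\<omega>. \<bar>F \<omega>\<bar> * exp (r * F \<omega>))"
proof (rule Bochner_Integration.integrable_bound[where f="\<lambda>\<omega>. \<bar>F \<omega>\<bar> + exp (A * F \<omega>) / (A - r)"])
  show "integrable M (\<lambda>\<omega>. \<bar>F \<omega>\<bar> + exp (A * F \<omega>) / (A - r))"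
    using integrable_F integrable_exp[of A] A_pos by auto
  show "(\<lambda>\<omega>. \<bar>F \<omega>\<bar> * exp (r * F \<omega>)) \<in> borel_measurable M"
    using borel_measurable_F by measurable
  show "AE \<omega> in M. norm (\<bar>F \<omega>\<bar> * exp (r * F \<omega>)) \<le> norm (\<bar>F \<omega>\<bar> + exp (A * F \<omega>) / (A - r))"
    using abs_mult_exp_le[OF r] r by (intro AE_I2) (simp add: abs_of_nonneg add_nonneg_nonneg)
qed

lemma integral_F_exp_le:
  assumes s: "0 < s" "s < A"
  shows "(\<integral>\<omega>. F \<omega> * exp (s * F \<omega>) \<partial>M) \<le> s * (1 + \<gamma>1 s + \<gamma>2 s) * mgf s"
proof (rule LIMSEQ_le_const2)
  show "(\<lambda>m. \<integral>\<omega>. F \<omega> * trunc_exp s (real m) (F \<omega>) \<partial>M) \<longlonglongrightarrow> (\<integral>\<omega>. F \<omega> * exp (s * F \<omega>) \<partial>M)"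
  proof (rule integral_dominated_convergence[where w="\<lambda>\<omega>. \<bar>F \<omega>\<bar> * exp (s * F \<omega>)"])
    show "(\<lambda>\<omega>. F \<omega> * exp (s * F \<omega>)) \<in> borel_measurable M"
      using borel_measurable_F by measurable
    show "(\<lambda>\<omega>. F \<omega> * trunc_exp s (real m) (F \<omega>)) \<in> borel_measurable M" for m
      using measurable_trunc_exp_comp[OF borel_measurable_F] borel_measurable_F by measurable
    show "integrable M (\<lambda>\<omega>. \<bar>F \<omega>\<bar> * exp (s * F \<omega>))"
      using integrable_abs_F_mult_exp s by auto
    show "AE \<omega> in M. (\<lambda>m. F \<omega> * trunc_exp s (real m) (F \<omega>)) \<longlonglongrightarrow> F \<omega> * exp (s * F \<omega>)"
    proof (intro AE_I2 tendsto_eventually)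
      fix \<omega>
      obtain m0 :: nat where "F \<omega> \<le> real m0" using real_arch_simple by blast
      then show "eventually (\<lambda>m. F \<omega> * trunc_exp s (real m) (F \<omega>) = F \<omega> * exp (s * F \<omega>)) sequentially"
        by (intro eventually_sequentiallyI[of m0]) (auto simp: trunc_exp_def)
    qed
    show "AE \<omega> in M. norm (F \<omega> * trunc_exp s (real m) (F \<omega>)) \<le> \<bar>F \<omega>\<bar> * exp (s * F \<omega>)" for m
      using s trunc_exp_pos[of s] trunc_exp_le_exp[of s]
      by (intro AE_I2) (simp add: abs_mult mult_left_mono less_imp_le)
  qed
qed (use integral_F_trunc_exp_le s in auto)

lemma mgf_tendsto:
  assumes X: "\<And>i. X i \<in> {0..A}" and lim: "X \<longlonglongrightarrow> x"
  shows "(\<lambda>i. mgf (X i)) \<longlonglongrightarrow> mgf x"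
  unfolding mgf_def
proof (rule integral_dominated_convergence[where w="\<lambda>\<omega>. 1 + exp (A * F \<omega>)"])
  show "(\<lambda>\<omega>. exp (x * F \<omega>)) \<in> borel_measurable M"
    using borel_measurable_F by measurable
  show "(\<lambda>\<omega>. exp (X i * F \<omega>)) \<in> borel_measurable M" for i
    using borel_measurable_F by measurable
  show "integrable M (\<lambda>\<omega>. 1 + exp (A * F \<omega>))"
    using integrable_exp[of A] A_pos by auto
  show "AE \<omega> in M. (\<lambda>i. exp (X i * F \<omega>)) \<longlonglongrightarrow> exp (x * F \<omega>)"
    using lim by (intro AE_I2 tendsto_intros) auto
  show "AE \<omega> in M. norm (exp (X i * F \<omega>)) \<le> 1 + exp (A * F \<omega>)" for i
  proof (intro AE_I2)
    fix \<omega>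
    have "exp (X i * F \<omega>) \<le> exp (0 * F \<omega>) + exp (A * F \<omega>)"
      using X[of i] by (intro exp_mult_le_endpoints) auto
    then show "norm (exp (X i * F \<omega>)) \<le> 1 + exp (A * F \<omega>)" by simp
  qed
qed

lemma continuous_on_mgf: "continuous_on {0..A} mgf"
  by (rule continuous_on_sequentiallyI) (use mgf_tendsto in auto)

lemma mgf_0: "mgf 0 = 1"
  unfolding mgf_def using P.prob_space by simp

lemma mgf_ge_1:
  assumes t: "0 \<le> t" "t \<le> A"
  shows "mgf t \<ge> 1"
proof -
  have "(\<integral>\<omega>. 1 + t * F \<omega> \<partial>M) \<le> mgf t"
    unfolding mgf_def using integrable_F integrable_exp[OF t] by (intro integral_mono) (auto simp: exp_ge_add_one_self)
  moreover have "(\<integral>\<omega>. 1 + t * F \<omega> \<partial>M) = 1"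
    using integrable_F mean_F P.prob_space by simp
  ultimately show ?thesis by simp
qed

lemma mgf_pos: "0 \<le> t \<Longrightarrow> t \<le> A \<Longrightarrow> mgf t > 0"
  using mgf_ge_1 by fastforce

lemma mgf_has_derivative:
  assumes s: "0 < s" "s < A"
  shows "(mgf has_real_derivative (\<integral>\<omega>. F \<omega> * exp (s * F \<omega>) \<partial>M)) (at s)"
proof -
  define d where "d = min s (A - s) / 2"
  have d: "d > 0" "0 \<le> s - d" "s + d < A" using s unfolding d_def by (auto simp: min_def field_simps)
  have "(\<lambda>n. (mgf (Y n) - mgf s) / (Y n - s)) \<longlonglongrightarrow> (\<integral>\<omega>. F \<omega> * exp (s * F \<omega>) \<partial>M)"
    if Y: "\<And>n. Y n \<noteq> s" "Y \<longlonglongrightarrow> s" for Y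
  proof -
    obtain N where N: "\<And>n. n \<ge> N \<Longrightarrow> norm (Y n - s) < d" using LIMSEQ_D[OF Y(2) d(1)] by blast
    define Z where "Z n = Y (n + N)" for n
    have Z: "\<And>n. Z n \<noteq> s" "Z \<longlonglongrightarrow> s" "\<And>n. \<bar>Z n - s\<bar> \<le> d"
      using Y N unfolding Z_def by (auto intro: LIMSEQ_ignore_initial_segment less_imp_le)
    have Zin: "0 \<le> Z n" "Z n \<le> A" for n
      using Z(3)[of n] d by (auto simp: abs_le_iff)
    have quotient_eq: "(mgf (Z n) - mgf s) / (Z n - s) = (\<integral>\<omega>. (exp (Z n * F \<omega>) - exp (s * F \<omega>)) / (Z n - s) \<partial>M)" for n
      unfolding mgf_def using integrable_exp[OF Zin[of n]] integrable_exp[of s] s by simp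
    have "(\<lambda>n. \<integral>\<omega>. (exp (Z n * F \<omega>) - exp (s * F \<omega>)) / (Z n - s) \<partial>M) \<longlonglongrightarrow> (\<integral>\<omega>. F \<omega> * exp (s * F \<omega>) \<partial>M)"
    proof (rule integral_dominated_convergence[where w="\<lambda>\<omega>. \<bar>F \<omega>\<bar> * exp ((s - d) * F \<omega>) + \<bar>F \<omega>\<bar> * exp ((s + d) * F \<omega>)"])
      show "(\<lambda>\<omega>. F \<omega> * exp (s * F \<omega>)) \<in> borel_measurable M"
        using borel_measurable_F by measurable
      show "(\<lambda>\<omega>. (exp (Z n * F \<omega>) - exp (s * F \<omega>)) / (Z n - s)) \<in> borel_measurable M" for n
        using borel_measurable_F by measurable
      show "integrable M (\<lambda>\<omega>. \<bar>F \<omega>\<bar> * exp ((s - d) * F \<omega>) + \<bar>F \<omega>\<bar> * exp ((s + d) * F \<omega>))"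
        using integrable_abs_F_mult_exp[of "s - d"] integrable_abs_F_mult_exp[of "s + d"] d by auto
      show "AE \<omega> in M. (\<lambda>n. (exp (Z n * F \<omega>) - exp (s * F \<omega>)) / (Z n - s)) \<longlonglongrightarrow> F \<omega> * exp (s * F \<omega>)"
        using exp_diff_quotient_tendsto[OF Z(1,2)] by simp
      show "AE \<omega> in M. norm ((exp (Z n * F \<omega>) - exp (s * F \<omega>)) / (Z n - s))
          \<le> \<bar>F \<omega>\<bar> * exp ((s - d) * F \<omega>) + \<bar>F \<omega>\<bar> * exp ((s + d) * F \<omega>)" for n
        using abs_exp_diff_quotient_le[OF Z(3) Z(1)] by simp
    qed
    then have "(\<lambda>n. (mgf (Z n) - mgf s) / (Z n - s)) \<longlonglongrightarrow> (\<integral>\<omega>. F \<omega> * exp (s * F \<omega>) \<partial>M)"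
      unfolding quotient_eq .
    then show ?thesis unfolding Z_def by (rule LIMSEQ_offset)
  qed
  then have "((\<lambda>y. (mgf y - mgf s) / (y - s)) \<longlongrightarrow> (\<integral>\<omega>. F \<omega> * exp (s * F \<omega>) \<partial>M)) (at s)"
    by (intro LIMSEQ_SEQ_conv[THEN iffD1]) blast
  then show ?thesis by (simp add: has_field_derivative_iff)
qed

lemma \<gamma>1_nonneg:
  assumes t: "0 \<le> t" "t \<le> A"
  shows "\<gamma>1 t \<ge> 0"
proof -
  have "0 \<le> (\<integral>\<omega>. \<bar>1 - DFH \<omega>\<bar> * exp (t * F \<omega>) \<partial>M)" by simp
  also have "\<dots> \<le> \<gamma>1 t * mgf t" using \<gamma>1_bound[OF t] unfolding mgf_def by simp
  finally show ?thesis using mgf_pos[OF t] by (simp add: zero_le_mult_iff)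
qed

lemma \<gamma>2_nonneg:
  assumes t: "0 \<le> t" "t \<le> A"
  shows "\<gamma>2 t \<ge> 0"
proof -
  have "0 \<le> (\<integral>\<omega>. \<bar>du \<omega>\<bar> * exp (t * F \<omega>) \<partial>M)" by simp
  also have "\<dots> \<le> \<gamma>2 t * mgf t" using \<gamma>2_bound[OF t] unfolding mgf_def by simp
  finally show ?thesis using mgf_pos[OF t] by (simp add: zero_le_mult_iff)
qed

lemma mgf_le_exp:
  assumes t: "0 \<le> t" "t \<le> A"
  shows "mgf t \<le> exp (t\<^sup>2 / 2 * (1 + \<gamma>1 t + \<gamma>2 t))"
proof (cases "t = 0")
  case True then show ?thesis using mgf_0 by simp
next
  case False
  have "mgf t \<le> exp ((1 + \<gamma>1 t + \<gamma>2 t) * t\<^sup>2 / 2)"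
  proof (rule le_exp_sq_of_log_deriv_le)
    show "0 < t" using t False by simp
    show "continuous_on {0..t} mgf" by (rule continuous_on_subset[OF continuous_on_mgf]) (use t in auto)
    show "(mgf has_real_derivative (\<integral>\<omega>. F \<omega> * exp (y * F \<omega>) \<partial>M)) (at y)" if "0 < y" "y < t" for y
      using mgf_has_derivative that t by auto
    show "(\<integral>\<omega>. F \<omega> * exp (y * F \<omega>) \<partial>M) \<le> (1 + \<gamma>1 t + \<gamma>2 t) * y * mgf y" if y: "0 < y" "y < t" for y
    proof -
      have "\<gamma>1 y \<le> \<gamma>1 t" "\<gamma>2 y \<le> \<gamma>2 t"
        using y t by (auto intro: mono_onD[OF mono_\<gamma>1] mono_onD[OF mono_\<gamma>2])
      have "(\<integral>\<omega>. F \<omega> * exp (y * F \<omega>) \<partial>M) \<le> y * (1 + \<gamma>1 y + \<gamma>2 y) * mgf y"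
        using y t by (intro integral_F_exp_le) auto
      also have "\<dots> \<le> (1 + \<gamma>1 t + \<gamma>2 t) * y * mgf y"
        using \<open>\<gamma>1 y \<le> \<gamma>1 t\<close> \<open>\<gamma>2 y \<le> \<gamma>2 t\<close> y t mgf_pos[of y]
        by (simp add: mult.commute mult_left_mono)
      finally show ?thesis .
    qed
  qed (use mgf_pos mgf_0 t in auto)
  then show ?thesis by (simp add: algebra_simps)
qed

lemma mgf_le_exp_d0_below:
  assumes y: "0 \<le> y" "y \<le> s" and s: "s \<le> A" "s\<^sup>2 / 2 * (\<gamma>1 s + \<gamma>2 s) \<le> d0"
  shows "mgf y \<le> exp d0 * exp (y\<^sup>2 / 2)"
proof -
  have yA: "y \<le> A" using y s by simp
  have "y\<^sup>2 / 2 \<le> s\<^sup>2 / 2"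
    using y by (simp add: power_mono)
  moreover have "\<gamma>1 y + \<gamma>2 y \<le> \<gamma>1 s + \<gamma>2 s"
    using y s by (intro add_mono mono_onD[OF mono_\<gamma>1] mono_onD[OF mono_\<gamma>2]) auto
  moreover have "0 \<le> \<gamma>1 y + \<gamma>2 y"
    using \<gamma>1_nonneg[OF y(1) yA] \<gamma>2_nonneg[OF y(1) yA] by simp
  ultimately have "y\<^sup>2 / 2 * (\<gamma>1 y + \<gamma>2 y) \<le> s\<^sup>2 / 2 * (\<gamma>1 s + \<gamma>2 s)"
    by (intro mult_mono) auto
  then have "y\<^sup>2 / 2 * (1 + \<gamma>1 y + \<gamma>2 y) \<le> d0 + y\<^sup>2 / 2"
    using s by (simp add: algebra_simps)
  then have "exp (y\<^sup>2 / 2 * (1 + \<gamma>1 y + \<gamma>2 y)) \<le> exp d0 * exp (y\<^sup>2 / 2)"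
    by (simp add: exp_add[symmetric])
  with mgf_le_exp[OF y(1) yA] show ?thesis by (rule order_trans)
qed

lemma mgf_le_exp_d0:
  assumes d0: "0 \<le> d0" and t: "0 \<le> t" and tS: "t \<le> Sup {s. 0 \<le> s \<and> s \<le> A \<and> s\<^sup>2 / 2 * (\<gamma>1 s + \<gamma>2 s) \<le> d0}"
  shows "mgf t \<le> exp d0 * exp (t\<^sup>2 / 2)"
proof -
  define S0 where "S0 = {s. 0 \<le> s \<and> s \<le> A \<and> s\<^sup>2 / 2 * (\<gamma>1 s + \<gamma>2 s) \<le> d0}"
  have "0 \<in> S0" using d0 A_pos unfolding S0_def by auto
  have below: "mgf y \<le> exp d0 * exp (y\<^sup>2 / 2)" if y: "0 \<le> y" "y < Sup S0" for y
  proof -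
    obtain s where "s \<in> S0" "y < s" using less_cSupE[OF y(2)] \<open>0 \<in> S0\<close> by blast
    then show ?thesis using y by (intro mgf_le_exp_d0_below[of y s]) (auto simp: S0_def)
  qed
  show ?thesis
  proof (cases "t < Sup S0 \<or> t = 0")
    case True
    then show ?thesis using below t mgf_0 d0 by auto
  next
    case False
    then have t_eq: "t = Sup S0" and "0 < t" using t tS unfolding S0_def by auto
    have "Sup S0 \<le> A"
      using \<open>0 \<in> S0\<close> unfolding S0_def by (intro cSup_least) auto
    show ?thesis
    proof (rule le_at_right_endpoint[where a=0 and f=mgf and g="\<lambda>y. exp d0 * exp (y\<^sup>2 / 2)"])
      show "continuous_on {0..t} mgf"
        using \<open>Sup S0 \<le> A\<close> t_eq by (intro continuous_on_subset[OF continuous_on_mgf]) auto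
      show "continuous_on {0..t} (\<lambda>y. exp d0 * exp (y\<^sup>2 / 2))"
        by (intro continuous_intros) auto
    qed (use \<open>0 < t\<close> below t_eq in auto)
  qed
qed

end

theorem lemma3p3:
  fixes p :: "nat \<Rightarrow> real"
    and F H du :: "(nat \<Rightarrow> bool) \<Rightarrow> real"
    and A :: real
    and \<gamma>1 \<gamma>2 :: "real \<Rightarrow> real"
  assumes p: "\<And>k. 0 < p k \<and> p k < 1"
    and F: "D12 p F"
    and mean: "(\<integral>\<omega>. F \<omega> \<partial>Mrad p) = 0"
    and var: "(\<integral>\<omega>. (F \<omega>)\<^sup>2 \<partial>Mrad p) = 1"
    and fzF: "\<And>z. D12 p (\<lambda>\<omega>. F \<omega> * fz z (F \<omega>) + (if F \<omega> > z then 1 else 0))"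
    and H: "Linv p F H"
    and u: "div_rel p (\<lambda>k \<omega>. (1 / sqrt (p k * (1 - p k))) * Dk p k F \<omega> * \<bar>Dk p k H \<omega>\<bar>) du"
    and A: "A > 0"
    and mono1: "mono_on {0..A} \<gamma>1"
    and mono2: "mono_on {0..A} \<gamma>2"
    and mgf: "\<And>t. 0 \<le> t \<Longrightarrow> t \<le> A \<Longrightarrow> integrable (Mrad p) (\<lambda>\<omega>. exp (t * F \<omega>))"
    and h1: "\<And>t. 0 \<le> t \<Longrightarrow> t \<le> A \<Longrightarrow>
       integrable (Mrad p) (\<lambda>\<omega>. \<bar>1 - ipair (\<lambda>k. Dk p k F \<omega>) (\<lambda>k. - Dk p k H \<omega>)\<bar> * exp (t * F \<omega>)) \<and>
       (\<integral>\<omega>. \<bar>1 - ipair (\<lambda>k. Dk p k F \<omega>) (\<lambda>k. - Dk p k H \<omega>)\<bar> * exp (t * F \<omega>) \<partial>Mrad p)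
         \<le> \<gamma>1 t * (\<integral>\<omega>. exp (t * F \<omega>) \<partial>Mrad p)"
    and h2: "\<And>t. 0 \<le> t \<Longrightarrow> t \<le> A \<Longrightarrow>
       integrable (Mrad p) (\<lambda>\<omega>. \<bar>du \<omega>\<bar> * exp (t * F \<omega>)) \<and>
       (\<integral>\<omega>. \<bar>du \<omega>\<bar> * exp (t * F \<omega>) \<partial>Mrad p) \<le> \<gamma>2 t * (\<integral>\<omega>. exp (t * F \<omega>) \<partial>Mrad p)"
  shows "(\<forall>t. 0 \<le> t \<and> t \<le> A \<longrightarrow>
            (\<integral>\<omega>. exp (t * F \<omega>) \<partial>Mrad p) \<le> exp (t\<^sup>2 / 2 * (1 + \<gamma>1 t + \<gamma>2 t))) \<and>
         (\<forall>d0 t. 0 \<le> d0 \<and> 0 \<le> t \<and>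
            t \<le> Sup {s. 0 \<le> s \<and> s \<le> A \<and> s\<^sup>2 / 2 * (\<gamma>1 s + \<gamma>2 s) \<le> d0} \<longrightarrow>
            (\<integral>\<omega>. exp (t * F \<omega>) \<partial>Mrad p) \<le> exp d0 * exp (t\<^sup>2 / 2))"
proof -
  interpret mgf_setting p F H du A \<gamma>1 \<gamma>2
    by unfold_locales (use p F mean H u A mono1 mono2 mgf h1 h2 in auto)
  show ?thesis
    using mgf_le_exp mgf_le_exp_d0 unfolding mgf_def by auto
qed

end
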